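(* In $\mathcal{H}eis_k$, with $\tau,s',c',d'$ as in the context, the following relations hold: $(d'\otimes 1_\uparrow)\circ(1_\downarrow\otimes s)=(1_\uparrow\otimes d')\circ(\tau\otimes 1_\uparrow)$ (as morphisms $\downarrow\otimes\uparrow\otimes\uparrow\to\uparrow$), $(1_\downarrow\otimes d')\circ(s'\otimes 1_\uparrow)=(d'\otimes 1_\downarrow)\circ(1_\downarrow\otimes\tau)$ (as morphisms $\downarrow\otimes\downarrow\otimes\uparrow\to\downarrow$), $(s\otimes 1_\downarrow)\circ(1_\uparrow\otimes c')=(1_\uparrow\otimes\tau)\circ(c'\otimes 1_\uparrow)$ (as morphisms $\uparrow\to\uparrow\otimes\uparrow\otimes\downarrow$), $(1_\uparrow\otimes s')\circ(c'\otimes 1_\downarrow)=(\tau\otimes 1_\downarrow)\circ(1_\downarrow\otimes c')$ (as morphisms $\downarrow\to\uparrow\otimes\downarrow\otimes\downarrow$).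
   Context: Fix a commutative ring $\Bbbk$ and an integer $k$. In a strict monoidal category write $\mathbf 1$ for the unit object, $1_X$ for the identity, $a\circ b$ for composition, $a\otimes b$ for tensor product, $x^n$ for the $n$-fold composite. The Heisenberg category $\mathcal{H}eis_k$ is the strict $\Bbbk$-linear monoidal category generated by objects $\uparrow,\downarrow$ and morphisms $x:\uparrow\to\uparrow$, $s:\uparrow\otimes\uparrow\to\uparrow\otimes\uparrow$, $c:\mathbf 1\to\downarrow\otimes\uparrow$, $d:\uparrow\otimes\downarrow\to\mathbf 1$, subject to the following relations, where $t:=(1_\downarrow\otimes 1_\uparrow\otimes d)\circ(1_\downarrow\otimes s\otimes 1_\downarrow)\circ(c\otimes 1_\uparrow\otimes 1_\downarrow):\uparrow\otimes\downarrow\to\downarrow\otimes\uparrow$: (H) $s\circ s=1_{\uparrow\otimes\uparrow}$; $(s\otimes 1_\uparrow)\circ(1_\uparrow\otimes s)\circ(s\otimes 1_\uparrow)=(1_\uparrow\otimes s)\circ(s\otimes 1_\uparrow)\circ(1_\uparrow\otimes s)$; $(x\otimes 1_\uparrow)\circ s-s\circ(1_\uparrow\otimes x)=1_{\uparrow\otimes\uparrow}$. (A) $(d\otimes 1_\uparrow)\circ(1_\uparrow\otimes c)=1_\uparrow$ and $(1_\downarrow\otimes d)\circ(c\otimes 1_\downarrow)=1_\downarrow$. (I) If $k\ge0$, the morphism $\uparrow\otimes\downarrow\to(\downarrow\otimes\uparrow)\oplus\mathbf 1^{\oplus k}$ with components $t$ and $d\circ(x^r\otimes 1_\downarrow)$,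 $r=0,\dots,k-1$, is an isomorphism in the additive envelope; if $k<0$, the morphism $(\uparrow\otimes\downarrow)\oplus\mathbf 1^{\oplus(-k)}\to\downarrow\otimes\uparrow$ with components $t$ and $(1_\downarrow\otimes x^r)\circ c$, $r=0,\dots,-k-1$, is an isomorphism in the additive envelope (formally, the entries of a two-sided inverse matrix are adjoined as generators). If $k\ge0$ the inverse in (I) has components $\tau:\downarrow\otimes\uparrow\to\uparrow\otimes\downarrow$ and $e_r:\mathbf 1\to\uparrow\otimes\downarrow$ ($0\le r<k$); if $k<0$ it has components $\tau:\downarrow\otimes\uparrow\to\uparrow\otimes\downarrow$ and $f_r:\downarrow\otimes\uparrow\to\mathbf 1$ ($0\le r<-k$). Set $c':=-e_{k-1}$ if $k>0$, $c':=\tau\circ(1_\downarrow\otimes x^{-k})\circ c$ if $k\le0$; $d':=d\circ(x^k\otimes1_\downarrow)\circ\tau$ if $k\ge0$, $d':=f_{-k-1}$ if $k<0$. Let $s':=(1_\downarrow\otimes 1_\downarrow\otimes d)\circ(1_\downarrow\otimes t\otimes 1_\downarrow)\circ(c\otimes 1_\downarrow\otimes 1_\downarrow):\downarrow\otimes\downarrow\to\downarrow\otimes\downarrow$. *)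

theory Defs
  imports Main
begin

text \<open>
  A strict \<open>\<Bbbk>\<close>-linear monoidal category whose object monoid is the free monoid
  on the two generating objects up (encoded as True) and down (encoded as False):
  objects are words (bool lists), the unit object is the empty word and the tensor
  product of objects is concatenation.  Morphisms live in an ambient type 'm;
  Hom a b is the hom-set, which carries a \<open>\<Bbbk>\<close>-module structure
  (addition add, scalar multiplication smul, zero zer a b).
  cmp g f is the composite g o f, tns f g the tensor product f \<otimes> g.
\<close>

record ('k, 'm) lmc =
  Hom  :: "bool list \<Rightarrow> bool list \<Rightarrow> 'm set"
  cmp  :: "'m \<Rightarrow> 'm \<Rightarrow> 'm"
  tns  :: "'m \<Rightarrow> 'm \<Rightarrow> 'm"
  idm  :: "bool list \<Rightarrow> 'm"
  add  :: "'m \<Rightarrow> 'm \<Rightarrow> 'm"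
  smul :: "'k \<Rightarrow> 'm \<Rightarrow> 'm"
  zer  :: "bool list \<Rightarrow> bool list \<Rightarrow> 'm"

abbreviation UP :: "bool list" where "UP \<equiv> [True]"
abbreviation DN :: "bool list" where "DN \<equiv> [False]"

definition slmc :: "('k::comm_ring_1, 'm) lmc \<Rightarrow> bool" where
  "slmc C \<longleftrightarrow>
    \<comment> \<open>category\<close>
    (\<forall>a. idm C a \<in> Hom C a a) \<and>
    (\<forall>a b e f g. f \<in> Hom C a b \<longrightarrow> g \<in> Hom C b e \<longrightarrow> cmp C g f \<in> Hom C a e) \<and>
    (\<forall>a b f. f \<in> Hom C a b \<longrightarrow> cmp C (idm C b) f = f \<and> cmp C f (idm C a) = f) \<and>
    (\<forall>a b e w f g h. f \<in> Hom C a b \<longrightarrow> g \<in> Hom C b e \<longrightarrow> h \<in> Hom C e w \<longrightarrow>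
        cmp C h (cmp C g f) = cmp C (cmp C h g) f) \<and>
    \<comment> \<open>strict monoidal structure\<close>
    (\<forall>a b e w f g. f \<in> Hom C a b \<longrightarrow> g \<in> Hom C e w \<longrightarrow> tns C f g \<in> Hom C (a @ e) (b @ w)) \<and>
    (\<forall>a b e w u v f g h. f \<in> Hom C a b \<longrightarrow> g \<in> Hom C e w \<longrightarrow> h \<in> Hom C u v \<longrightarrow>
        tns C (tns C f g) h = tns C f (tns C g h)) \<and>
    (\<forall>a b f. f \<in> Hom C a b \<longrightarrow> tns C (idm C []) f = f \<and> tns C f (idm C []) = f) \<and>
    (\<forall>a b. idm C (a @ b) = tns C (idm C a) (idm C b)) \<and>
    (\<forall>a b e a' b' e' f g f' g'. f \<in> Hom C a b \<longrightarrow> f' \<in> Hom C b e \<longrightarrow>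
        g \<in> Hom C a' b' \<longrightarrow> g' \<in> Hom C b' e' \<longrightarrow>
        cmp C (tns C f' g') (tns C f g) = tns C (cmp C f' f) (cmp C g' g)) \<and>
    \<comment> \<open>each hom-set is a \<open>\<Bbbk>\<close>-module\<close>
    (\<forall>a b. zer C a b \<in> Hom C a b) \<and>
    (\<forall>a b f g. f \<in> Hom C a b \<longrightarrow> g \<in> Hom C a b \<longrightarrow> add C f g \<in> Hom C a b) \<and>
    (\<forall>a b r f. f \<in> Hom C a b \<longrightarrow> smul C r f \<in> Hom C a b) \<and>
    (\<forall>a b f g h. f \<in> Hom C a b \<longrightarrow> g \<in> Hom C a b \<longrightarrow> h \<in> Hom C a b \<longrightarrow>
        add C (add C f g) h = add C f (add C g h)) \<and>
    (\<forall>a b f g. f \<in> Hom C a b \<longrightarrow> g \<in> Hom C a b \<longrightarrow> add C f g = add C g f) \<and>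
    (\<forall>a b f. f \<in> Hom C a b \<longrightarrow> add C (zer C a b) f = f) \<and>
    (\<forall>a b f. f \<in> Hom C a b \<longrightarrow> (\<exists>g \<in> Hom C a b. add C f g = zer C a b)) \<and>
    (\<forall>a b f. f \<in> Hom C a b \<longrightarrow> smul C 1 f = f) \<and>
    (\<forall>a b r q f. f \<in> Hom C a b \<longrightarrow> smul C (r * q) f = smul C r (smul C q f)) \<and>
    (\<forall>a b r q f. f \<in> Hom C a b \<longrightarrow> smul C (r + q) f = add C (smul C r f) (smul C q f)) \<and>
    (\<forall>a b r f g. f \<in> Hom C a b \<longrightarrow> g \<in> Hom C a b \<longrightarrow>
        smul C r (add C f g) = add C (smul C r f) (smul C r g)) \<and>
    \<comment> \<open>composition is bilinear\<close>
    (\<forall>a b e f g g'. f \<in> Hom C a b \<longrightarrow> g \<in> Hom C b e \<longrightarrow> g' \<in> Hom C b e \<longrightarrow>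
        cmp C (add C g g') f = add C (cmp C g f) (cmp C g' f)) \<and>
    (\<forall>a b e f f' g. f \<in> Hom C a b \<longrightarrow> f' \<in> Hom C a b \<longrightarrow> g \<in> Hom C b e \<longrightarrow>
        cmp C g (add C f f') = add C (cmp C g f) (cmp C g f')) \<and>
    (\<forall>a b e r f g. f \<in> Hom C a b \<longrightarrow> g \<in> Hom C b e \<longrightarrow>
        cmp C (smul C r g) f = smul C r (cmp C g f) \<and> cmp C g (smul C r f) = smul C r (cmp C g f)) \<and>
    \<comment> \<open>tensor product is bilinear\<close>
    (\<forall>a b e w f f' g. f \<in> Hom C a b \<longrightarrow> f' \<in> Hom C a b \<longrightarrow> g \<in> Hom C e w \<longrightarrow>
        tns C (add C f f') g = add C (tns C f g) (tns C f' g)) \<and>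
    (\<forall>a b e w f g g'. f \<in> Hom C a b \<longrightarrow> g \<in> Hom C e w \<longrightarrow> g' \<in> Hom C e w \<longrightarrow>
        tns C f (add C g g') = add C (tns C f g) (tns C f g')) \<and>
    (\<forall>a b e w r f g. f \<in> Hom C a b \<longrightarrow> g \<in> Hom C e w \<longrightarrow>
        tns C (smul C r f) g = smul C r (tns C f g) \<and> tns C f (smul C r g) = smul C r (tns C f g))"

fun mpow :: "('k, 'm) lmc \<Rightarrow> bool list \<Rightarrow> 'm \<Rightarrow> nat \<Rightarrow> 'm" where
  "mpow C a f 0 = idm C a"
| "mpow C a f (Suc n) = cmp C f (mpow C a f n)"

fun hsum :: "('k, 'm) lmc \<Rightarrow> bool list \<Rightarrow> bool list \<Rightarrow> (nat \<Rightarrow> 'm) \<Rightarrow> nat \<Rightarrow> 'm" where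
  "hsum C a b g 0 = zer C a b"
| "hsum C a b g (Suc n) = add C (hsum C a b g n) (g n)"

definition heis_t :: "('k, 'm) lmc \<Rightarrow> 'm \<Rightarrow> 'm \<Rightarrow> 'm \<Rightarrow> 'm" where
  "heis_t C s c d =
     cmp C (tns C (tns C (idm C DN) (idm C UP)) d)
       (cmp C (tns C (tns C (idm C DN) s) (idm C DN))
              (tns C (tns C c (idm C UP)) (idm C DN)))"

text \<open>Relations (H), (A) and (I) of the Heisenberg category Heis_k, for generators
  x, s, c, d, together with the components of the inverse in (I):
  tau and e r (0 <= r < k) if k >= 0, tau and f r (0 <= r < -k) if k < 0.\<close>
definition heis_rels ::
  "('k::comm_ring_1, 'm) lmc \<Rightarrow> int \<Rightarrow> 'm \<Rightarrow> 'm \<Rightarrow> 'm \<Rightarrow> 'm \<Rightarrow> 'm \<Rightarrow>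
   (nat \<Rightarrow> 'm) \<Rightarrow> (nat \<Rightarrow> 'm) \<Rightarrow> bool" where
  "heis_rels C k x s c d tau e f \<longleftrightarrow>
    x \<in> Hom C UP UP \<and> s \<in> Hom C (UP @ UP) (UP @ UP) \<and>
    c \<in> Hom C [] (DN @ UP) \<and> d \<in> Hom C (UP @ DN) [] \<and>
    \<comment> \<open>(H)\<close>
    cmp C s s = idm C (UP @ UP) \<and>
    cmp C (tns C s (idm C UP)) (cmp C (tns C (idm C UP) s) (tns C s (idm C UP))) =
      cmp C (tns C (idm C UP) s) (cmp C (tns C s (idm C UP)) (tns C (idm C UP) s)) \<and>
    cmp C (tns C x (idm C UP)) s =
      add C (idm C (UP @ UP)) (cmp C s (tns C (idm C UP) x)) \<and>
    \<comment> \<open>(A)\<close>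
    cmp C (tns C d (idm C UP)) (tns C (idm C UP) c) = idm C UP \<and>
    cmp C (tns C (idm C DN) d) (tns C c (idm C DN)) = idm C DN \<and>
    \<comment> \<open>(I)\<close>
    tau \<in> Hom C (DN @ UP) (UP @ DN) \<and>
    (let t = heis_t C s c d in
     if 0 \<le> k then
       (\<forall>r < nat k. e r \<in> Hom C [] (UP @ DN)) \<and>
       add C (cmp C tau t)
         (hsum C (UP @ DN) (UP @ DN)
            (\<lambda>r. cmp C (e r) (cmp C d (tns C (mpow C UP x r) (idm C DN)))) (nat k))
         = idm C (UP @ DN) \<and>
       cmp C t tau = idm C (DN @ UP) \<and>
       (\<forall>r < nat k. cmp C t (e r) = zer C [] (DN @ UP)) \<and>
       (\<forall>r < nat k. cmp C (cmp C d (tns C (mpow C UP x r) (idm C DN))) tau = zer C (DN @ UP) []) \<and>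
       (\<forall>r < nat k. \<forall>r' < nat k.
          cmp C (cmp C d (tns C (mpow C UP x r) (idm C DN))) (e r') =
            (if r = r' then idm C [] else zer C [] []))
     else
       (\<forall>r < nat (-k). f r \<in> Hom C (DN @ UP) []) \<and>
       add C (cmp C t tau)
         (hsum C (DN @ UP) (DN @ UP)
            (\<lambda>r. cmp C (cmp C (tns C (idm C DN) (mpow C UP x r)) c) (f r)) (nat (-k)))
         = idm C (DN @ UP) \<and>
       cmp C tau t = idm C (UP @ DN) \<and>
       (\<forall>r < nat (-k). cmp C tau (cmp C (tns C (idm C DN) (mpow C UP x r)) c) = zer C [] (UP @ DN)) \<and>
       (\<forall>r < nat (-k). cmp C (f r) t = zer C (UP @ DN) []) \<and>
       (\<forall>r < nat (-k). \<forall>r' < nat (-k).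
          cmp C (f r) (cmp C (tns C (idm C DN) (mpow C UP x r')) c) =
            (if r = r' then idm C [] else zer C [] [])))"

definition heis_c' :: "('k::comm_ring_1, 'm) lmc \<Rightarrow> int \<Rightarrow> 'm \<Rightarrow> 'm \<Rightarrow> 'm \<Rightarrow> (nat \<Rightarrow> 'm) \<Rightarrow> 'm" where
  "heis_c' C k x c tau e =
     (if 0 < k then smul C (-1) (e (nat k - 1))
      else cmp C tau (cmp C (tns C (idm C DN) (mpow C UP x (nat (-k)))) c))"

definition heis_d' :: "('k, 'm) lmc \<Rightarrow> int \<Rightarrow> 'm \<Rightarrow> 'm \<Rightarrow> 'm \<Rightarrow> (nat \<Rightarrow> 'm) \<Rightarrow> 'm" where
  "heis_d' C k x d tau f =
     (if 0 \<le> k then cmp C d (cmp C (tns C (mpow C UP x (nat k)) (idm C DN)) tau)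
      else f (nat (-k) - 1))"

definition heis_s' :: "('k, 'm) lmc \<Rightarrow> 'm \<Rightarrow> 'm \<Rightarrow> 'm \<Rightarrow> 'm" where
  "heis_s' C s c d =
     cmp C (tns C (tns C (idm C DN) (idm C DN)) d)
       (cmp C (tns C (tns C (idm C DN) (heis_t C s c d)) (idm C DN))
              (tns C (tns C c (idm C DN)) (idm C DN)))"

end

theory Submission
  imports Defs
begin

text \<open>
  Once \<open>c'\<close> and
  \<open>d'\<close> satisfy the zigzag identities, each relation for \<open>d'\<close> is
  equivalent to the corresponding one for \<open>c'\<close> by bending strands, so it suffices to
  prove two of them together with the zigzag identities. For \<open>k > 0\<close> one works with
  \<open>c' = -e\<^sub>k\<^sub>-\<^sub>1\<close>, for \<open>k < 0\<close> with \<open>d' =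
  f\<^sub>-\<^sub>k\<^sub>-\<^sub>1\<close>. Two morphisms are shown to agree by composing them
  with \<open>t\<close> and with the dotted caps (or cups) which, by the inversion relation (I),
  together have a one-sided inverse; the resulting diagrams are simplified by the pitchfork
  relations derived from the zigzag identities, by the orthogonality relations of (I), and by
  sliding dots through crossings, which only produces terms with fewer dots.

  A typed morphism \<open>(a, b, f)\<close> records
  the source \<open>a\<close> and target \<open>b\<close> of \<open>f\<close>; a layer \<open>(a,
  F, b)\<close> stands for \<open>1\<^sub>a \<otimes> F \<otimes> 1\<^sub>b\<close>, and
  \<open>chain p [l\<^sub>n, \<dots>, l\<^sub>1]\<close> for the composite \<open>l\<^sub>n
  \<circ> \<dots> \<circ> l\<^sub>1\<close> with source \<open>p\<close>.
\<close>

abbreviation U :: bool where "U \<equiv> True"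
abbreviation D :: bool where "D \<equiv> False"

type_synonym 'm arr = "bool list \<times> bool list \<times> 'm"
type_synonym 'm layer = "bool list \<times> 'm arr \<times> bool list"

definition src :: "'m arr \<Rightarrow> bool list" where "src F = fst F"
definition tgt :: "'m arr \<Rightarrow> bool list" where "tgt F = fst (snd F)"
definition mor :: "'m arr \<Rightarrow> 'm" where "mor F = snd (snd F)"

lemma src_tgt_mor_simps[simp]: "src (a,b,f) = a" "tgt (a,b,f) = b" "mor (a,b,f) = f"
  by (simp_all add: src_def tgt_def mor_def)

lemma arr_eq: "F = G \<longleftrightarrow> src F = src G \<and> tgt F = tgt G \<and> mor F = mor G"
  by (cases F; cases G; auto)

fun whisker :: "bool list \<Rightarrow> bool list \<Rightarrow> 'm layer \<Rightarrow> 'm layer"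
  where
  "whisker a b (a', F, b') = (a @ a', F, b' @ b)"

lemma whisker_whisker[simp]: "whisker a b (whisker a' b' l) = whisker (a @ a') (b' @ b) l"
  by (cases l) auto

lemma whisker_comp_whisker[simp]: "whisker a b \<circ> whisker a' b' = whisker (a @ a') (b' @ b)"
  by (rule ext) simp

fun layer_src :: "'m layer \<Rightarrow> bool list" where "layer_src (a,F,b) = a @ src F @ b"
fun layer_tgt :: "'m layer \<Rightarrow> bool list" where "layer_tgt (a,F,b) = a @ tgt F @ b"

fun chain_tgt :: "bool list \<Rightarrow> 'm layer list \<Rightarrow> bool list" where
  "chain_tgt p [] = p" | "chain_tgt p (l # ls) = layer_tgt l"

lemma chain_tgt_append[simp]: "chain_tgt p (xs @ ys) = chain_tgt (chain_tgt p ys) xs"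
  by (cases xs) auto

locale slmc_cat = fixes C :: "('k::comm_ring_1, 'm) lmc" assumes slmc: "slmc C"
begin

lemmas slmc_axioms = slmc[unfolded slmc_def]

lemma hom_idm: "idm C a \<in> Hom C a a" using slmc_axioms by meson
lemma hom_cmp: "f \<in> Hom C a b \<Longrightarrow> g \<in> Hom C b e
    \<Longrightarrow> cmp C g f \<in> Hom C a e"
  using slmc_axioms by meson
lemma cmp_idm_left: "f \<in> Hom C a b \<Longrightarrow> cmp C (idm C b) f = f"
  using slmc_axioms by meson
lemma cmp_idm_right: "f \<in> Hom C a b \<Longrightarrow> cmp C f (idm C a) = f"
  using slmc_axioms by meson
lemma cmp_assoc: "f \<in> Hom C a b \<Longrightarrow> g \<in> Hom C b e
    \<Longrightarrow> h \<in> Hom C e w \<Longrightarrow>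
        cmp C h (cmp C g f) = cmp C (cmp C h g) f"
  using slmc_axioms by meson
lemma hom_tns: "f \<in> Hom C a b \<Longrightarrow> g \<in> Hom C e w
    \<Longrightarrow> tns C f g \<in> Hom C (a @ e) (b @ w)"
  using slmc_axioms by meson
lemma tns_assoc: "f \<in> Hom C a b \<Longrightarrow> g \<in> Hom C e w
    \<Longrightarrow> h \<in> Hom C u v \<Longrightarrow>
        tns C (tns C f g) h = tns C f (tns C g h)"
  using slmc_axioms by meson
lemma tns_unit_left: "f \<in> Hom C a b \<Longrightarrow> tns C (idm C []) f = f"
  using slmc_axioms by meson
lemma tns_unit_right: "f \<in> Hom C a b \<Longrightarrow> tns C f (idm C []) = f"
  using slmc_axioms by meson
lemma idm_append: "idm C (a @ b) = tns C (idm C a) (idm C b)"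
  using slmc_axioms by meson
lemma tns_cmp_interchange: "f \<in> Hom C a b \<Longrightarrow> f' \<in> Hom C b e \<Longrightarrow>
        g \<in> Hom C a' b' \<Longrightarrow> g' \<in> Hom C b' e' \<Longrightarrow>
        cmp C (tns C f' g') (tns C f g) = tns C (cmp C f' f) (cmp C g' g)"
  using slmc_axioms by meson
lemma hom_zer: "zer C a b \<in> Hom C a b"
  using slmc_axioms by meson
lemma hom_add: "f \<in> Hom C a b \<Longrightarrow> g \<in> Hom C a b
    \<Longrightarrow> add C f g \<in> Hom C a b"
  using slmc_axioms by meson
lemma hom_smul: "f \<in> Hom C a b \<Longrightarrow> smul C r f \<in> Hom C a b"
  using slmc_axioms by meson
lemma add_assoc_Hom: "f \<in> Hom C a b \<Longrightarrow> g \<in> Hom C a b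
    \<Longrightarrow> h \<in> Hom C a b \<Longrightarrow>
        add C (add C f g) h = add C f (add C g h)"
  using slmc_axioms by meson
lemma add_commute_Hom: "f \<in> Hom C a b \<Longrightarrow> g \<in> Hom C a b
    \<Longrightarrow> add C f g = add C g f"
  using slmc_axioms by meson
lemma zer_add_Hom: "f \<in> Hom C a b \<Longrightarrow> add C (zer C a b) f = f"
  using slmc_axioms by meson
lemma add_inverse_Hom: "f \<in> Hom C a b
    \<Longrightarrow> (\<exists>g \<in> Hom C a b. add C f g = zer C a b)"
  using slmc_axioms by meson
lemma smul_one_Hom: "f \<in> Hom C a b \<Longrightarrow> smul C 1 f = f"
  using slmc_axioms by meson
lemma smul_plus_Hom: "f \<in> Hom C a b \<Longrightarrow> smul C (r + q) f =
    add C (smul C r f) (smul C q f)"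
  using slmc_axioms by meson
lemma cmp_add_left: "f \<in> Hom C a b \<Longrightarrow> g \<in> Hom C b e
    \<Longrightarrow> g' \<in> Hom C b e \<Longrightarrow>
        cmp C (add C g g') f = add C (cmp C g f) (cmp C g' f)"
  using slmc_axioms by meson
lemma cmp_add_right: "f \<in> Hom C a b \<Longrightarrow> f' \<in> Hom C a b
    \<Longrightarrow> g \<in> Hom C b e \<Longrightarrow>
        cmp C g (add C f f') = add C (cmp C g f) (cmp C g f')"
  using slmc_axioms by meson
lemma cmp_smul_left: "f \<in> Hom C a b \<Longrightarrow> g \<in> Hom C b e \<Longrightarrow>
        cmp C (smul C r g) f = smul C r (cmp C g f)"
  using slmc_axioms by meson
lemma cmp_smul_right: "f \<in> Hom C a b \<Longrightarrow> g \<in> Hom C b e \<Longrightarrow>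
        cmp C g (smul C r f) = smul C r (cmp C g f)"
  using slmc_axioms by meson
lemma tns_add_left: "f \<in> Hom C a b \<Longrightarrow> f' \<in> Hom C a b
    \<Longrightarrow> g \<in> Hom C e w \<Longrightarrow>
        tns C (add C f f') g = add C (tns C f g) (tns C f' g)"
  using slmc_axioms by meson
lemma tns_add_right: "f \<in> Hom C a b \<Longrightarrow> g \<in> Hom C e w
    \<Longrightarrow> g' \<in> Hom C e w \<Longrightarrow>
        tns C f (add C g g') = add C (tns C f g) (tns C f g')"
  using slmc_axioms by meson
lemma tns_smul_left: "f \<in> Hom C a b \<Longrightarrow> g \<in> Hom C e w \<Longrightarrow>
        tns C (smul C r f) g = smul C r (tns C f g)"
  using slmc_axioms by meson
lemma tns_smul_right: "f \<in> Hom C a b \<Longrightarrow> g \<in> Hom C e w \<Longrightarrow>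
        tns C f (smul C r g) = smul C r (tns C f g)"
  using slmc_axioms by meson

lemma add_zer_Hom: "f \<in> Hom C a b \<Longrightarrow> add C f (zer C a b) = f"
  using zer_add_Hom[of f a b] add_commute_Hom[of f a b "zer C a b"] hom_zer[of a b] by simp

lemma add_left_cancel_Hom: assumes "f \<in> Hom C a b" "g \<in> Hom C a b" "h \<in> Hom C a b"
  and "add C h f = add C h g" shows "f = g"
proof -
  obtain n where n: "n \<in> Hom C a b" "add C h n = zer C a b" using add_inverse_Hom[OF assms(3)]
    by blast
  have inverse_h: "add C n h = zer C a b" using n add_commute_Hom[OF n(1) assms(3)] by simp
  have "f = add C (add C n h) f" using zer_add_Hom[OF assms(1)] inverse_h by simp
  also have "\<dots> = add C n (add C h f)" using add_assoc_Hom[OF n(1) assms(3) assms(1)] .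
  also have "\<dots> = add C n (add C h g)" using assms by simp
  also have "\<dots> = add C (add C n h) g" using add_assoc_Hom[OF n(1) assms(3) assms(2)] by simp
  also have "\<dots> = g" using inverse_h zer_add_Hom[OF assms(2)] by simp
  finally show ?thesis .
qed

lemma smul_zero_Hom: assumes "f \<in> Hom C a b" shows "smul C 0 f = zer C a b"
proof -
  have s: "smul C 0 f \<in> Hom C a b" using hom_smul[OF assms] .
  have "add C (smul C 0 f) (smul C 0 f) = smul C (0+0) f" using smul_plus_Hom[OF assms, of 0 0]
    by simp
  also have "\<dots> = add C (smul C 0 f) (zer C a b)" using add_zer_Hom[OF s] by simp
  finally show ?thesis using add_left_cancel_Hom[OF s hom_zer s] by simp
qed

lemma cmp_zer_left: assumes "f \<in> Hom C a b" shows "cmp C (zer C b e) f = zer C a e"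
proof -
  have "cmp C (zer C b e) f = cmp C (smul C 0 (zer C b e)) f" using smul_zero_Hom[OF hom_zer]
    by simp
  also have "\<dots> = smul C 0 (cmp C (zer C b e) f)" using cmp_smul_left[OF assms hom_zer] .
  also have "\<dots> = zer C a e" using smul_zero_Hom[OF hom_cmp[OF assms hom_zer]] .
  finally show ?thesis .
qed
lemma cmp_zer_right: assumes "g \<in> Hom C b e" shows "cmp C g (zer C a b) = zer C a e"
proof -
  have "cmp C g (zer C a b) = cmp C g (smul C 0 (zer C a b))" using smul_zero_Hom[OF hom_zer]
    by simp
  also have "\<dots> = smul C 0 (cmp C g (zer C a b))" using cmp_smul_right[OF hom_zer assms] .
  also have "\<dots> = zer C a e" using smul_zero_Hom[OF hom_cmp[OF hom_zer assms]] .
  finally show ?thesis .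
qed
lemma tns_zer_left: assumes "g \<in> Hom C e w" shows "tns C (zer C a b) g = zer C (a@e) (b@w)"
proof -
  have "tns C (zer C a b) g = tns C (smul C 0 (zer C a b)) g" using smul_zero_Hom[OF hom_zer]
    by simp
  also have "\<dots> = smul C 0 (tns C (zer C a b) g)" using tns_smul_left[OF hom_zer assms] .
  also have "\<dots> = zer C (a@e) (b@w)" using smul_zero_Hom[OF hom_tns[OF hom_zer assms]] .
  finally show ?thesis .
qed
lemma tns_zer_right: assumes "f \<in> Hom C a b" shows "tns C f (zer C e w) = zer C (a@e) (b@w)"
proof -
  have "tns C f (zer C e w) = tns C f (smul C 0 (zer C e w))" using smul_zero_Hom[OF hom_zer]
    by simp
  also have "\<dots> = smul C 0 (tns C f (zer C e w))" using tns_smul_right[OF assms hom_zer] .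
  also have "\<dots> = zer C (a@e) (b@w)" using smul_zero_Hom[OF hom_tns[OF assms hom_zer]] .
  finally show ?thesis .
qed

definition typed :: "'m arr \<Rightarrow> bool" where
  "typed F \<longleftrightarrow> mor F \<in> Hom C (src F) (tgt F)"
definition id_arr :: "bool list \<Rightarrow> 'm arr" where "id_arr a = (a, a, idm C a)"
definition comp_arr :: "'m arr \<Rightarrow> 'm arr \<Rightarrow> 'm arr" (infixr "\<odot>" 55)
  where "G \<odot> F = (src F, tgt G, cmp C (mor G) (mor F))"
definition tensor_arr :: "'m arr \<Rightarrow> 'm arr \<Rightarrow> 'm arr" (infixr "\<otimes>" 60)
  where "F \<otimes> G = (src F @ src G, tgt F @ tgt G, tns C (mor F) (mor G))"
definition plus_arr :: "'m arr \<Rightarrow> 'm arr \<Rightarrow> 'm arr" (infixl "\<oplus>" 52)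
  where "F \<oplus> G = (src F, tgt F, add C (mor F) (mor G))"
definition smult_arr :: "'k \<Rightarrow> 'm arr \<Rightarrow> 'm arr"
  where "smult_arr r F = (src F, tgt F, smul C r (mor F))"
definition zero_arr :: "bool list \<Rightarrow> bool list \<Rightarrow> 'm arr" where
  "zero_arr a b = (a, b, zer C a b)"

lemma arr_src_tgt_simps[simp]:
  "src (id_arr a) = a" "tgt (id_arr a) = a" "src (G \<odot> F) = src F" "tgt (G \<odot> F) = tgt G"
  "src (F \<otimes> G) = src F @ src G" "tgt (F \<otimes> G) = tgt F @ tgt G"
  "src (F \<oplus> G) = src F" "tgt (F \<oplus> G) = tgt F" "src (smult_arr r F) = src F"
    "tgt (smult_arr r F) = tgt F"
  "src (zero_arr a b) = a" "tgt (zero_arr a b) = b"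
  by (simp_all add: id_arr_def comp_arr_def tensor_arr_def plus_arr_def smult_arr_def zero_arr_def)

lemma arr_mor_simps: "mor (id_arr a) = idm C a" "mor (G \<odot> F) = cmp C (mor G) (mor F)"
  "mor (F \<otimes> G) = tns C (mor F) (mor G)" "mor (F \<oplus> G) = add C (mor F) (mor G)"
  "mor (smult_arr r F) = smul C r (mor F)" "mor (zero_arr a b) = zer C a b"
  by (simp_all add: id_arr_def comp_arr_def tensor_arr_def plus_arr_def smult_arr_def zero_arr_def)

lemma typed_id_arr[simp]: "typed (id_arr a)" by (simp add: typed_def arr_mor_simps hom_idm)
lemma typed_zero_arr[simp]: "typed (zero_arr a b)" by (simp add: typed_def arr_mor_simps hom_zer)
lemma typed_comp_arr[simp]: "typed F \<Longrightarrow> typed G \<Longrightarrow> src G = tgt F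
    \<Longrightarrow> typed (G \<odot> F)"
  by (simp add: typed_def arr_mor_simps hom_cmp)
lemma typed_tensor_arr[simp]: "typed F \<Longrightarrow> typed G
    \<Longrightarrow> typed (F \<otimes> G)"
  by (simp add: typed_def arr_mor_simps hom_tns)
lemma typed_plus_arr[simp]: "typed F \<Longrightarrow> typed G \<Longrightarrow> src G = src F
    \<Longrightarrow> tgt G = tgt F \<Longrightarrow> typed (F \<oplus> G)"
  by (simp add: typed_def arr_mor_simps hom_add)
lemma typed_smult_arr[simp]: "typed F \<Longrightarrow> typed (smult_arr r F)"
  by (simp add: typed_def arr_mor_simps hom_smul)

lemma comp_arr_assoc: "typed F \<Longrightarrow> typed G \<Longrightarrow> typed H
    \<Longrightarrow> src G = tgt F \<Longrightarrow> src H = tgt G \<Longrightarrow>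
   (H \<odot> G) \<odot> F = H \<odot> (G \<odot> F)"
  by (simp add: arr_eq arr_mor_simps typed_def cmp_assoc)
lemma id_comp_arr: "typed F \<Longrightarrow> b = tgt F \<Longrightarrow> id_arr b \<odot> F = F"
  by (simp add: arr_eq arr_mor_simps typed_def cmp_idm_left)
lemma comp_id_arr: "typed F \<Longrightarrow> a = src F \<Longrightarrow> F \<odot> id_arr a = F"
  by (simp add: arr_eq arr_mor_simps typed_def cmp_idm_right)
lemma tensor_arr_assoc: "typed F \<Longrightarrow> typed G \<Longrightarrow> typed H
    \<Longrightarrow> (F \<otimes> G) \<otimes> H = F \<otimes> (G \<otimes> H)"
  by (simp add: arr_eq arr_mor_simps typed_def tns_assoc)
lemma unit_tensor_arr: "typed F \<Longrightarrow> id_arr [] \<otimes> F = F"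
  by (simp add: arr_eq arr_mor_simps typed_def tns_unit_left)
lemma tensor_unit_arr: "typed F \<Longrightarrow> F \<otimes> id_arr [] = F"
  by (simp add: arr_eq arr_mor_simps typed_def tns_unit_right)
lemma id_arr_append: "id_arr a \<otimes> id_arr b = id_arr (a @ b)"
  by (simp add: arr_eq arr_mor_simps idm_append)
lemma arr_interchange: "typed F \<Longrightarrow> typed F' \<Longrightarrow> typed G
    \<Longrightarrow> typed G' \<Longrightarrow> src F' = tgt F \<Longrightarrow> src G' = tgt G
  \<Longrightarrow>
   (F' \<otimes> G') \<odot> (F \<otimes> G) = (F' \<odot> F) \<otimes> (G' \<odot> G)"
  by (simp add: arr_eq arr_mor_simps typed_def) (metis tns_cmp_interchange)

lemma plus_comp_arr: "typed F \<Longrightarrow> typed G \<Longrightarrow> typed G'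
    \<Longrightarrow> src G = tgt F \<Longrightarrow> src G' = tgt F
  \<Longrightarrow> tgt G' = tgt G \<Longrightarrow>
   (G \<oplus> G') \<odot> F = (G \<odot> F) \<oplus> (G' \<odot> F)"
  by (simp add: arr_eq arr_mor_simps typed_def) (metis cmp_add_left)
lemma comp_plus_arr: "typed F \<Longrightarrow> typed F' \<Longrightarrow> typed G
    \<Longrightarrow> src G = tgt F \<Longrightarrow> src F' = src F
  \<Longrightarrow> tgt F' = tgt F \<Longrightarrow>
   G \<odot> (F \<oplus> F') = (G \<odot> F) \<oplus> (G \<odot> F')"
  by (simp add: arr_eq arr_mor_simps typed_def) (metis cmp_add_right)
lemma plus_tensor_arr: "typed F \<Longrightarrow> typed F' \<Longrightarrow> typed G
    \<Longrightarrow> src F' = src F \<Longrightarrow> tgt F' = tgt F \<Longrightarrow>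
   (F \<oplus> F') \<otimes> G = (F \<otimes> G) \<oplus> (F' \<otimes> G)"
  by (simp add: arr_eq arr_mor_simps typed_def) (metis tns_add_left)
lemma tensor_plus_arr: "typed F \<Longrightarrow> typed G \<Longrightarrow> typed G'
    \<Longrightarrow> src G' = src G \<Longrightarrow> tgt G' = tgt G \<Longrightarrow>
   F \<otimes> (G \<oplus> G') = (F \<otimes> G) \<oplus> (F \<otimes> G')"
  by (simp add: arr_eq arr_mor_simps typed_def) (metis tns_add_right)
lemma smult_comp_arr: "typed F \<Longrightarrow> typed G \<Longrightarrow> src G = tgt F
    \<Longrightarrow> (smult_arr r G) \<odot> F = smult_arr r (G \<odot> F)"
  by (simp add: arr_eq arr_mor_simps typed_def) (metis cmp_smul_left)
lemma comp_smult_arr: "typed F \<Longrightarrow> typed G \<Longrightarrow> src G = tgt F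
    \<Longrightarrow> G \<odot> (smult_arr r F) = smult_arr r (G \<odot> F)"
  by (simp add: arr_eq arr_mor_simps typed_def) (metis cmp_smul_right)
lemma smult_tensor_arr: "typed F \<Longrightarrow> typed G
    \<Longrightarrow> (smult_arr r F) \<otimes> G = smult_arr r (F \<otimes> G)"
  by (simp add: arr_eq arr_mor_simps typed_def) (metis tns_smul_left)
lemma tensor_smult_arr: "typed F \<Longrightarrow> typed G
    \<Longrightarrow> F \<otimes> (smult_arr r G) = smult_arr r (F \<otimes> G)"
  by (simp add: arr_eq arr_mor_simps typed_def) (metis tns_smul_right)
lemma zero_comp_arr: "typed F \<Longrightarrow> b = tgt F
    \<Longrightarrow> zero_arr b e \<odot> F = zero_arr (src F) e"
  by (simp add: arr_eq arr_mor_simps typed_def cmp_zer_left)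
lemma comp_zero_arr: "typed G \<Longrightarrow> b = src G
    \<Longrightarrow> G \<odot> zero_arr a b = zero_arr a (tgt G)"
  by (simp add: arr_eq arr_mor_simps typed_def cmp_zer_right)
lemma zero_tensor_arr: "typed G \<Longrightarrow> zero_arr a b \<otimes> G =
    zero_arr (a @ src G) (b @ tgt G)"
  by (simp add: arr_eq arr_mor_simps typed_def tns_zer_left)
lemma tensor_zero_arr: "typed F \<Longrightarrow> F \<otimes> zero_arr a b =
    zero_arr (src F @ a) (tgt F @ b)"
  by (simp add: arr_eq arr_mor_simps typed_def tns_zer_right)
lemma plus_zero_arr: "typed F \<Longrightarrow> a = src F \<Longrightarrow> b = tgt F
    \<Longrightarrow> F \<oplus> zero_arr a b = F"
  by (simp add: arr_eq arr_mor_simps typed_def add_zer_Hom)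
lemma zero_plus_arr: "typed F \<Longrightarrow> a = src F \<Longrightarrow> b = tgt F
    \<Longrightarrow> zero_arr a b \<oplus> F = F"
  by (simp add: arr_eq arr_mor_simps typed_def zer_add_Hom)
lemma plus_arr_assoc: "typed F \<Longrightarrow> typed G \<Longrightarrow> typed H
    \<Longrightarrow> src G = src F \<Longrightarrow> tgt G = tgt F \<Longrightarrow>
  src H = src F \<Longrightarrow> tgt H = tgt F
    \<Longrightarrow> (F \<oplus> G) \<oplus> H = F \<oplus> (G \<oplus> H)"
  by (simp add: arr_eq arr_mor_simps typed_def) (metis add_assoc_Hom)
lemma smult_one_arr: "typed F \<Longrightarrow> smult_arr 1 F = F"
  by (simp add: arr_eq arr_mor_simps typed_def) (metis smul_one_Hom)

lemma id_tensor_comp_arr: "typed A \<Longrightarrow> typed B \<Longrightarrow> src A = tgt B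
    \<Longrightarrow> id_arr a \<otimes> (A \<odot> B) =
  (id_arr a \<otimes> A) \<odot> (id_arr a \<otimes> B)"
  by (simp add: arr_interchange id_comp_arr)

lemma comp_tensor_id_arr: "typed A \<Longrightarrow> typed B \<Longrightarrow> src A = tgt B
    \<Longrightarrow> (A \<odot> B) \<otimes> id_arr a =
  (A \<otimes> id_arr a) \<odot> (B \<otimes> id_arr a)"
  by (simp add: arr_interchange id_comp_arr)

lemma smult_plus_arr: "typed F \<Longrightarrow> smult_arr (r + q) F = smult_arr r F \<oplus>
    smult_arr q F"
  by (simp add: arr_eq arr_mor_simps typed_def) (metis smul_plus_Hom)

lemma smult_zero_arr: "typed F \<Longrightarrow> smult_arr 0 F = zero_arr (src F) (tgt F)"
  by (simp add: arr_eq arr_mor_simps typed_def smul_zero_Hom)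

lemma smult_minus_one_arr: assumes "typed A" "typed W" "src W = src A" "tgt W = tgt A"
  "A \<oplus> W = zero_arr (src A) (tgt A)"
  shows "smult_arr (-1) W = A"
proof -
  have "smult_arr (-1) W = zero_arr (src A) (tgt A) \<oplus> smult_arr (-1) W" using assms
    by (simp add: zero_plus_arr)
  also have "\<dots> = (A \<oplus> W) \<oplus> smult_arr (-1) W" using assms(5) by simp
  also have "\<dots> = A \<oplus> (W \<oplus> smult_arr (-1) W)"
    by (rule plus_arr_assoc) (use assms in simp_all)
  also have "W \<oplus> smult_arr (-1) W = smult_arr 0 W" using smult_plus_arr[of W 1
    "-1"] smult_one_arr[of W] assms(2) by simp
  also have "\<dots> = zero_arr (src A) (tgt A)" using assms by (simp add: smult_zero_arr)
  also have "A \<oplus> zero_arr (src A) (tgt A) = A" using assms by (simp add: plus_zero_arr)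
  finally show ?thesis .
qed

lemma plus_zero_arr_eqI: "A = X \<Longrightarrow> B = zero_arr p q \<Longrightarrow> typed X
    \<Longrightarrow> src X = p \<Longrightarrow> tgt X = q \<Longrightarrow> A \<oplus> B = X"
  by (simp add: plus_zero_arr)

definition sum_arr :: "bool list \<Rightarrow> bool list \<Rightarrow> (nat \<Rightarrow> 'm arr)
    \<Rightarrow> nat \<Rightarrow> 'm arr" where
  "sum_arr a b G n = (a, b, hsum C a b (\<lambda>r. mor (G r)) n)"

lemma sum_arr_0: "sum_arr a b G 0 = zero_arr a b" by (simp add: sum_arr_def zero_arr_def)

lemma sum_arr_Suc: "sum_arr a b G (Suc n) = sum_arr a b G n \<oplus> G n"
  by (simp add: sum_arr_def plus_arr_def)

lemma sum_arr_src_tgt[simp]: "src (sum_arr a b G n) = a" "tgt (sum_arr a b G n) = b"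
  by (simp_all add: sum_arr_def)

lemma typed_sum_arr: "(\<forall>r<n. typed (G r) \<and> src (G r) = a \<and> tgt (G r) = b)
    \<Longrightarrow> typed (sum_arr a b G n)"
  by (induct n) (simp_all add: sum_arr_0 sum_arr_Suc)


fun layer_arr :: "'m layer \<Rightarrow> 'm arr" where
  "layer_arr (a,F,b) = (id_arr a \<otimes> F) \<otimes> id_arr b"
fun layer_typed :: "'m layer \<Rightarrow> bool" where "layer_typed (a,F,b) = typed F"
declare layer_arr.simps[simp del]

fun chain :: "bool list \<Rightarrow> 'm layer list \<Rightarrow> 'm arr" where
  "chain p [] = id_arr p" | "chain p (l # ls) = layer_arr l \<odot> chain p ls"

fun chain_typed :: "bool list \<Rightarrow> 'm layer list \<Rightarrow> bool" where
  "chain_typed p [] = True" | "chain_typed p (l # ls) = (layer_typed l \<and> layer_src l =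
      chain_tgt p ls \<and> chain_typed p ls)"

lemma layer_arr_src_tgt[simp]: "src (layer_arr l) = layer_src l" "tgt (layer_arr l) = layer_tgt l"
  by (cases l; simp add: layer_arr.simps)+
lemma typed_layer_arr[simp]: "layer_typed l \<Longrightarrow> typed (layer_arr l)"
  by (cases l; simp add: layer_arr.simps)

lemma chain_src_tgt[simp]: "src (chain p ls) = p" "tgt (chain p ls) = chain_tgt p ls"
  by (induct ls) auto

lemma typed_chain[simp]: "chain_typed p ls \<Longrightarrow> typed (chain p ls)"
  by (induct ls) auto

lemma chain_typed_append[simp]: "chain_typed p (xs @ ys) = (chain_typed (chain_tgt p ys) xs \<and>
    chain_typed p ys)"
  by (induct xs) auto

lemma chain_append: "chain_typed p (xs @ ys)
    \<Longrightarrow> chain p (xs @ ys) = chain (chain_tgt p ys) xs \<odot> chain p ys"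
proof (induct xs)
  case Nil thus ?case by (simp add: id_comp_arr)
next
  case (Cons l xs)
  thus ?case by (simp add: comp_arr_assoc)
qed

lemma layer_arr_comp: "typed F \<Longrightarrow> typed G \<Longrightarrow> src G = tgt F
    \<Longrightarrow>
  layer_arr (a, G \<odot> F, b) = layer_arr (a, G, b) \<odot> layer_arr (a, F, b)"
  by (simp add: arr_interchange id_comp_arr layer_arr.simps)

lemma layer_arr_layer_arr: "typed F \<Longrightarrow> layer_arr (a, layer_arr (a', F, b'), b) =
    layer_arr (a @ a', F, b' @ b)"
  by (simp add: tensor_arr_assoc id_arr_append[symmetric] layer_arr.simps)

lemma layer_arr_id: "layer_arr (a, id_arr q, b) = id_arr (a @ q @ b)"
  by (simp add: id_arr_append layer_arr.simps)

lemma chain_whisker: "chain_typed q ys \<Longrightarrow> chain (a @ q @ b) (map (whisker a b) ys) =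
    layer_arr (a, chain q ys, b)"
proof (induct ys)
  case Nil thus ?case by (simp add: layer_arr_id)
next
  case (Cons l ys)
  obtain a' F b' where l: "l = (a', F, b')" by (cases l)
  have "layer_arr (a, chain q (l # ys), b) =
      layer_arr (a, layer_arr l, b) \<odot> layer_arr (a, chain q ys, b)"
    using Cons by (simp add: layer_arr_comp)
  also have "layer_arr (a, layer_arr l, b) = layer_arr (whisker a b l)" using Cons l
    by (simp add: layer_arr_layer_arr)
  finally show ?case using Cons by simp
qed

lemma chain_typed_whisker[simp]: "chain_typed (a @ q @ b) (map (whisker a b) ys) = chain_typed q ys"
proof (induct ys)
  case Nil thus ?case by simp
next
  case (Cons l ys) thus ?case by (cases l; cases ys) auto
qed

lemma chain_tgt_whisker[simp]: "chain_tgt (a @ q @ b) (map (whisker a b) ys) =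
    a @ chain_tgt q ys @ b"
  by (cases ys) auto

lemma chain_whisker_right: "chain_typed (q @ b) (map (whisker [] b) ys) = chain_typed q ys"
  "chain_tgt (q @ b) (map (whisker [] b) ys) = chain_tgt q ys @ b"
  using chain_typed_whisker[of "[]" q b ys] chain_tgt_whisker[of "[]" q b ys] by simp_all
lemma chain_whisker_left: "chain_typed (a @ q) (map (whisker a []) ys) = chain_typed q ys"
  "chain_tgt (a @ q) (map (whisker a []) ys) = a @ chain_tgt q ys"
  using chain_typed_whisker[of a q "[]" ys] chain_tgt_whisker[of a q "[]" ys] by simp_all


lemma layer_arr_plus: "typed F \<Longrightarrow> typed G \<Longrightarrow> src G = src F
    \<Longrightarrow> tgt G = tgt F \<Longrightarrow>
  layer_arr (a, F \<oplus> G, b) = layer_arr (a, F, b) \<oplus> layer_arr (a, G, b)"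
  by (simp add: layer_arr.simps plus_tensor_arr tensor_plus_arr)
lemma layer_arr_smult: "typed F \<Longrightarrow> layer_arr (a, smult_arr r F, b) =
    smult_arr r (layer_arr (a, F, b))"
  by (simp add: layer_arr.simps smult_tensor_arr tensor_smult_arr)
lemma layer_arr_zero: "layer_arr (a, zero_arr u v, b) = zero_arr (a @ u @ b) (a @ v @ b)"
  by (simp add: layer_arr.simps zero_tensor_arr tensor_zero_arr)

lemma chain_replace_segment:
  assumes "chain_typed p (xs @ ys @ zs)" "chain_typed (chain_tgt p zs) ys'"
    and "chain (chain_tgt p zs) ys = chain (chain_tgt p zs) ys'"
  shows "chain p (xs @ ys @ zs) = chain p (xs @ ys' @ zs)"
proof -
  let ?q = "chain_tgt p zs"
  have tgt_eq: "chain_tgt ?q ys = chain_tgt ?q ys'" using arg_cong[OF assms(3), of tgt] by simp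
  have typed': "chain_typed p (xs @ ys' @ zs)" using assms tgt_eq by simp
  have "chain p (xs @ ys @ zs) = chain (chain_tgt p (ys @ zs)) xs \<odot> (chain ?q ys \<odot> chain
      p zs)"
    using assms(1) by (metis append_assoc chain_append chain_typed_append)
  also have "\<dots> = chain (chain_tgt p (ys' @ zs)) xs \<odot> (chain ?q ys' \<odot> chain p zs)"
    using assms(3) tgt_eq by simp
  also have "\<dots> = chain p (xs @ ys' @ zs)"
    using typed' by (metis append_assoc chain_append chain_typed_append)
  finally show ?thesis .
qed

lemma chain_whiskered_segment:
  assumes "chain_typed p (xs @ map (whisker a b) ys @ zs)" "chain_typed q ys"
    and "chain_tgt p zs = a @ q @ b"
  shows "chain p (xs @ map (whisker a b) ys @ zs) =
    chain (a @ chain_tgt q ys @ b) xs \<odot> (layer_arr (a, chain q ys, b) \<odot> chain p zs)"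
proof -
  have "chain p (xs @ map (whisker a b) ys @ zs) =
      chain (chain_tgt p (map (whisker a b) ys @ zs)) xs \<odot>
        (chain (chain_tgt p zs) (map (whisker a b) ys) \<odot> chain p zs)"
    using assms(1) by (metis append_assoc chain_append chain_typed_append)
  then show ?thesis using assms(2,3) by (simp add: chain_whisker)
qed

lemma list_split3: "i + n \<le> length ls
    \<Longrightarrow> ls = take i ls @ take n (drop i ls) @ drop (i + n) ls"
  by (metis append_take_drop_id drop_drop add.commute)

lemma list_split_pair:
  "Suc i < length ls \<Longrightarrow> ls =
      take i ls @ [ls ! i, ls ! Suc i] @ drop (Suc (Suc i)) ls"
  by (metis Cons_nth_drop_Suc Suc_lessD append_Cons append_Nil append_take_drop_id)

lemma chain_replace_at:
  assumes "chain q ys = chain q ys'" "chain_typed q ys" "chain_typed q ys'" "chain_typed p ls"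
    and "take (length ys) (drop i ls) = map (whisker a b) ys" "i + length ys \<le> length ls"
    and "chain_tgt p (drop (i + length ys) ls) = a @ q @ b"
    and "chain p (take i ls @ map (whisker a b) ys' @ drop (i + length ys) ls) = X"
  shows "chain p ls = X"
proof -
  have split: "take i ls @ map (whisker a b) ys @ drop (i + length ys) ls = ls"
    using list_split3[OF assms(6)] assms(5) by simp
  from assms(4) have "chain_typed p (take i ls @ map (whisker a b) ys @ drop (i + length ys) ls)"
    by (simp only: split)
  then have "chain p (take i ls @ map (whisker a b) ys @ drop (i + length ys) ls) =
      chain p (take i ls @ map (whisker a b) ys' @ drop (i + length ys) ls)"
    by (rule chain_replace_segment) (use assms in \<open>simp_all add: chain_whisker\<close>)
  then show ?thesis using assms(8) by (simp only: split)
qed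

lemma chain_plus_at:
  assumes "chain q ys = chain q ys1 \<oplus> chain q ys2"
    and "chain_typed q ys" "chain_typed q ys1" "chain_typed q ys2"
      "chain_tgt q ys2 = chain_tgt q ys1"
    and "chain_typed p (xs @ map (whisker a b) ys @ zs)" "chain_tgt p zs = a @ q @ b"
  shows "chain p (xs @ map (whisker a b) ys @ zs) =
    chain p (xs @ map (whisker a b) ys1 @ zs) \<oplus> chain p (xs @ map (whisker a b) ys2 @ zs)"
proof -
  have tgt_eq: "chain_tgt q ys1 = chain_tgt q ys" using arg_cong[OF assms(1), of tgt] by simp
  have "chain_typed p (xs @ map (whisker a b) ys1 @ zs)"
    "chain_typed p (xs @ map (whisker a b) ys2 @ zs)"
    using assms tgt_eq by simp_all
  then show ?thesis
    using assms tgt_eq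
    by (simp add: chain_whiskered_segment layer_arr_plus plus_comp_arr comp_plus_arr)
qed

lemma chain_zero_at:
  assumes "chain q ys = zero_arr q r" "chain_typed q ys"
    and "chain_typed p (xs @ map (whisker a b) ys @ zs)" "chain_tgt p zs = a @ q @ b"
  shows "chain p (xs @ map (whisker a b) ys @ zs) =
    zero_arr p (chain_tgt p (xs @ map (whisker a b) ys @ zs))"
proof -
  have "r = chain_tgt q ys" using arg_cong[OF assms(1), of tgt] by simp
  then show ?thesis
    using assms by (simp add: chain_whiskered_segment layer_arr_zero zero_comp_arr comp_zero_arr)
qed

lemma layer_interchange: "typed F \<Longrightarrow> typed G \<Longrightarrow>
  layer_arr (a1, F, m @ tgt G @ b2) \<odot> layer_arr (a1 @ src F @ m, G, b2) =
  layer_arr (a1 @ tgt F @ m, G, b2) \<odot> layer_arr (a1, F, m @ src G @ b2)"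
  by (simp add: layer_arr.simps tensor_arr_assoc id_arr_append[symmetric] arr_interchange
      id_comp_arr comp_id_arr)

text \<open>Sliding the box of layer \<open>i\<close> past the box of layer \<open>i + 1\<close> when the
  latter lies to its right (\<open>commute_left\<close>) or to its left
  (\<open>commute_right\<close>); the middle word \<open>m\<close> between the two boxes is read
  off from the list, so that the side condition can be checked by \<open>simp\<close>.\<close>

definition commute_left :: "nat \<Rightarrow> 'm layer list \<Rightarrow> 'm layer list" where
 "commute_left i ls = (case ls ! i of (a1, F, b1) \<Rightarrow> case ls ! Suc i of (a2, G,
     b2) \<Rightarrow>
   let m = drop (length a1 + length (src F)) a2 in
   take i ls @ [(a1 @ tgt F @ m, G, b2), (a1, F, m @ src G @ b2)] @ drop (Suc (Suc i)) ls)"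
definition commute_left_ok :: "nat \<Rightarrow> 'm layer list \<Rightarrow> bool" where
 "commute_left_ok i ls = (case ls ! i of (a1, F, b1) \<Rightarrow> case ls ! Suc i of (a2, G,
     b2) \<Rightarrow>
   let m = drop (length a1 + length (src F)) a2 in
   a2 = a1 @ src F @ m \<and> b1 = m @ tgt G @ b2)"
definition commute_right :: "nat \<Rightarrow> 'm layer list \<Rightarrow> 'm layer list" where
 "commute_right i ls = (case ls ! i of (a1, F, b1) \<Rightarrow> case ls ! Suc i of (a2, G,
     b2) \<Rightarrow>
   let m = drop (length a2 + length (tgt G)) a1 in
   take i ls @ [(a2, G, m @ tgt F @ b1), (a2 @ src G @ m, F, b1)] @ drop (Suc (Suc i)) ls)"
definition commute_right_ok :: "nat \<Rightarrow> 'm layer list \<Rightarrow> bool" where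
 "commute_right_ok i ls = (case ls ! i of (a1, F, b1) \<Rightarrow> case ls ! Suc i of (a2, G,
     b2) \<Rightarrow>
   let m = drop (length a2 + length (tgt G)) a1 in
   a1 = a2 @ tgt G @ m \<and> b2 = m @ src F @ b1)"

lemmas commute_defs = commute_left_def commute_left_ok_def commute_right_def commute_right_ok_def
  Let_def

lemma chain_replace_pair:
  assumes "chain_typed p ls" "Suc i < length ls"
    and "layer_typed l1" "layer_typed l2" "layer_src l2 = layer_src (ls ! Suc i)"
    and "layer_src l1 = layer_tgt l2" "layer_tgt l1 = layer_tgt (ls ! i)"
    and "layer_arr (ls ! i) \<odot> layer_arr (ls ! Suc i) = layer_arr l1 \<odot> layer_arr l2"
  shows "chain p ls = chain p (take i ls @ [l1, l2] @ drop (Suc (Suc i)) ls)"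
proof -
  let ?zs = "drop (Suc (Suc i)) ls"
  have split: "take i ls @ [ls ! i, ls ! Suc i] @ ?zs = ls"
    using list_split_pair[OF assms(2)] by simp
  from assms(1) have typed: "chain_typed p (take i ls @ [ls ! i, ls ! Suc i] @ ?zs)"
    by (simp only: split)
  then have zs: "chain_tgt p ?zs = layer_src (ls ! Suc i)"
    and pair: "chain_typed (chain_tgt p ?zs) [ls ! i, ls ! Suc i]" by simp_all
  have eq: "chain (chain_tgt p ?zs) [ls ! i, ls ! Suc i] = chain (chain_tgt p ?zs) [l1, l2]"
  proof -
    have "chain (chain_tgt p ?zs) [ls ! i, ls ! Suc i] =
        layer_arr (ls ! i) \<odot> layer_arr (ls ! Suc i)"
      using pair zs by (simp add: comp_id_arr)
    also have "\<dots> = chain (chain_tgt p ?zs) [l1, l2]"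
      using assms(4,5,8) zs by (simp add: comp_id_arr)
    finally show ?thesis .
  qed
  have "chain p (take i ls @ [ls ! i, ls ! Suc i] @ ?zs) = chain p (take i ls @ [l1, l2] @ ?zs)"
    by (rule chain_replace_segment[OF typed _ eq]) (use assms(3-6) zs in simp)
  then show ?thesis by (simp only: split)
qed

lemma chain_commute_left:
  assumes "chain_typed p ls" "Suc i < length ls" "commute_left_ok i ls"
    and "chain p (commute_left i ls) = X"
  shows "chain p ls = X"
proof -
  obtain a1 F b1 a2 G b2 where l: "ls ! i = (a1, F, b1)" "ls ! Suc i = (a2, G, b2)"
    by (cases "ls ! i", cases "ls ! Suc i")
  define m where "m = drop (length a1 + length (src F)) a2"
  have m: "a2 = a1 @ src F @ m" "b1 = m @ tgt G @ b2"
    using assms(3) l m_def by (simp_all add: commute_left_ok_def Let_def)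
  have "chain_typed p (take i ls @ [ls ! i, ls ! Suc i] @ drop (Suc (Suc i)) ls)"
    using list_split_pair[OF assms(2)] assms(1) by simp
  then have "typed F" "typed G" "layer_src (ls ! i) = layer_tgt (ls ! Suc i)" using l by auto
  then have "chain p ls = chain p (take i ls @ [(a1 @ tgt F @ m, G, b2), (a1, F, m @ src G @ b2)] @
      drop (Suc (Suc i)) ls)"
    using l m by (intro chain_replace_pair[OF assms(1,2)]) (simp_all add: layer_interchange)
  also have "\<dots> = chain p (commute_left i ls)"
    using l m_def by (simp add: commute_left_def Let_def)
  finally show ?thesis using assms(4) by simp
qed

lemma chain_commute_right:
  assumes "chain_typed p ls" "Suc i < length ls" "commute_right_ok i ls"
    and "chain p (commute_right i ls) = X"
  shows "chain p ls = X"
proof -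
  obtain a1 F b1 a2 G b2 where l: "ls ! i = (a1, F, b1)" "ls ! Suc i = (a2, G, b2)"
    by (cases "ls ! i", cases "ls ! Suc i")
  define m where "m = drop (length a2 + length (tgt G)) a1"
  have m: "a1 = a2 @ tgt G @ m" "b2 = m @ src F @ b1"
    using assms(3) l m_def by (simp_all add: commute_right_ok_def Let_def)
  have "chain_typed p (take i ls @ [ls ! i, ls ! Suc i] @ drop (Suc (Suc i)) ls)"
    using list_split_pair[OF assms(2)] assms(1) by simp
  then have "typed F" "typed G" "layer_src (ls ! i) = layer_tgt (ls ! Suc i)" using l by auto
  then have "chain p ls = chain p (take i ls @ [(a2, G, m @ tgt F @ b1), (a2 @ src G @ m, F, b1)] @
      drop (Suc (Suc i)) ls)"
    using l m by (intro chain_replace_pair[OF assms(1,2)]) (simp_all add: layer_interchange)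
  also have "\<dots> = chain p (commute_right i ls)"
    using l m_def by (simp add: commute_right_def Let_def)
  finally show ?thesis using assms(4) by simp
qed

lemma chain_context: "chain_typed p (xs @ [l] @ zs) \<Longrightarrow>
  chain p (xs @ [l] @ zs) = chain (layer_tgt l) xs \<odot> (layer_arr l \<odot> chain p zs)"
  using chain_append[of p xs "[l] @ zs"] chain_append[of p "[l]" zs] by (simp add: comp_id_arr)

lemma chain_smult_at:
  assumes "chain_typed p ls" "i < length ls" "ls ! i = (a, smult_arr r F, b)" "typed F"
    and "smult_arr r (chain p (ls[i := (a, F, b)])) = X"
  shows "chain p ls = X"
proof -
  have upd: "ls[i := (a, F, b)] = take i ls @ [(a, F, b)] @ drop (Suc i) ls"
    using assms(2) by (simp add: upd_conv_take_nth_drop)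
  have split: "take i ls @ [(a, smult_arr r F, b)] @ drop (Suc i) ls = ls"
    using assms(2,3) by (metis id_take_nth_drop append_Cons append_Nil)
  from assms(1) have typed: "chain_typed p (take i ls @ [(a, smult_arr r F, b)] @ drop (Suc i) ls)"
    by (simp only: split)
  then have "chain_typed p (take i ls @ [(a, F, b)] @ drop (Suc i) ls)"
    using assms(4) by simp
  then have "chain p (take i ls @ [(a, smult_arr r F, b)] @ drop (Suc i) ls) =
      smult_arr r (chain p (take i ls @ [(a, F, b)] @ drop (Suc i) ls))"
    using typed assms(4) by (simp only: chain_context)
      (simp add: layer_arr_smult comp_smult_arr smult_comp_arr)
  then show ?thesis using assms(5) upd by (simp only: split)
qed

text \<open>To rewrite a chain \<open>ls\<close> at position \<open>i\<close> with an equation between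
  chains \<open>ys\<close>, the pattern \<open>ys\<close> has to be whiskered; the whiskers are
  read off from the first layer, so that all side conditions are decidable by \<open>simp\<close>
  once \<open>i\<close> is given.\<close>

definition match_left :: "'m layer list \<Rightarrow> nat \<Rightarrow> 'm layer list \<Rightarrow>
    bool list" where
  [simp]: "match_left ls i ys = take (length (fst (ls ! i)) - length (fst (hd ys))) (fst (ls ! i))"
definition match_right :: "'m layer list \<Rightarrow> nat \<Rightarrow> 'm layer list \<Rightarrow>
    bool list" where
  [simp]: "match_right ls i ys = drop (length (snd (snd (hd ys)))) (snd (snd (ls ! i)))"

abbreviation matches_at :: "bool list \<Rightarrow> 'm layer list \<Rightarrow> nat \<Rightarrow>
    bool list \<Rightarrow> 'm layer list \<Rightarrow> bool"
  where "matches_at p ls i q ys \<equiv>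
    take (length ys) (drop i ls) = map (whisker (match_left ls i ys) (match_right ls i ys)) ys
      \<and>
    i + length ys \<le> length ls \<and>
    chain_tgt p (drop (i + length ys) ls) = match_left ls i ys @ q @ match_right ls i ys"

lemma matches_at_split:
  assumes "matches_at p ls i q ys"
  shows "take i ls @ map (whisker (match_left ls i ys) (match_right ls i ys)) ys @
      drop (i + length ys) ls = ls"
    and "chain_tgt p (drop (i + length ys) ls) = match_left ls i ys @ q @ match_right ls i ys"
  using assms list_split3[of i "length ys" ls] by simp_all

lemma chain_rewrite:
  assumes "chain q ys = chain q ys'" "chain_typed q ys" "chain_typed q ys'" "chain_typed p ls"
    and "matches_at p ls i q ys"
    and "chain p (take i ls @ map (whisker (match_left ls i ys) (match_right ls i ys)) ys' @
      drop (i + length ys) ls) = X"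
  shows "chain p ls = X"
  using chain_replace_at[OF assms(1-4)] assms(5,6) by blast

lemma chain_rewrite_plus:
  assumes "chain q ys = chain q ys1 \<oplus> chain q ys2"
    and "chain_typed q ys" "chain_typed q ys1" "chain_typed q ys2"
      "chain_tgt q ys2 = chain_tgt q ys1"
    and "chain_typed p ls" "matches_at p ls i q ys"
    and "chain p (take i ls @ map (whisker (match_left ls i ys) (match_right ls i ys)) ys1 @
          drop (i + length ys) ls) \<oplus>
        chain p (take i ls @ map (whisker (match_left ls i ys) (match_right ls i ys)) ys2 @
          drop (i + length ys) ls) = X"
  shows "chain p ls = X"
proof -
  note split = matches_at_split[OF assms(7)]
  have "chain_typed p (take i ls @ map (whisker (match_left ls i ys) (match_right ls i ys)) ys @
      drop (i + length ys) ls)"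
    using assms(6) split(1) by simp
  from chain_plus_at[OF assms(1-5) this split(2)] show ?thesis
    using assms(8) split(1) by simp
qed

lemma chain_rewrite_zero:
  assumes "chain q ys = zero_arr q r" "chain_typed q ys" "chain_typed p ls"
    and "matches_at p ls i q ys" "zero_arr p (chain_tgt p ls) = X"
  shows "chain p ls = X"
proof -
  note split = matches_at_split[OF assms(4)]
  have "chain_typed p (take i ls @ map (whisker (match_left ls i ys) (match_right ls i ys)) ys @
      drop (i + length ys) ls)"
    using assms(3) split(1) by simp
  from chain_zero_at[OF assms(1,2) this split(2)] show ?thesis
    unfolding split(1) using assms(5) by simp
qed

lemma chain_expand_at:
  assumes "chain_typed p ls" "i < length ls" "ls ! i = (a, chain q ys, b)" "chain_typed q ys"
    and "chain p (take i ls @ map (whisker a b) ys @ drop (Suc i) ls) = X"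
  shows "chain p ls = X"
proof -
  have split: "take i ls @ [(a, chain q ys, b)] @ drop (Suc i) ls = ls"
    using assms(2,3) by (metis id_take_nth_drop append_Cons append_Nil)
  from assms(1) have typed: "chain_typed p (take i ls @ [(a, chain q ys, b)] @ drop (Suc i) ls)"
    by (simp only: split)
  then have "chain_tgt p (drop (Suc i) ls) = a @ q @ b" by simp
  with typed have "chain p (take i ls @ [(a, chain q ys, b)] @ drop (Suc i) ls) =
      chain p (take i ls @ map (whisker a b) ys @ drop (Suc i) ls)"
    by (intro chain_replace_segment) (use assms(4) in \<open>simp_all add: chain_whisker
      comp_id_arr\<close>)
  then show ?thesis using assms(5) by (simp only: split)
qed

lemma chain_expand:
  assumes "G = chain q ys" "chain_typed q ys" "chain_typed p ls" "i < length ls"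
    and "fst (snd (ls ! i)) = G"
    and "chain p (take i ls @ map (whisker (fst (ls ! i)) (snd (snd (ls ! i)))) ys @
      drop (Suc i) ls) = X"
  shows "chain p ls = X"
proof -
  have "ls ! i = (fst (ls ! i), chain q ys, snd (snd (ls ! i)))"
    using assms(1,5) by (cases "ls ! i") auto
  from chain_expand_at[OF assms(3,4) this assms(2)] assms(6) show ?thesis by simp
qed

lemma chain_single: "chain_typed p ls \<Longrightarrow> chain p ls = chain p [([], chain p ls, [])]"
  by (simp add: layer_arr.simps unit_tensor_arr tensor_unit_arr comp_id_arr)

lemma chain_collapse:
  assumes "G = chain q ys" "chain_typed q ys" "chain_typed p ls" "matches_at p ls i q ys"
    and "chain p (take i ls @ [(match_left ls i ys, G, match_right ls i ys)] @
      drop (i + length ys) ls) = X"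
  shows "chain p ls = X"
proof -
  have "chain q ys = chain q [([], G, [])]" "chain_typed q [([], G, [])]"
    using assms(1,2) chain_single by auto
  from chain_rewrite[OF this(1) assms(2) this(2) assms(3,4)] show ?thesis
    using assms(5) by simp
qed


end

locale heis_cat = slmc_cat C for C :: "('k::comm_ring_1, 'm) lmc" +
  fixes k :: int and x s c d tau :: 'm and e f :: "nat \<Rightarrow> 'm"
  assumes heis: "heis_rels C k x s c d tau e f"
begin

declare chain.simps[simp del] mpow.simps[simp del]

lemmas heis_axioms = heis[unfolded heis_rels_def]

lemma hom_x: "x \<in> Hom C [U] [U]" using heis_axioms by simp
lemma hom_s: "s \<in> Hom C [U,U] [U,U]" using heis_axioms by simp
lemma hom_c: "c \<in> Hom C [] [D,U]" using heis_axioms by simp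
lemma hom_d: "d \<in> Hom C [U,D] []" using heis_axioms by simp
lemma hom_tau: "tau \<in> Hom C [D,U] [U,D]" using heis_axioms by simp
lemma s_s: "cmp C s s = idm C [U,U]" using heis_axioms by simp
lemma s_braid: "cmp C (tns C s (idm C UP)) (cmp C (tns C (idm C UP) s) (tns C s (idm C UP))) =
    cmp C (tns C (idm C UP) s) (cmp C (tns C s (idm C UP)) (tns C (idm C UP) s))"
  using heis_axioms by simp
lemma x_s: "cmp C (tns C x (idm C UP)) s = add C (idm C (UP @ UP)) (cmp C s (tns C (idm C UP) x))"
  using heis_axioms by simp
lemma zigzag_up: "cmp C (tns C d (idm C UP)) (tns C (idm C UP) c) = idm C UP"
  using heis_axioms by simp
lemma zigzag_down: "cmp C (tns C (idm C DN) d) (tns C c (idm C DN)) = idm C DN"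
  using heis_axioms by simp
lemma hom_mpow: "mpow C [U] x n \<in> Hom C [U] [U]"
  by (induct n) (auto simp: hom_idm hom_x mpow.simps intro: hom_cmp)

abbreviation "x_arr \<equiv> ([U],[U],x)"
abbreviation "s_arr \<equiv> ([U,U],[U,U],s)"
abbreviation "c_arr \<equiv> ([],[D,U],c)"
abbreviation "d_arr \<equiv> ([U,D],[],d)"
abbreviation "tau_arr \<equiv> ([D,U],[U,D],tau)"
abbreviation "t_arr \<equiv> ([U,D],[D,U],heis_t C s c d)"
abbreviation "s'_arr \<equiv> ([D,D],[D,D],heis_s' C s c d)"
abbreviation "xp_arr r \<equiv> ([U],[U],mpow C [U] x r)"
abbreviation "cx_arr r \<equiv> (id_arr [D] \<otimes> xp_arr r) \<odot> c_arr"
abbreviation "dx_arr r \<equiv> d_arr \<odot> (xp_arr r \<otimes> id_arr [D])"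
abbreviation "e_arr r \<equiv> ([],[U,D],e r)"
abbreviation "f_arr r \<equiv> ([D,U],[],f r)"
abbreviation "c'_arr \<equiv> ([],[U,D],heis_c' C k x c tau e)"
abbreviation "d'_arr \<equiv> ([D,U],[],heis_d' C k x d tau f)"

lemma typed_generators[simp]:
  "typed x_arr" "typed s_arr" "typed c_arr" "typed d_arr" "typed tau_arr" "typed (xp_arr r)"
  by (simp_all add: typed_def hom_x hom_s hom_c hom_d hom_tau hom_mpow)

lemma id_arr_append_tensor: "typed F \<Longrightarrow> id_arr a \<otimes> (id_arr b \<otimes> F) =
    id_arr (a @ b) \<otimes> F"
  by (simp add: tensor_arr_assoc[symmetric] id_arr_append)

lemmas arr_simps = layer_arr.simps chain.simps unit_tensor_arr tensor_unit_arr comp_id_arr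
  id_comp_arr tensor_arr_assoc id_arr_append id_arr_append_tensor

lemma t_arr_chain: "t_arr = chain [U,D] [([D,U],d_arr,[]),([D],s_arr,[D]),([],c_arr,[U,D])]"
proof -
  have "t_arr = (id_arr [D] \<otimes> id_arr [U]) \<otimes> d_arr \<odot> (id_arr [D] \<otimes>
      s_arr) \<otimes> id_arr [D] \<odot>
      (c_arr \<otimes> id_arr [U]) \<otimes> id_arr [D]"
    unfolding arr_eq by (simp add: arr_mor_simps heis_t_def)
  then show ?thesis by (simp add: arr_simps)
qed

lemma typed_t_arr[simp]: "typed t_arr"
  by (subst t_arr_chain) simp

lemma s'_arr_chain: "s'_arr = chain [D,D] [([D,D],d_arr,[]),([D],t_arr,[D]),([],c_arr,[D,D])]"
proof -
  have "s'_arr = (id_arr [D] \<otimes> id_arr [D]) \<otimes> d_arr \<odot> (id_arr [D] \<otimes>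
      t_arr) \<otimes> id_arr [D] \<odot>
      (c_arr \<otimes> id_arr [D]) \<otimes> id_arr [D]"
    unfolding arr_eq by (simp add: arr_mor_simps heis_s'_def)
  then show ?thesis by (simp add: arr_simps)
qed

lemma typed_s'_arr[simp]: "typed s'_arr"
  by (subst s'_arr_chain) simp

lemma s_s_chain: "chain [U,U] [([],s_arr,[]),([],s_arr,[])] = chain [U,U] []"
  using s_s by (simp add: arr_simps arr_eq arr_mor_simps)
lemma s_braid_chain:
  "chain [U,U,U] [([],s_arr,[U]),([U],s_arr,[]),([],s_arr,[U])] =
   chain [U,U,U] [([U],s_arr,[]),([],s_arr,[U]),([U],s_arr,[])]"
  using s_braid by (simp add: arr_simps arr_eq arr_mor_simps)
lemma x_s_chain:
  "chain [U,U] [([],x_arr,[U]),([],s_arr,[])] =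
   chain [U,U] [] \<oplus> chain [U,U] [([],s_arr,[]),([U],x_arr,[])]"
  using x_s by (simp add: arr_simps arr_eq arr_mor_simps)
lemma zigzag_up_chain: "chain [U] [([],d_arr,[U]),([U],c_arr,[])] = chain [U] []"
  using zigzag_up by (simp add: arr_simps arr_eq arr_mor_simps)
lemma zigzag_down_chain: "chain [D] [([D],d_arr,[]),([],c_arr,[D])] = chain [D] []"
  using zigzag_down by (simp add: arr_simps arr_eq arr_mor_simps)

section \<open>Consequences of the zigzag identities\<close>

lemma cap_t: "chain [U,U,D] [([],d_arr,[U]), ([U],t_arr,[])] =
    chain [U,U,D] [([U],d_arr,[]), ([],s_arr,[D])]"
  apply (rule chain_expand[OF t_arr_chain, where i=1], simp_all)
  apply (rule chain_commute_left[where i=0], simp_all add: commute_defs)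
  apply (rule chain_commute_left[where i=1], simp_all add: commute_defs)
  apply (rule chain_rewrite[OF zigzag_up_chain, where i=2], simp_all)
  done



lemma bend_right_id: assumes "chain_typed (X@[D]) L" "chain_tgt (X@[D]) L = Y"
  shows "chain (X@[D]) L = chain (X@[D]) ([(Y, d_arr,
      [])] @ map (whisker [] [U,D]) L @ [(X,c_arr,[D])])"
proof -
  let ?F = "chain (X@[D]) L"
  have "chain (X@[D]) ([(Y, d_arr, [])] @ map (whisker [] [U,D]) L @ [(X,c_arr,[D])]) =
        chain (X@[D]) ([(Y, d_arr, [])] @ [([], ?F, [U,D])] @ [(X,c_arr,[D])])"
  proof -
    have "chain ([] @ (X@[D]) @ [U,D]) (map (whisker [] [U,D]) L) = layer_arr ([], ?F, [U,D])"
      using assms(1) by (rule chain_whisker)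
    hence e: "chain (X @ [D,U,D]) (map (whisker [] [U,D]) L) =
        chain (X @ [D,U,D]) [([], ?F, [U,D])]"
      using assms by (simp add: chain.simps comp_id_arr)
    show ?thesis apply (rule chain_replace_segment) using assms e
      by (simp_all add: chain_whisker_right[of "X@[D]" "[U,D]", simplified])
  qed
  also have "\<dots> = ?F"
    apply (rule chain_commute_right[where i=0]) using assms apply (simp_all add: commute_defs)
    apply (rule chain_rewrite[OF zigzag_down_chain, where i=1]) using assms apply (simp_all)
    using assms by (simp add: chain.simps layer_arr.simps unit_tensor_arr tensor_unit_arr
      comp_id_arr)
  finally show ?thesis by simp
qed

lemma bend_right_inj:
  assumes "p = X @ [D]" "chain_typed p L1" "chain_typed p L2" "chain_tgt p L1 = Y"
    "chain_tgt p L2 = Y"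
    and "chain X (map (whisker [] [U]) L1 @ [(X, c_arr, [])]) =
      chain X (map (whisker [] [U]) L2 @ [(X, c_arr, [])])"
  shows "chain p L1 = chain p L2"
proof -
  have typed: "chain_typed (X@[D]) L1" "chain_typed (X@[D]) L2"
    and tgt: "chain_tgt (X@[D]) L1 = Y" "chain_tgt (X@[D]) L2 = Y"
    using assms(1-5) by simp_all
  have bent_typed: "chain_typed X (map (whisker [] [U]) L1 @ [(X, c_arr, [])])"
    "chain_typed X (map (whisker [] [U]) L2 @ [(X, c_arr, [])])"
    using typed chain_typed_whisker[of "[]" "X@[D]" "[U]"] by simp_all
  have whisker_D: "\<And>L. chain_typed X L \<Longrightarrow>
      chain (X@[D]) (map (whisker [] [D]) L) = layer_arr ([], chain X L, [D])"
    using chain_whisker[of X _ "[]" "[D]"] by simp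
  have bent_eq: "chain (X@[D]) (map (whisker [] [U,D]) L1 @ [(X,c_arr,[D])]) =
      chain (X@[D]) (map (whisker [] [U,D]) L2 @ [(X,c_arr,[D])])"
    using whisker_D[OF bent_typed(1)] whisker_D[OF bent_typed(2)] assms(6) by simp
  have "chain (X@[D]) L1 =
      chain (X@[D]) ([(Y, d_arr, [])] @ (map (whisker [] [U,D]) L1 @ [(X,c_arr,[D])]) @ [])"
    using bend_right_id typed tgt by simp
  also have "\<dots> = chain (X@[D]) ([(Y, d_arr,
      [])] @ (map (whisker [] [U,D]) L2 @ [(X,c_arr,[D])]) @ [])"
    by (rule chain_replace_segment)
      (use typed tgt bent_eq in \<open>simp_all add: chain_whisker_right[of "X@[D]"
        "[U,D]", simplified]\<close>)
  also have "\<dots> = chain (X@[D]) L2" using bend_right_id typed tgt by simp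
  finally show ?thesis using assms(1) by simp
qed

lemma bend_left_id: assumes "chain_typed X L" "chain_tgt X L = [D] @ Y"
  shows "chain X L = chain X ([([D], d_arr, Y)] @ map (whisker [D,U] []) L @ [([],c_arr,X)])"
proof -
  let ?F = "chain X L"
  have "chain X ([([D], d_arr, Y)] @ map (whisker [D,U] []) L @ [([],c_arr,X)]) =
        chain X ([([D], d_arr, Y)] @ [([D,U], ?F, [])] @ [([],c_arr,X)])"
  proof -
    have "chain ([D,U] @ X @ []) (map (whisker [D,U] []) L) = layer_arr ([D,U], ?F, [])"
      using assms(1) by (rule chain_whisker)
    hence e: "chain ([D,U] @ X) (map (whisker [D,U] []) L) = chain ([D,U] @ X) [([D,U], ?F, [])]"
      using assms by (simp add: chain.simps comp_id_arr)
    show ?thesis apply (rule chain_replace_segment) using assms e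
      by (simp_all add: chain_whisker_left[of "[D,U]" X, simplified])
  qed
  also have "\<dots> = ?F"
    apply (rule chain_commute_right[where i=1]) using assms apply (simp_all add: commute_defs)
    apply (rule chain_rewrite[OF zigzag_down_chain, where i=0]) using assms apply (simp_all)
    using assms by (simp add: chain.simps layer_arr.simps unit_tensor_arr tensor_unit_arr
      comp_id_arr)
  finally show ?thesis by simp
qed

lemma bend_left_inj:
  assumes "p = [U] @ X" "chain_typed X L1" "chain_typed X L2"
    and "chain_tgt X L1 = [D] @ Y" "chain_tgt X L2 = [D] @ Y"
    and "chain p ([([], d_arr, Y)] @ map (whisker [U] []) L1) =
      chain p ([([], d_arr, Y)] @ map (whisker [U] []) L2)"
  shows "chain X L1 = chain X L2"
proof -
  have bent_typed: "chain_typed ([U]@X) ([([], d_arr, Y)] @ map (whisker [U] []) L1)"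
    "chain_typed ([U]@X) ([([], d_arr, Y)] @ map (whisker [U] []) L2)"
    using assms(2-5) by (simp_all add: chain_whisker_left[of "[U]" X, simplified])
  have whisker_D: "\<And>L. chain_typed ([U]@X) L \<Longrightarrow>
      chain ([D,U]@X) (map (whisker [D] []) L) = layer_arr ([D], chain ([U]@X) L, [])"
    using chain_whisker[of "[U]@X" _ "[D]" "[]"] by simp
  have bent_eq: "chain ([D,U]@X) ([([D], d_arr, Y)] @ map (whisker [D,U] []) L1) =
      chain ([D,U]@X) ([([D], d_arr, Y)] @ map (whisker [D,U] []) L2)"
    using whisker_D[OF bent_typed(1)] whisker_D[OF bent_typed(2)] assms(1,6) by simp
  have "chain X L1 = chain X ([] @ ([([D], d_arr,
      Y)] @ map (whisker [D,U] []) L1) @ [([],c_arr,X)])"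
    using bend_left_id assms by simp
  also have "\<dots> = chain X ([] @ ([([D], d_arr,
      Y)] @ map (whisker [D,U] []) L2) @ [([],c_arr,X)])"
    by (rule chain_replace_segment)
      (use assms bent_eq in \<open>simp_all add: chain_whisker_left[of
        "[D,U]" X, simplified]\<close>)
  also have "\<dots> = chain X L2" using bend_left_id assms by simp
  finally show ?thesis .
qed

lemma t_cup: "chain [U] [([],t_arr,[U]), ([U],c_arr,[])] =
    chain [U] [([D],s_arr,[]), ([],c_arr,[U])]"
  apply (rule chain_expand[OF t_arr_chain, where i=0], simp_all)
  apply (rule chain_commute_left[where i=2], simp_all add: commute_defs)
  apply (rule chain_commute_left[where i=1], simp_all add: commute_defs)
  apply (rule chain_rewrite[OF zigzag_up_chain, where i=0], simp_all)
  done

lemma cap_s': "chain [U,D,D] [([],d_arr,[D]), ([U],s'_arr,[])] =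
    chain [U,D,D] [([D],d_arr,[]), ([],t_arr,[D])]"
  apply (rule chain_expand[OF s'_arr_chain, where i=1], simp_all)
  apply (rule chain_commute_left[where i=0], simp_all add: commute_defs)
  apply (rule chain_commute_left[where i=1], simp_all add: commute_defs)
  apply (rule chain_rewrite[OF zigzag_up_chain, where i=2], simp_all)
  done

lemma t_cup': "chain [D] [([D],t_arr,[]), ([],c_arr,[D])] =
    chain [D] [([],s'_arr,[U]), ([D],c_arr,[])]"
  apply (rule sym)
  apply (rule chain_expand[OF s'_arr_chain, where i=0], simp_all)
  apply (rule chain_commute_left[where i=2], simp_all add: commute_defs)
  apply (rule chain_commute_left[where i=1], simp_all add: commute_defs)
  apply (rule chain_rewrite[OF zigzag_up_chain, where i=0], simp_all)
  done


lemma s_t_t: "chain [U,U,D] [([D],s_arr,[]), ([],t_arr,[U]), ([U],t_arr,[])] =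
    chain [U,U,D] [([],t_arr,[U]), ([U],t_arr,[]), ([],s_arr,[D])]"
  apply (rule bend_right_inj[where X="[U,U]" and Y="[D,U,U]"], simp_all)
  apply (rule chain_rewrite[OF t_cup, where i=2], simp_all)
  apply (rule chain_commute_left[where i=1], simp_all add: commute_defs)
  apply (rule chain_rewrite[OF t_cup, where i=2], simp_all)
  apply (rule chain_rewrite[OF s_braid_chain, where i=0], simp_all)
  apply (rule sym)
  apply (rule chain_commute_left[where i=2], simp_all add: commute_defs)
  apply (rule chain_rewrite[OF t_cup, where i=1], simp_all)
  apply (rule chain_commute_left[where i=0], simp_all add: commute_defs)
  apply (rule chain_rewrite[OF t_cup, where i=1], simp_all)
  apply (rule chain_commute_left[where i=2], simp_all add: commute_defs)
  done

lemma s'_s': "chain [D,D] [([],s'_arr,[]),([],s'_arr,[])] = chain [D,D] []"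
  apply (rule bend_right_inj[where X="[D]" and Y="[D,D]"], simp_all)
  apply (rule chain_rewrite[OF t_cup'[symmetric], where i=1], simp_all)
  apply (rule bend_left_inj[where X="[D]" and Y="[D,U]"], simp_all)
  apply (rule chain_rewrite[OF cap_s', where i=0], simp_all)
  apply (rule chain_commute_left[where i=1], simp_all add: commute_defs)
  apply (rule chain_rewrite[OF cap_t, where i=0], simp_all)
  apply (rule chain_rewrite[OF t_cup, where i=2], simp_all)
  apply (rule chain_rewrite[OF s_s_chain, where i=1], simp_all)
  apply (rule chain_commute_right[where i=0], simp_all add: commute_defs)
  apply (rule sym)
  apply (rule chain_commute_left[where i=0], simp_all add: commute_defs)
  done

lemma s'_t_t: "chain [U,D,D] [([],s'_arr,[U]), ([D],t_arr,[]), ([],t_arr,[D])] =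
    chain [U,D,D] [([D],t_arr,[]), ([],t_arr,[D]), ([U],s'_arr,[])]"
  apply (rule bend_right_inj[where X="[U,D]" and Y="[D,D,U]"], simp_all)
  apply (rule chain_commute_left[where i=2], simp_all add: commute_defs)
  apply (rule chain_rewrite[OF t_cup, where i=1], simp_all)
  apply (rule chain_commute_left[where i=0], simp_all add: commute_defs)
  apply (rule chain_rewrite[OF t_cup'[symmetric], where i=1], simp_all)
  apply (rule sym)
  apply (rule chain_rewrite[OF t_cup'[symmetric], where i=2], simp_all)
  apply (rule chain_commute_left[where i=1], simp_all add: commute_defs)
  apply (rule chain_rewrite[OF t_cup, where i=2], simp_all)
  apply (rule chain_rewrite[OF s_t_t[symmetric], where i=0], simp_all)
  apply (rule chain_commute_right[where i=2], simp_all add: commute_defs)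
  done

lemma x_t: "chain [U,D] [([D],x_arr,[]),([],t_arr,[])] =
    chain [U,D] [([],c_arr,[]),([],d_arr,[])] \<oplus> chain [U,D] [([],t_arr,[]),([],x_arr,[D])]"
  apply (rule chain_expand[OF t_arr_chain, where i=1], simp_all)
  apply (rule chain_commute_left[where i=0], simp_all add: commute_defs)
  apply (rule chain_rewrite_plus[OF x_s_chain, where i=1], simp_all)
  apply (rule arg_cong2[where f="(\<oplus>)"])
  apply (rule chain_commute_right[where i=0], simp_all add: commute_defs)
  apply (rule chain_commute_right[where i=2], simp_all add: commute_defs)
  apply (rule chain_collapse[OF t_arr_chain, where i=0], simp_all)
  done

lemma s_x: "chain [U,U] [([],s_arr,[]),([],x_arr,[U])] = chain [U,U] [] \<oplus>
    chain [U,U] [([U],x_arr,[]),([],s_arr,[])]"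
  apply (rule chain_replace_at[OF s_s_chain[symmetric], where i=2 and a="[]" and b="[]"], simp_all)
  apply (rule chain_rewrite_plus[OF x_s_chain, where i=1], simp_all)
  apply (rule arg_cong2[where f="(\<oplus>)"])
  apply (rule chain_rewrite[OF s_s_chain, where i=0], simp_all)
  apply (rule chain_rewrite[OF s_s_chain, where i=0], simp_all)
  done


section \<open>Sliding dots through crossings\<close>

lemma xp_arr_0: "xp_arr 0 = id_arr [U]" by (simp add: id_arr_def mpow.simps)
lemma xp_arr_Suc: "xp_arr (Suc n) = x_arr \<odot> xp_arr n" by (simp add: comp_arr_def mpow.simps)
lemma xp_arr_Suc': "xp_arr (Suc n) = xp_arr n \<odot> x_arr"
proof (induct n)
  case 0 thus ?case by (simp add: xp_arr_Suc xp_arr_0 comp_id_arr id_comp_arr)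
next
  case (Suc n)
  have "xp_arr (Suc (Suc n)) = x_arr \<odot> xp_arr (Suc n)" by (rule xp_arr_Suc)
  also have "\<dots> = x_arr \<odot> (xp_arr n \<odot> x_arr)" using Suc by simp
  also have "\<dots> = (x_arr \<odot> xp_arr n) \<odot> x_arr" by (simp add: comp_arr_assoc)
  finally show ?case by (simp add: xp_arr_Suc)
qed


lemma x_t_arr: "(id_arr [D] \<otimes> x_arr) \<odot> t_arr = (c_arr \<odot> d_arr) \<oplus>
    (t_arr \<odot> (x_arr \<otimes> id_arr [D]))"
  using x_t by (simp add: arr_simps)
lemma x_s_arr: "(x_arr \<otimes> id_arr [U]) \<odot> s_arr = id_arr [U,U] \<oplus>
    (s_arr \<odot> (id_arr [U] \<otimes> x_arr))"
  using x_s_chain by (simp add: arr_simps)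
lemma s_x_arr: "s_arr \<odot> (x_arr \<otimes> id_arr [U]) = id_arr [U,U] \<oplus>
    ((id_arr [U] \<otimes> x_arr) \<odot> s_arr)"
  using s_x by (simp add: arr_simps)

text \<open>Sliding \<open>n\<close> dots through a crossing produces, besides the slid diagram, only
  diagrams with fewer than \<open>n\<close> dots; an additive \<open>\<Phi>\<close> that kills all
  of those cannot distinguish the two sides.\<close>

lemma xp_t_Suc: "(id_arr [D] \<otimes> xp_arr (Suc n)) \<odot> t_arr =
    ((id_arr [D] \<otimes> xp_arr n) \<odot> (c_arr \<odot> d_arr)) \<oplus>
    (((id_arr [D] \<otimes> xp_arr n) \<odot> t_arr) \<odot> (x_arr \<otimes> id_arr [D]))"
proof -
  have "(id_arr [D] \<otimes> xp_arr (Suc n)) \<odot> t_arr =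
      (id_arr [D] \<otimes> xp_arr n) \<odot> ((id_arr [D] \<otimes> x_arr) \<odot> t_arr)"
    by (simp add: xp_arr_Suc' id_tensor_comp_arr comp_arr_assoc)
  also have "\<dots> = ((id_arr [D] \<otimes> xp_arr n) \<odot> (c_arr \<odot> d_arr)) \<oplus>
      ((id_arr [D] \<otimes> xp_arr n) \<odot> (t_arr \<odot> (x_arr \<otimes> id_arr [D])))"
    by (simp add: x_t_arr comp_plus_arr)
  finally show ?thesis by (simp add: comp_arr_assoc)
qed

lemma xp_t_modulo: fixes \<Phi> :: "'m arr \<Rightarrow> 'm arr"
  assumes add: "\<And>A B. typed A \<Longrightarrow> typed B \<Longrightarrow> src A = [U,D]
      \<Longrightarrow> tgt A = [D,U] \<Longrightarrow> src B = [U,D]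
    \<Longrightarrow> tgt B = [D,U] \<Longrightarrow>
      \<Phi> (A \<oplus> B) = \<Phi> A \<oplus> \<Phi> B"
  and val: "\<And>A. typed A \<Longrightarrow> src A = [U,D] \<Longrightarrow> tgt A = [D,U]
      \<Longrightarrow> typed (\<Phi> A) \<and> src (\<Phi> A) = P \<and> tgt (\<Phi> A) = Q"
  and z: "\<forall>p q. p + q < n \<longrightarrow> \<Phi> (cx_arr p \<odot> dx_arr q) =
      zero_arr P Q"
  shows "\<Phi> ((id_arr [D] \<otimes> xp_arr n) \<odot> t_arr) =
      \<Phi> (t_arr \<odot> (xp_arr n \<otimes> id_arr [D]))"
  using add val z
proof (induct n arbitrary: \<Phi>)
  case 0 thus ?case by (simp add: xp_arr_0 id_arr_append comp_id_arr id_comp_arr)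
next
  case (Suc n)
  let ?Y = "id_arr [D] \<otimes> xp_arr n"
  have no_dots: "?Y \<odot> (c_arr \<odot> d_arr) = cx_arr n \<odot> dx_arr 0"
    by (simp add: xp_arr_0 id_arr_append comp_id_arr comp_arr_assoc)
  define \<Psi> where "\<Psi> A = \<Phi> (A \<odot> (x_arr \<otimes> id_arr [D]))" for A
  have IH: "\<Psi> (?Y \<odot> t_arr) = \<Psi> (t_arr \<odot> (xp_arr n \<otimes> id_arr [D]))"
  proof (rule Suc.hyps)
    fix A B assume "typed A" "typed B" "src A = [U,D]" "tgt A = [D,U]" "src B = [U,D]"
      "tgt B = [D,U]"
    thus "\<Psi> (A \<oplus> B) = \<Psi> A \<oplus> \<Psi> B" unfolding \<Psi>_def
      using Suc.prems(1) by (simp add: plus_comp_arr)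
  next
    fix A assume "typed A" "src A = [U,D]" "tgt A = [D,U]"
    thus "typed (\<Psi> A) \<and> src (\<Psi> A) = P \<and> tgt (\<Psi> A) = Q" unfolding \<Psi>_def
      using Suc.prems(2) by simp
  next
    show "\<forall>p q. p + q < n \<longrightarrow> \<Psi> (cx_arr p \<odot> dx_arr q) =
        zero_arr P Q"
    proof (intro allI impI)
      fix p q assume "p + q < n"
      hence "\<Phi> (cx_arr p \<odot> dx_arr (Suc q)) = zero_arr P Q" using Suc.prems(3) by simp
      moreover have "cx_arr p \<odot> dx_arr (Suc q) =
          (cx_arr p \<odot> dx_arr q) \<odot> (x_arr \<otimes> id_arr [D])"
        by (simp add: xp_arr_Suc' arr_interchange comp_arr_assoc id_comp_arr)
      ultimately show "\<Psi> (cx_arr p \<odot> dx_arr q) = zero_arr P Q" unfolding \<Psi>_def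
        by simp
    qed
  qed
  have "\<Phi> ((id_arr [D] \<otimes> xp_arr (Suc n)) \<odot> t_arr) =
      \<Phi> (?Y \<odot> (c_arr \<odot> d_arr)) \<oplus> \<Psi> (?Y \<odot> t_arr)"
    unfolding xp_t_Suc \<Psi>_def using Suc.prems(1) by simp
  also have "\<Phi> (?Y \<odot> (c_arr \<odot> d_arr)) = zero_arr P Q" unfolding no_dots
    using Suc.prems(3) by simp
  also have "zero_arr P Q \<oplus> \<Psi> (?Y \<odot> t_arr) = \<Psi> (?Y \<odot> t_arr)"
    unfolding \<Psi>_def using Suc.prems(2)[of
      "(?Y \<odot> t_arr) \<odot> (x_arr \<otimes> id_arr [D])"] by (simp add: zero_plus_arr)
  also have "\<Psi> (?Y \<odot> t_arr) =
      \<Phi> ((t_arr \<odot> (xp_arr n \<otimes> id_arr [D])) \<odot> (x_arr \<otimes> id_arr [D]))"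
      using IH unfolding \<Psi>_def by simp
  also have "(t_arr \<odot> (xp_arr n \<otimes> id_arr [D])) \<odot> (x_arr \<otimes> id_arr [D]) =
      t_arr \<odot> (xp_arr (Suc n) \<otimes> id_arr [D])"
    by (simp add: xp_arr_Suc' arr_interchange comp_arr_assoc id_comp_arr)
  finally show ?case .
qed


lemma xp_s_Suc: "(xp_arr (Suc n) \<otimes> id_arr [U]) \<odot> s_arr =
    (xp_arr n \<otimes> id_arr [U]) \<oplus>
    (((xp_arr n \<otimes> id_arr [U]) \<odot> s_arr) \<odot> (id_arr [U] \<otimes> x_arr))"
proof -
  have "(xp_arr (Suc n) \<otimes> id_arr [U]) \<odot> s_arr =
      (xp_arr n \<otimes> id_arr [U]) \<odot> ((x_arr \<otimes> id_arr [U]) \<odot> s_arr)"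
    by (simp add: xp_arr_Suc' comp_tensor_id_arr comp_arr_assoc)
  also have "\<dots> = (xp_arr n \<otimes> id_arr [U]) \<oplus>
      ((xp_arr n \<otimes> id_arr [U]) \<odot> (s_arr \<odot> (id_arr [U] \<otimes> x_arr)))"
    by (simp add: x_s_arr comp_plus_arr comp_id_arr)
  finally show ?thesis by (simp add: comp_arr_assoc)
qed

lemma xp_s_modulo: fixes \<Phi> :: "'m arr \<Rightarrow> 'm arr"
  assumes add: "\<And>A B. typed A \<Longrightarrow> typed B \<Longrightarrow> src A = [U,U]
      \<Longrightarrow> tgt A = [U,U] \<Longrightarrow> src B = [U,U]
    \<Longrightarrow> tgt B = [U,U] \<Longrightarrow>
      \<Phi> (A \<oplus> B) = \<Phi> A \<oplus> \<Phi> B"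
  and val: "\<And>A. typed A \<Longrightarrow> src A = [U,U] \<Longrightarrow> tgt A = [U,U]
      \<Longrightarrow> typed (\<Phi> A) \<and> src (\<Phi> A) = P \<and> tgt (\<Phi> A) = Q"
  and z: "\<forall>a b. a + b < n \<longrightarrow> \<Phi> (xp_arr a \<otimes> xp_arr b) =
      zero_arr P Q"
  shows "\<Phi> ((xp_arr n \<otimes> id_arr [U]) \<odot> s_arr) =
      \<Phi> (s_arr \<odot> (id_arr [U] \<otimes> xp_arr n))"
  using add val z
proof (induct n arbitrary: \<Phi>)
  case 0 thus ?case by (simp add: xp_arr_0 id_arr_append comp_id_arr id_comp_arr)
next
  case (Suc n)
  let ?Y = "xp_arr n \<otimes> id_arr [U]"
  have no_dots: "?Y = xp_arr n \<otimes> xp_arr 0" by (simp add: xp_arr_0)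
  define \<Psi> where "\<Psi> A = \<Phi> (A \<odot> (id_arr [U] \<otimes> x_arr))" for A
  have IH: "\<Psi> (?Y \<odot> s_arr) = \<Psi> (s_arr \<odot> (id_arr [U] \<otimes> xp_arr n))"
  proof (rule Suc.hyps)
    fix A B assume "typed A" "typed B" "src A = [U,U]" "tgt A = [U,U]" "src B = [U,U]"
      "tgt B = [U,U]"
    thus "\<Psi> (A \<oplus> B) = \<Psi> A \<oplus> \<Psi> B" unfolding \<Psi>_def
      using Suc.prems(1) by (simp add: plus_comp_arr)
  next
    fix A assume "typed A" "src A = [U,U]" "tgt A = [U,U]"
    thus "typed (\<Psi> A) \<and> src (\<Psi> A) = P \<and> tgt (\<Psi> A) = Q" unfolding \<Psi>_def
      using Suc.prems(2) by simp
  next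
    show "\<forall>a b. a + b < n \<longrightarrow> \<Psi> (xp_arr a \<otimes> xp_arr b) =
        zero_arr P Q"
    proof (intro allI impI)
      fix a b assume "a + b < n"
      hence "\<Phi> (xp_arr a \<otimes> xp_arr (Suc b)) = zero_arr P Q" using Suc.prems(3) by simp
      moreover have "xp_arr a \<otimes> xp_arr (Suc b) =
          (xp_arr a \<otimes> xp_arr b) \<odot> (id_arr [U] \<otimes> x_arr)"
        by (simp add: xp_arr_Suc' arr_interchange comp_id_arr)
      ultimately show "\<Psi> (xp_arr a \<otimes> xp_arr b) = zero_arr P Q" unfolding \<Psi>_def
        by simp
    qed
  qed
  have "\<Phi> ((xp_arr (Suc n) \<otimes> id_arr [U]) \<odot> s_arr) = \<Phi> ?Y \<oplus>
      \<Psi> (?Y \<odot> s_arr)"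
    unfolding xp_s_Suc \<Psi>_def using Suc.prems(1) by simp
  also have "\<Phi> ?Y = zero_arr P Q" unfolding no_dots using Suc.prems(3) by simp
  also have "zero_arr P Q \<oplus> \<Psi> (?Y \<odot> s_arr) = \<Psi> (?Y \<odot> s_arr)"
    unfolding \<Psi>_def using Suc.prems(2)[of
      "(?Y \<odot> s_arr) \<odot> (id_arr [U] \<otimes> x_arr)"] by (simp add: zero_plus_arr)
  also have "\<Psi> (?Y \<odot> s_arr) =
      \<Phi> ((s_arr \<odot> (id_arr [U] \<otimes> xp_arr n)) \<odot> (id_arr [U] \<otimes> x_arr))"
      using IH unfolding \<Psi>_def by simp
  also have "(s_arr \<odot> (id_arr [U] \<otimes> xp_arr n)) \<odot> (id_arr [U] \<otimes> x_arr) =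
      s_arr \<odot> (id_arr [U] \<otimes> xp_arr (Suc n))"
    by (simp add: xp_arr_Suc' arr_interchange comp_arr_assoc id_comp_arr)
  finally show ?case .
qed

lemma s_xp_Suc: "s_arr \<odot> (xp_arr (Suc n) \<otimes> id_arr [U]) =
    (xp_arr n \<otimes> id_arr [U]) \<oplus>
    ((id_arr [U] \<otimes> x_arr) \<odot> (s_arr \<odot> (xp_arr n \<otimes> id_arr [U])))"
proof -
  have "s_arr \<odot> (xp_arr (Suc n) \<otimes> id_arr [U]) =
      (s_arr \<odot> (x_arr \<otimes> id_arr [U])) \<odot> (xp_arr n \<otimes> id_arr [U])"
    by (simp add: xp_arr_Suc comp_tensor_id_arr comp_arr_assoc)
  also have "\<dots> = (xp_arr n \<otimes> id_arr [U]) \<oplus>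
      (((id_arr [U] \<otimes> x_arr) \<odot> s_arr) \<odot> (xp_arr n \<otimes> id_arr [U]))"
    by (simp add: s_x_arr plus_comp_arr id_comp_arr)
  finally show ?thesis by (simp add: comp_arr_assoc)
qed

lemma s_xp_modulo: fixes \<Phi> :: "'m arr \<Rightarrow> 'm arr"
  assumes add: "\<And>A B. typed A \<Longrightarrow> typed B \<Longrightarrow> src A = [U,U]
      \<Longrightarrow> tgt A = [U,U] \<Longrightarrow> src B = [U,U]
    \<Longrightarrow> tgt B = [U,U] \<Longrightarrow>
      \<Phi> (A \<oplus> B) = \<Phi> A \<oplus> \<Phi> B"
  and val: "\<And>A. typed A \<Longrightarrow> src A = [U,U] \<Longrightarrow> tgt A = [U,U]
      \<Longrightarrow> typed (\<Phi> A) \<and> src (\<Phi> A) = P \<and> tgt (\<Phi> A) = Q"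
  and z: "\<forall>a b. a + b < n \<longrightarrow> \<Phi> (xp_arr a \<otimes> xp_arr b) =
      zero_arr P Q"
  shows "\<Phi> (s_arr \<odot> (xp_arr n \<otimes> id_arr [U])) =
      \<Phi> ((id_arr [U] \<otimes> xp_arr n) \<odot> s_arr)"
  using add val z
proof (induct n arbitrary: \<Phi>)
  case 0 thus ?case by (simp add: xp_arr_0 id_arr_append comp_id_arr id_comp_arr)
next
  case (Suc n)
  let ?Y = "xp_arr n \<otimes> id_arr [U]"
  have no_dots: "?Y = xp_arr n \<otimes> xp_arr 0" by (simp add: xp_arr_0)
  define \<Psi> where "\<Psi> A = \<Phi> ((id_arr [U] \<otimes> x_arr) \<odot> A)" for A
  have IH: "\<Psi> (s_arr \<odot> ?Y) = \<Psi> ((id_arr [U] \<otimes> xp_arr n) \<odot> s_arr)"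
  proof (rule Suc.hyps)
    fix A B assume "typed A" "typed B" "src A = [U,U]" "tgt A = [U,U]" "src B = [U,U]"
      "tgt B = [U,U]"
    thus "\<Psi> (A \<oplus> B) = \<Psi> A \<oplus> \<Psi> B" unfolding \<Psi>_def
      using Suc.prems(1) by (simp add: comp_plus_arr)
  next
    fix A assume "typed A" "src A = [U,U]" "tgt A = [U,U]"
    thus "typed (\<Psi> A) \<and> src (\<Psi> A) = P \<and> tgt (\<Psi> A) = Q" unfolding \<Psi>_def
      using Suc.prems(2) by simp
  next
    show "\<forall>a b. a + b < n \<longrightarrow> \<Psi> (xp_arr a \<otimes> xp_arr b) =
        zero_arr P Q"
    proof (intro allI impI)
      fix a b assume "a + b < n"
      hence "\<Phi> (xp_arr a \<otimes> xp_arr (Suc b)) = zero_arr P Q" using Suc.prems(3) by simp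
      moreover have "xp_arr a \<otimes> xp_arr (Suc b) =
          (id_arr [U] \<otimes> x_arr) \<odot> (xp_arr a \<otimes> xp_arr b)"
        by (simp add: xp_arr_Suc arr_interchange id_comp_arr)
      ultimately show "\<Psi> (xp_arr a \<otimes> xp_arr b) = zero_arr P Q" unfolding \<Psi>_def
        by simp
    qed
  qed
  have "\<Phi> (s_arr \<odot> (xp_arr (Suc n) \<otimes> id_arr [U])) = \<Phi> ?Y \<oplus>
      \<Psi> (s_arr \<odot> ?Y)"
    unfolding s_xp_Suc \<Psi>_def using Suc.prems(1) by simp
  also have "\<Phi> ?Y = zero_arr P Q" unfolding no_dots using Suc.prems(3) by simp
  also have "zero_arr P Q \<oplus> \<Psi> (s_arr \<odot> ?Y) = \<Psi> (s_arr \<odot> ?Y)"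
    unfolding \<Psi>_def using Suc.prems(2)[of
      "(id_arr [U] \<otimes> x_arr) \<odot> (s_arr \<odot> ?Y)"] by (simp add: zero_plus_arr)
  also have "\<Psi> (s_arr \<odot> ?Y) =
      \<Phi> ((id_arr [U] \<otimes> x_arr) \<odot> ((id_arr [U] \<otimes> xp_arr n) \<odot> s_arr))"
      using IH unfolding \<Psi>_def by simp
  also have "(id_arr [U] \<otimes> x_arr) \<odot> ((id_arr [U] \<otimes> xp_arr n) \<odot> s_arr) =
      (id_arr [U] \<otimes> xp_arr (Suc n)) \<odot> s_arr"
    by (simp add: xp_arr_Suc arr_interchange comp_arr_assoc[symmetric] id_comp_arr)
  finally show ?case .
qed

lemma chain_context_plus: assumes "chain_typed (a @ v @ b) xs" "chain_typed P zs"
  "chain_tgt P zs = a @ u @ b"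
  "typed A" "typed B" "src A = u" "tgt A = v" "src B = u" "tgt B = v"
  shows "chain P (xs @ [(a, A \<oplus> B, b)] @ zs) = chain P (xs @ [(a,A,b)] @ zs) \<oplus>
      chain P (xs @ [(a,B,b)] @ zs)"
proof -
  have h: "\<And>G. typed G \<Longrightarrow> src G = u \<Longrightarrow> tgt G = v
      \<Longrightarrow> chain P (xs @ (a,G,b) # zs) =
    chain (a@v@b) xs \<odot> (layer_arr (a,G,b) \<odot> chain P zs)"
    using chain_context assms(1-3) by simp
  show ?thesis using assms by (simp add: h layer_arr_plus comp_plus_arr plus_comp_arr)
qed

lemma chain_context_typed: assumes "chain_typed (a @ v @ b) xs" "chain_typed P zs"
  "chain_tgt P zs = a @ u @ b"
  "typed A" "src A = u" "tgt A = v"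
  shows "typed (chain P (xs @ [(a,A,b)] @ zs)) \<and> src (chain P (xs @ [(a,A,b)] @ zs)) = P \<and>
      tgt (chain P (xs @ [(a,A,b)] @ zs)) = chain_tgt (a @ v @ b) xs"
  using assms by simp

lemma take_pair: "Suc i < length ls \<Longrightarrow> take (Suc (Suc 0)) (drop i ls) =
    [ls ! i, ls ! Suc i]"
  by (metis Cons_nth_drop_Suc Suc_lessD take_0 take_Suc_Cons)

lemma chain_rewrite_pair: assumes "chain_typed P ls" "Suc i < length ls" "ls ! i = whisker a b ma"
  "ls ! Suc i = whisker a b mb"
  "chain_typed u [ma, mb]" "chain_typed u [mc, md]" "chain_tgt u [mc,md] = chain_tgt u [ma,mb]"
  "chain_tgt P (drop (Suc (Suc i)) ls) = a @ u @ b"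
  "chain P (take i ls @ [(a, chain u [ma,mb], b)] @ drop (Suc (Suc i)) ls) =
      chain P (take i ls @ [(a, chain u [mc,md], b)] @ drop (Suc (Suc i)) ls)"
  "chain P (take i ls @ [whisker a b mc, whisker a b md] @ drop (Suc (Suc i)) ls) = X"
  shows "chain P ls = X"
proof -
  have single_ab: "chain u [ma,mb] = chain u [([], chain u [ma,mb], [])]"
    by (rule chain_single) (use assms(5) in simp)
  have single_cd: "chain u [mc,md] = chain u [([], chain u [mc,md], [])]"
    by (rule chain_single) (use assms(6) in simp)
  have take_ab: "take (Suc (Suc 0)) (drop i ls) = [ls ! i, ls ! Suc i]" using take_pair assms(2) .
  have "chain P ls = chain P (take i ls @ map (whisker a b) [([], chain u [ma,mb],
      [])] @ drop (i + length [ma,mb]) ls)"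
    apply (rule chain_replace_at[OF single_ab _ _ assms(1)])
    using assms take_ab by simp_all
  also have "\<dots> = chain P (take i ls @ [(a, chain u [ma,mb], b)] @ drop (Suc (Suc i)) ls)"
    by simp
  also have "\<dots> = chain P (take i ls @ [(a, chain u [mc,md], b)] @ drop (Suc (Suc i)) ls)"
    by (rule assms(9))
  also have "\<dots> = chain P (take i ls @ map (whisker a b) [mc, md] @ drop (Suc (Suc i)) ls)"
  proof -
    let ?L = "take i ls @ [(a, chain u [mc,md], b)] @ drop (Suc (Suc i)) ls"
    have split: "ls = take i ls @ [ls ! i, ls ! Suc i] @ drop (Suc (Suc i)) ls"
      using list_split_pair assms(2) .
    have typed_ab: "chain_typed P (take i ls @ [whisker a b ma,
        whisker a b mb] @ drop (Suc (Suc i)) ls)"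
      using split assms(1,3,4) by metis
    have typed_cd: "chain_typed P ?L" using typed_ab assms(5,6,7,8)
      by (cases ma, cases mb, cases mc, cases md) auto
    show ?thesis
      apply (rule chain_replace_at[OF single_cd[symmetric] _ _ typed_cd, where i=i and a=a and b=b])
      using assms take_ab by (simp_all add: min_def)
  qed
  finally show ?thesis using assms(10) by simp
qed


lemma xp_t_modulo_context: assumes "chain_typed (a @ [D,U] @ b) xs" "chain_typed P zs"
  "chain_tgt P zs = a @ [U,D] @ b"
  "\<forall>p q. p+q<n \<longrightarrow> chain P (xs @ [(a, cx_arr p \<odot> dx_arr q, b)] @ zs) =
      zero_arr P (chain_tgt (a@[D,U]@b) xs)"
  shows "chain P (xs @ [(a, (id_arr [D] \<otimes> xp_arr n) \<odot> t_arr, b)] @ zs) =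
      chain P (xs @ [(a, t_arr \<odot> (xp_arr n \<otimes> id_arr [D]), b)] @ zs)"
  apply (rule xp_t_modulo[where \<Phi> = "\<lambda>A. chain P (xs @ [(a,A,b)] @ zs)" and P=P
    and Q="chain_tgt (a@[D,U]@b) xs"])
  using chain_context_plus[OF assms(1-3)] chain_context_typed[OF assms(1-3)] assms(4) by simp_all

lemma xp_s_modulo_context: assumes "chain_typed (a @ [U,U] @ b) xs" "chain_typed P zs"
  "chain_tgt P zs = a @ [U,U] @ b"
  "\<forall>a' b'. a'+b'<n \<longrightarrow> chain P (xs @ [(a, xp_arr a' \<otimes> xp_arr b',
      b)] @ zs) = zero_arr P (chain_tgt (a@[U,U]@b) xs)"
  shows "chain P (xs @ [(a, (xp_arr n \<otimes> id_arr [U]) \<odot> s_arr, b)] @ zs) =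
      chain P (xs @ [(a, s_arr \<odot> (id_arr [U] \<otimes> xp_arr n), b)] @ zs)"
  apply (rule xp_s_modulo[where \<Phi> = "\<lambda>A. chain P (xs @ [(a,A,b)] @ zs)" and P=P
    and Q="chain_tgt (a@[U,U]@b) xs"])
  using chain_context_plus[OF assms(1-3)] chain_context_typed[OF assms(1-3)] assms(4) by simp_all

lemma s_xp_modulo_context: assumes "chain_typed (a @ [U,U] @ b) xs" "chain_typed P zs"
  "chain_tgt P zs = a @ [U,U] @ b"
  "\<forall>a' b'. a'+b'<n \<longrightarrow> chain P (xs @ [(a, xp_arr a' \<otimes> xp_arr b',
      b)] @ zs) = zero_arr P (chain_tgt (a@[U,U]@b) xs)"
  shows "chain P (xs @ [(a, s_arr \<odot> (xp_arr n \<otimes> id_arr [U]), b)] @ zs) =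
      chain P (xs @ [(a, (id_arr [U] \<otimes> xp_arr n) \<odot> s_arr, b)] @ zs)"
  apply (rule s_xp_modulo[where \<Phi> = "\<lambda>A. chain P (xs @ [(a,A,b)] @ zs)" and P=P
    and Q="chain_tgt (a@[U,U]@b) xs"])
  using chain_context_plus[OF assms(1-3)] chain_context_typed[OF assms(1-3)] assms(4) by simp_all

lemma chain_tgt_split: "chain_typed P ls \<Longrightarrow> Suc i < length ls
    \<Longrightarrow> chain_tgt P ls = chain_tgt (layer_tgt (ls ! i)) (take i ls)"
  by (metis chain_tgt.simps(2) chain_tgt_append id_take_nth_drop Suc_lessD)

lemma chain_typed_split: assumes "chain_typed P ls" "Suc i < length ls"
  shows "chain_typed (layer_tgt (ls ! i)) (take i ls)" "chain_typed P (drop (Suc (Suc i)) ls)"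
    "chain_tgt P (drop (Suc (Suc i)) ls) = layer_src (ls ! Suc i)"
    "layer_src (ls ! i) = layer_tgt (ls ! Suc i)"
proof -
  have e: "ls = take i ls @ [ls ! i, ls ! Suc i] @ drop (Suc (Suc i)) ls"
    using list_split_pair assms(2) .
  have v: "chain_typed P (take i ls @ [ls ! i, ls ! Suc i] @ drop (Suc (Suc i)) ls)"
    using e assms(1) by simp
  thus "chain_typed (layer_tgt (ls ! i)) (take i ls)" "chain_typed P (drop (Suc (Suc i)) ls)"
    "chain_tgt P (drop (Suc (Suc i)) ls) = layer_src (ls ! Suc i)"
    "layer_src (ls ! i) = layer_tgt (ls ! Suc i)" by auto
qed

lemma xp_t_modulo_at: assumes "chain_typed P ls" "Suc i < length ls"
  "ls ! i = (fst (ls ! Suc i) @ [D], xp_arr n, snd (snd (ls ! Suc i)))"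
    "fst (snd (ls ! Suc i)) = t_arr"
  "\<forall>p q. p + q < n \<longrightarrow> chain P (take i ls @ [(fst (ls ! Suc i),
      cx_arr p \<odot> dx_arr q, snd (snd (ls ! Suc i)))] @ drop (Suc (Suc i)) ls) =
    zero_arr P (chain_tgt P ls)"
  "chain P (take i ls @ [(fst (ls ! Suc i), t_arr, snd (snd (ls ! Suc i))), (fst (ls ! Suc i),
      xp_arr n, [D] @ snd (snd (ls ! Suc i)))] @ drop (Suc (Suc i)) ls) = X"
  shows "chain P ls = X"
proof -
  obtain a b where crossing: "ls ! Suc i = (a, t_arr, b)" using assms(4) by (cases
    "ls ! Suc i") auto
  have dots: "ls ! i = (a @ [D], xp_arr n, b)" using assms(3) crossing by simp
  note parts = chain_typed_split[OF assms(1,2)]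
  have tgt_eq: "chain_tgt P ls = chain_tgt (a @ [D,U] @ b) (take i ls)"
    using chain_tgt_split[OF assms(1,2)] dots by simp
  show ?thesis
    apply (rule chain_rewrite_pair[OF assms(1,2), where a=a and b=b and ma="([D], xp_arr n, [])"
      and mb="([],t_arr,[])"
          and u="[U,D]" and mc="([],t_arr,[])" and md="([],xp_arr n,[D])"])
    using dots crossing apply simp
    using crossing apply simp
    apply simp apply simp apply simp
    using parts crossing apply simp
    using xp_t_modulo_context[of a b "take i ls" P
      "drop (Suc (Suc i)) ls" n] parts dots crossing assms(5) tgt_eq apply (simp add: arr_simps)
    using assms(6) crossing by simp
qed

lemma t_xp_modulo_at: assumes "chain_typed P ls" "Suc i < length ls"
  "fst (snd (ls ! i)) = t_arr" "ls ! Suc i = (fst (ls ! i), xp_arr n, [D] @ snd (snd (ls ! i)))"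
  "\<forall>p q. p + q < n \<longrightarrow> chain P (take i ls @ [(fst (ls ! i),
      cx_arr p \<odot> dx_arr q, snd (snd (ls ! i)))] @ drop (Suc (Suc i)) ls) =
    zero_arr P (chain_tgt P ls)"
  "chain P (take i ls @ [(fst (ls ! i) @ [D], xp_arr n, snd (snd (ls ! i))), (fst (ls ! i), t_arr,
      snd (snd (ls ! i)))] @ drop (Suc (Suc i)) ls) = X"
  shows "chain P ls = X"
proof -
  obtain a b where crossing: "ls ! i = (a, t_arr, b)" using assms(3) by (cases "ls ! i") auto
  have dots: "ls ! Suc i = (a, xp_arr n, [D] @ b)" using assms(4) crossing by simp
  note parts = chain_typed_split[OF assms(1,2)]
  have tgt_eq: "chain_tgt P ls = chain_tgt (a @ [D,U] @ b) (take i ls)"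
    using chain_tgt_split[OF assms(1,2)] crossing by simp
  show ?thesis
    apply (rule chain_rewrite_pair[OF assms(1,2), where a=a and b=b and mb="([], xp_arr n, [D])"
      and ma="([],t_arr,[])"
          and u="[U,D]" and md="([],t_arr,[])" and mc="([D],xp_arr n,[])"])
    using crossing apply simp
    using dots apply simp
    apply simp apply simp apply simp
    using parts dots apply simp
    using xp_t_modulo_context[of a b "take i ls" P
      "drop (Suc (Suc i)) ls" n] parts dots crossing assms(5) tgt_eq apply (simp add: arr_simps)
    using assms(6) crossing by simp
qed

lemma xp_s_modulo_at: assumes "chain_typed P ls" "Suc i < length ls"
  "ls ! i = (fst (ls ! Suc i), xp_arr n, [U] @ snd (snd (ls ! Suc i)))"
    "fst (snd (ls ! Suc i)) = s_arr"
  "\<forall>a' b'. a' + b' < n \<longrightarrow> chain P (take i ls @ [(fst (ls ! Suc i),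
      xp_arr a' \<otimes> xp_arr b', snd (snd (ls ! Suc i)))] @ drop (Suc (Suc i)) ls) =
    zero_arr P (chain_tgt P ls)"
  "chain P (take i ls @ [(fst (ls ! Suc i), s_arr, snd (snd (ls ! Suc i))), (fst (ls ! Suc i) @ [U],
      xp_arr n, snd (snd (ls ! Suc i)))] @ drop (Suc (Suc i)) ls) = X"
  shows "chain P ls = X"
proof -
  obtain a b where crossing: "ls ! Suc i = (a, s_arr, b)" using assms(4) by (cases
    "ls ! Suc i") auto
  have dots: "ls ! i = (a, xp_arr n, [U] @ b)" using assms(3) crossing by simp
  note parts = chain_typed_split[OF assms(1,2)]
  have tgt_eq: "chain_tgt P ls = chain_tgt (a @ [U,U] @ b) (take i ls)"
    using chain_tgt_split[OF assms(1,2)] dots by simp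
  show ?thesis
    apply (rule chain_rewrite_pair[OF assms(1,2), where a=a and b=b and ma="([], xp_arr n, [U])"
      and mb="([],s_arr,[])"
          and u="[U,U]" and mc="([],s_arr,[])" and md="([U],xp_arr n,[])"])
    using dots crossing apply simp
    using crossing apply simp
    apply simp apply simp apply simp
    using parts crossing apply simp
    using xp_s_modulo_context[of a b "take i ls" P
      "drop (Suc (Suc i)) ls" n] parts dots crossing assms(5) tgt_eq apply (simp add: arr_simps)
    using assms(6) crossing by simp
qed

lemma s_xp_modulo_at': assumes "chain_typed P ls" "Suc i < length ls"
  "fst (snd (ls ! i)) = s_arr" "ls ! Suc i = (fst (ls ! i) @ [U], xp_arr n, snd (snd (ls ! i)))"
  "\<forall>a' b'. a' + b' < n \<longrightarrow> chain P (take i ls @ [(fst (ls ! i),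
      xp_arr a' \<otimes> xp_arr b', snd (snd (ls ! i)))] @ drop (Suc (Suc i)) ls) =
    zero_arr P (chain_tgt P ls)"
  "chain P (take i ls @ [(fst (ls ! i), xp_arr n, [U] @ snd (snd (ls ! i))), (fst (ls ! i), s_arr,
      snd (snd (ls ! i)))] @ drop (Suc (Suc i)) ls) = X"
  shows "chain P ls = X"
proof -
  obtain a b where crossing: "ls ! i = (a, s_arr, b)" using assms(3) by (cases "ls ! i") auto
  have dots: "ls ! Suc i = (a @ [U], xp_arr n, b)" using assms(4) crossing by simp
  note parts = chain_typed_split[OF assms(1,2)]
  have tgt_eq: "chain_tgt P ls = chain_tgt (a @ [U,U] @ b) (take i ls)"
    using chain_tgt_split[OF assms(1,2)] crossing by simp
  show ?thesis
    apply (rule chain_rewrite_pair[OF assms(1,2), where a=a and b=b and mb="([U], xp_arr n, [])"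
      and ma="([],s_arr,[])"
          and u="[U,U]" and md="([],s_arr,[])" and mc="([],xp_arr n,[U])"])
    using crossing apply simp
    using dots apply simp
    apply simp apply simp apply simp
    using parts dots apply simp
    using xp_s_modulo_context[of a b "take i ls" P
      "drop (Suc (Suc i)) ls" n] parts dots crossing assms(5) tgt_eq apply (simp add: arr_simps)
    using assms(6) crossing by simp
qed

lemma s_xp_modulo_at: assumes "chain_typed P ls" "Suc i < length ls"
  "fst (snd (ls ! i)) = s_arr" "ls ! Suc i = (fst (ls ! i), xp_arr n, [U] @ snd (snd (ls ! i)))"
  "\<forall>a' b'. a' + b' < n \<longrightarrow> chain P (take i ls @ [(fst (ls ! i),
      xp_arr a' \<otimes> xp_arr b', snd (snd (ls ! i)))] @ drop (Suc (Suc i)) ls) =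
    zero_arr P (chain_tgt P ls)"
  "chain P (take i ls @ [(fst (ls ! i) @ [U], xp_arr n, snd (snd (ls ! i))), (fst (ls ! i), s_arr,
      snd (snd (ls ! i)))] @ drop (Suc (Suc i)) ls) = X"
  shows "chain P ls = X"
proof -
  obtain a b where crossing: "ls ! i = (a, s_arr, b)" using assms(3) by (cases "ls ! i") auto
  have dots: "ls ! Suc i = (a, xp_arr n, [U] @ b)" using assms(4) crossing by simp
  note parts = chain_typed_split[OF assms(1,2)]
  have tgt_eq: "chain_tgt P ls = chain_tgt (a @ [U,U] @ b) (take i ls)"
    using chain_tgt_split[OF assms(1,2)] crossing by simp
  show ?thesis
    apply (rule chain_rewrite_pair[OF assms(1,2), where a=a and b=b and mb="([], xp_arr n, [U])"
      and ma="([],s_arr,[])"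
          and u="[U,U]" and md="([],s_arr,[])" and mc="([U],xp_arr n,[])"])
    using crossing apply simp
    using dots apply simp
    apply simp apply simp apply simp
    using parts dots apply simp
    using s_xp_modulo_context[of a b "take i ls" P
      "drop (Suc (Suc i)) ls" n] parts dots crossing assms(5) tgt_eq apply (simp add: arr_simps)
    using assms(6) crossing by simp
qed

lemma xp_s_modulo_at': assumes "chain_typed P ls" "Suc i < length ls"
  "ls ! i = (fst (ls ! Suc i) @ [U], xp_arr n, snd (snd (ls ! Suc i)))"
    "fst (snd (ls ! Suc i)) = s_arr"
  "\<forall>a' b'. a' + b' < n \<longrightarrow> chain P (take i ls @ [(fst (ls ! Suc i),
      xp_arr a' \<otimes> xp_arr b', snd (snd (ls ! Suc i)))] @ drop (Suc (Suc i)) ls) =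
    zero_arr P (chain_tgt P ls)"
  "chain P (take i ls @ [(fst (ls ! Suc i), s_arr, snd (snd (ls ! Suc i))), (fst (ls ! Suc i),
      xp_arr n, [U] @ snd (snd (ls ! Suc i)))] @ drop (Suc (Suc i)) ls) = X"
  shows "chain P ls = X"
proof -
  obtain a b where crossing: "ls ! Suc i = (a, s_arr, b)" using assms(4) by (cases
    "ls ! Suc i") auto
  have dots: "ls ! i = (a @ [U], xp_arr n, b)" using assms(3) crossing by simp
  note parts = chain_typed_split[OF assms(1,2)]
  have tgt_eq: "chain_tgt P ls = chain_tgt (a @ [U,U] @ b) (take i ls)"
    using chain_tgt_split[OF assms(1,2)] dots by simp
  show ?thesis
    apply (rule chain_rewrite_pair[OF assms(1,2), where a=a and b=b and ma="([U], xp_arr n, [])"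
      and mb="([],s_arr,[])"
          and u="[U,U]" and mc="([],s_arr,[])" and md="([],xp_arr n,[U])"])
    using dots crossing apply simp
    using crossing apply simp
    apply simp apply simp apply simp
    using parts crossing apply simp
    using s_xp_modulo_context[of a b "take i ls" P
      "drop (Suc (Suc i)) ls" n] parts dots crossing assms(5) tgt_eq apply (simp add: arr_simps)
    using assms(6) crossing by simp
qed


section \<open>The inversion relation\<close>

lemma inversion_nonneg: assumes "0 \<le> k" shows
  "(\<forall>r < nat k. e r \<in> Hom C [] [U,D]) \<and>
       add C (cmp C tau (heis_t C s c d))
         (hsum C [U,D] [U,D]
            (\<lambda>r. cmp C (e r) (cmp C d (tns C (mpow C UP x r) (idm C DN)))) (nat k))
         = idm C [U,D] \<and>
       cmp C (heis_t C s c d) tau = idm C [D,U] \<and>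
       (\<forall>r < nat k. cmp C (heis_t C s c d) (e r) = zer C [] [D,U]) \<and>
       (\<forall>r < nat k. cmp C (cmp C d (tns C (mpow C UP x r) (idm C DN))) tau =
         zer C [D,U] []) \<and>
       (\<forall>r < nat k. \<forall>r' < nat k.
          cmp C (cmp C d (tns C (mpow C UP x r) (idm C DN))) (e r') =
            (if r = r' then idm C [] else zer C [] []))"
  using heis assms unfolding heis_rels_def Let_def by (elim conjE) simp

lemma inversion_neg: assumes "k < 0" shows
  "(\<forall>r < nat (-k). f r \<in> Hom C [D,U] []) \<and>
       add C (cmp C (heis_t C s c d) tau)
         (hsum C [D,U] [D,U]
            (\<lambda>r. cmp C (cmp C (tns C (idm C DN) (mpow C UP x r)) c) (f r)) (nat (-k)))
         = idm C [D,U] \<and>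
       cmp C tau (heis_t C s c d) = idm C [U,D] \<and>
       (\<forall>r < nat (-k). cmp C tau (cmp C (tns C (idm C DN) (mpow C UP x r)) c) =
         zer C [] [U,D]) \<and>
       (\<forall>r < nat (-k). cmp C (f r) (heis_t C s c d) = zer C [U,D] []) \<and>
       (\<forall>r < nat (-k). \<forall>r' < nat (-k).
          cmp C (f r) (cmp C (tns C (idm C DN) (mpow C UP x r')) c) =
            (if r = r' then idm C [] else zer C [] []))"
  using heis assms unfolding heis_rels_def Let_def by (elim conjE) simp

lemma typed_e_arr: "0 \<le> k \<Longrightarrow> r < nat k \<Longrightarrow> typed (e_arr r)"
  using inversion_nonneg by (simp add: typed_def)
lemma typed_f_arr: "k < 0 \<Longrightarrow> r < nat (-k) \<Longrightarrow> typed (f_arr r)"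
  using inversion_neg by (simp add: typed_def)

lemma tau_t_plus_sum: "0 \<le> k \<Longrightarrow> (tau_arr \<odot> t_arr) \<oplus>
    sum_arr [U,D] [U,D] (\<lambda>r. e_arr r \<odot> dx_arr r) (nat k) = id_arr [U,D]"
  using inversion_nonneg by (simp add: arr_eq arr_mor_simps sum_arr_def id_arr_def)
lemma t_tau_nonneg: "0 \<le> k \<Longrightarrow> chain [D,U] [([],t_arr,[]),([],tau_arr,[])] =
    chain [D,U] []"
  using inversion_nonneg by (simp add: arr_simps arr_eq arr_mor_simps)
lemma t_e: "0 \<le> k \<Longrightarrow> r < nat k
    \<Longrightarrow> chain [] [([],t_arr,[]),([],e_arr r,[])] = zero_arr [] [D,U]"
  using inversion_nonneg typed_e_arr by (simp add: arr_simps arr_eq arr_mor_simps zero_arr_def)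
lemma dx_tau: assumes "0 \<le> k" "r < nat k" shows
  "chain [D,U] [([],d_arr,[]),([],xp_arr r,[D]),([],tau_arr,[])] = zero_arr [D,U] []"
proof -
  have a: "(d_arr \<odot> (xp_arr r \<otimes> id_arr [D])) \<odot> tau_arr = zero_arr [D,U] []"
    using inversion_nonneg assms by (simp add: arr_eq arr_mor_simps zero_arr_def id_arr_def)
  thus ?thesis by (simp add: arr_simps comp_arr_assoc)
qed
lemma dx_e_same: assumes "0 \<le> k" "r < nat k" shows
  "chain [] [([],d_arr,[]),([],xp_arr r,[D]),([],e_arr r,[])] = chain [] []"
proof -
  have a: "(d_arr \<odot> (xp_arr r \<otimes> id_arr [D])) \<odot> e_arr r = id_arr []"
    using inversion_nonneg assms by (simp add: arr_eq arr_mor_simps id_arr_def)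
  thus ?thesis using typed_e_arr assms by (simp add: arr_simps comp_arr_assoc)
qed
lemma dx_e_other: assumes "0 \<le> k" "r < nat k" "r' < nat k" "r \<noteq> r'" shows
  "chain [] [([],d_arr,[]),([],xp_arr r,[D]),([],e_arr r',[])] = zero_arr [] []"
proof -
  have a: "(d_arr \<odot> (xp_arr r \<otimes> id_arr [D])) \<odot> e_arr r' = zero_arr [] []"
    using inversion_nonneg assms by (simp add: arr_eq arr_mor_simps zero_arr_def id_arr_def)
  thus ?thesis using typed_e_arr assms by (simp add: arr_simps comp_arr_assoc)
qed

lemma t_tau_plus_sum: "k < 0 \<Longrightarrow> (t_arr \<odot> tau_arr) \<oplus>
    sum_arr [D,U] [D,U] (\<lambda>r. cx_arr r \<odot> f_arr r) (nat (-k)) = id_arr [D,U]"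
  using inversion_neg by (simp add: arr_eq arr_mor_simps sum_arr_def id_arr_def)
lemma tau_t_neg: "k < 0 \<Longrightarrow> chain [U,D] [([],tau_arr,[]),([],t_arr,[])] =
    chain [U,D] []"
  using inversion_neg by (simp add: arr_simps arr_eq arr_mor_simps)
lemma tau_cx: "k < 0 \<Longrightarrow> r < nat (-k)
    \<Longrightarrow> chain [] [([],tau_arr,[]),([D],xp_arr r,[]),([],c_arr,[])] =
  zero_arr [] [U,D]"
  using inversion_neg by (simp add: arr_simps arr_eq arr_mor_simps zero_arr_def)
lemma f_t: "k < 0 \<Longrightarrow> r < nat (-k)
    \<Longrightarrow> chain [U,D] [([],f_arr r,[]),([],t_arr,[])] = zero_arr [U,D] []"
  using inversion_neg typed_f_arr by (simp add: arr_simps arr_eq arr_mor_simps zero_arr_def)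
lemma f_cx_same: "k < 0 \<Longrightarrow> r < nat (-k)
    \<Longrightarrow> chain [] [([],f_arr r,[]),([D],xp_arr r,[]),([],c_arr,[])] = chain [] []"
  using inversion_neg typed_f_arr by (simp add: arr_simps arr_eq arr_mor_simps)
lemma f_cx_other: "k < 0 \<Longrightarrow> r < nat (-k) \<Longrightarrow> r' < nat (-k)
    \<Longrightarrow> r \<noteq> r' \<Longrightarrow> chain [] [([],f_arr r,[]),([D],xp_arr
  r',[]),([],c_arr,[])] = zero_arr [] []"
  using inversion_neg typed_f_arr by (simp add: arr_simps arr_eq arr_mor_simps zero_arr_def)

lemma tau_t_nonpos: "k \<le> 0 \<Longrightarrow> chain [U,D] [([],tau_arr,[]),([],t_arr,[])] =
    chain [U,D] []"
proof (cases "k < 0")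
  case True thus ?thesis using tau_t_neg by simp
next
  case False
  assume "k \<le> 0" hence k0: "k = 0" using False by simp
  have "(tau_arr \<odot> t_arr) \<oplus>
      sum_arr [U,D] [U,D] (\<lambda>r. e_arr r \<odot> dx_arr r) (nat k) =
    id_arr [U,D]" using tau_t_plus_sum k0 by simp
  hence "tau_arr \<odot> t_arr = id_arr [U,D]" using k0 by (simp add: sum_arr_0 plus_zero_arr)
  thus ?thesis by (simp add: arr_simps)
qed

lemma layer_dx_arr: "layer_arr (X, dx_arr r, Y) =
    layer_arr (X, d_arr, Y) \<odot> layer_arr (X, xp_arr r, [D] @ Y)"
proof -
  have "layer_arr (X, dx_arr r, Y) = layer_arr (X, d_arr, Y) \<odot> layer_arr (X,
      xp_arr r \<otimes> id_arr [D], Y)" by (rule layer_arr_comp) simp_all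
  also have "layer_arr (X, xp_arr r \<otimes> id_arr [D], Y) = layer_arr (X, xp_arr r, [D] @ Y)"
    by (simp add: layer_arr.simps tensor_arr_assoc id_arr_append)
  finally show ?thesis .
qed
lemma layer_cx_arr: "layer_arr (X, cx_arr r, Y) =
    layer_arr (X @ [D], xp_arr r, Y) \<odot> layer_arr (X, c_arr, Y)"
proof -
  have "layer_arr (X, cx_arr r, Y) = layer_arr (X, id_arr [D] \<otimes> xp_arr r,
      Y) \<odot> layer_arr (X, c_arr, Y)" by (rule layer_arr_comp) simp_all
  also have "layer_arr (X, id_arr [D] \<otimes> xp_arr r, Y) = layer_arr (X @ [D], xp_arr r, Y)"
    by (simp add: layer_arr.simps tensor_arr_assoc id_arr_append[symmetric])
  finally show ?thesis .
qed

text \<open>By the inversion relation, \<open>\<tau> \<circ> t + \<Sum>\<^sub>r e\<^sub>r \<circ> d \<circ>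
  (x\<^sup>r \<otimes> 1) = 1\<close> for \<open>k \<ge> 0\<close> and \<open>t \<circ> \<tau> +
  \<Sum>\<^sub>r (1 \<otimes> x\<^sup>r) \<circ> c \<circ> f\<^sub>r = 1\<close> for \<open>k <
  0\<close>; hence \<open>t\<close> together with the dotted caps (resp. cups) can be cancelled.\<close>

lemma cancel_t_dx_left: assumes "0 \<le> k" "chain_typed p L1" "chain_typed p L2"
  "chain_tgt p L1 = X @ [U,D] @ Y" "chain_tgt p L2 = X @ [U,D] @ Y"
  "chain p ((X,t_arr,Y) # L1) = chain p ((X,t_arr,Y) # L2)"
  "\<forall>r < nat k. chain p ((X,d_arr,Y) # (X, xp_arr r, [D] @ Y) # L1) =
      chain p ((X,d_arr,Y) # (X, xp_arr r, [D] @ Y) # L2)"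
  shows "chain p L1 = chain p L2"
proof -
  let ?S = "\<lambda>n. sum_arr [U,D] [U,D] (\<lambda>r. e_arr r \<odot> dx_arr r) n"
  have typed_S: "\<And>n. n \<le> nat k \<Longrightarrow> typed (?S n)"
    using typed_e_arr[OF assms(1)]
    by (intro typed_sum_arr) auto
  have cancel_S: "\<And>n. n \<le> nat k
      \<Longrightarrow> layer_arr (X, ?S n, Y) \<odot> chain p L1 =
      layer_arr (X, ?S n, Y) \<odot> chain p L2"
  proof -
    fix n show "n \<le> nat k \<Longrightarrow> layer_arr (X, ?S n, Y) \<odot> chain p L1 =
        layer_arr (X, ?S n, Y) \<odot> chain p L2"
    proof (induct n)
      case 0 thus ?case using assms by (simp add: sum_arr_0 layer_arr_zero zero_comp_arr)
    next
      case (Suc n)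
      have typed_n: "typed (e_arr n)" using typed_e_arr[OF assms(1)] Suc by simp
      have v: "typed (?S n)" using typed_S Suc by simp
      have step: "\<And>L. chain_typed p L \<Longrightarrow> chain_tgt p L = X @ [U,D] @ Y
          \<Longrightarrow> layer_arr (X, ?S (Suc n), Y) \<odot> chain p L =
          (layer_arr (X, ?S n, Y) \<odot> chain p L) \<oplus>
            (layer_arr (X, e_arr n, Y) \<odot> chain p ((X,d_arr,Y) # (X, xp_arr n, [D] @ Y) # L))"
        using typed_n v by (simp add: sum_arr_Suc layer_arr_plus layer_arr_comp layer_dx_arr
          chain.simps
          plus_comp_arr comp_arr_assoc)
      show ?case using step[OF assms(2,4)] step[OF assms(3,5)] Suc assms(7) by simp
    qed
  qed
  have decompose: "\<And>L. chain_typed p L \<Longrightarrow> chain_tgt p L = X @ [U,D] @ Y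
      \<Longrightarrow> chain p L =
      (layer_arr (X, tau_arr, Y) \<odot> chain p ((X,t_arr,Y) # L)) \<oplus>
        (layer_arr (X, ?S (nat k), Y) \<odot> chain p L)"
  proof -
    fix L assume a: "chain_typed p L" "chain_tgt p L = X @ [U,D] @ Y"
    have "chain p L = layer_arr (X, id_arr [U,D], Y) \<odot> chain p L" using a
      by (simp add: layer_arr_id id_comp_arr)
    also have "\<dots> = layer_arr (X, (tau_arr \<odot> t_arr) \<oplus>
        ?S (nat k), Y) \<odot> chain p L" using tau_t_plus_sum[OF assms(1)] by simp
    also have "\<dots> = (layer_arr (X, tau_arr, Y) \<odot> chain p ((X,t_arr,Y) # L)) \<oplus>
        (layer_arr (X, ?S (nat k), Y) \<odot> chain p L)"
      using a typed_S[of "nat k"] by (simp add: layer_arr_plus layer_arr_comp chain.simps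
        plus_comp_arr
        comp_arr_assoc)
    finally show "chain p L = (layer_arr (X, tau_arr, Y) \<odot> chain p ((X,t_arr,Y) # L)) \<oplus>
        (layer_arr (X, ?S (nat k), Y) \<odot> chain p L)" .
  qed
  show ?thesis using decompose[OF assms(2,4)] decompose[OF assms(3,5)] assms(6) cancel_S[of "nat k"]
    by simp
qed

lemma cancel_t_cx_right: assumes "k < 0" "p = X @ [D,U] @ Y" "chain_typed p L1" "chain_typed p L2"
  "chain_tgt p L2 = chain_tgt p L1"
  "chain (X@[U,D]@Y) (L1 @ [(X,t_arr,Y)]) = chain (X@[U,D]@Y) (L2 @ [(X,t_arr,Y)])"
  "\<forall>r < nat (-k). chain (X@Y) (L1 @ [(X@[D], xp_arr r, Y), (X, c_arr, Y)]) =
      chain (X@Y) (L2 @ [(X@[D], xp_arr r, Y), (X, c_arr, Y)])"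
  shows "chain p L1 = chain p L2"
proof -
  let ?S = "\<lambda>n. sum_arr [D,U] [D,U] (\<lambda>r. cx_arr r \<odot> f_arr r) n"
  have typed_S: "\<And>n. n \<le> nat (-k) \<Longrightarrow> typed (?S n)"
    using typed_f_arr[OF assms(1)]
    by (intro typed_sum_arr) auto
  have append_t: "\<And>L. chain_typed p L
      \<Longrightarrow> chain (X @ U # D # Y) (L @ [(X,t_arr,Y)]) =
      chain p L \<odot> layer_arr (X, t_arr, Y)"
    using assms(2) by (simp add: chain_append chain.simps comp_id_arr)
  have append_cx: "\<And>L r. chain_typed p L
      \<Longrightarrow> chain (X@Y) (L @ [(X @ [D], xp_arr r, Y),
      (X, c_arr, Y)]) = chain p L \<odot> layer_arr (X, cx_arr r, Y)"
    using assms(2) by (simp add: chain_append chain.simps comp_id_arr layer_cx_arr comp_arr_assoc)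
  have cancel_S: "\<And>n. n \<le> nat (-k)
      \<Longrightarrow> chain p L1 \<odot> layer_arr (X, ?S n, Y) =
      chain p L2 \<odot> layer_arr (X, ?S n, Y)"
  proof -
    fix n show "n \<le> nat (-k) \<Longrightarrow> chain p L1 \<odot> layer_arr (X, ?S n, Y) =
        chain p L2 \<odot> layer_arr (X, ?S n, Y)"
    proof (induct n)
      case 0 thus ?case using assms by (simp add: sum_arr_0 layer_arr_zero comp_zero_arr)
    next
      case (Suc n)
      have typed_n: "typed (f_arr n)" using typed_f_arr[OF assms(1)] Suc by simp
      have v: "typed (?S n)" using typed_S Suc by simp
      have step: "\<And>L. chain_typed p L \<Longrightarrow> chain p L \<odot> layer_arr (X,
          ?S (Suc n), Y) =
          (chain p L \<odot> layer_arr (X, ?S n, Y)) \<oplus>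
            (chain (X@Y) (L @ [(X@[D], xp_arr n, Y), (X, c_arr, Y)]) \<odot> layer_arr (X, f_arr n,
            Y))"
        using typed_n v assms(2) by (simp add: append_cx sum_arr_Suc layer_arr_plus layer_arr_comp
          comp_plus_arr comp_arr_assoc)
      show ?case using step[OF assms(3)] step[OF assms(4)] Suc assms(7) by simp
    qed
  qed
  have decompose: "\<And>L. chain_typed p L \<Longrightarrow> chain p L =
      (chain (X@[U,D]@Y) (L @ [(X,t_arr,Y)]) \<odot> layer_arr (X, tau_arr, Y)) \<oplus>
        (chain p L \<odot> layer_arr (X, ?S (nat (-k)), Y))"
  proof -
    fix L assume a: "chain_typed p L"
    have "chain p L = chain p L \<odot> layer_arr (X, id_arr [D,U], Y)" using a assms(2)
      by (simp add: layer_arr_id comp_id_arr)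
    also have "\<dots> = chain p L \<odot> layer_arr (X, (t_arr \<odot> tau_arr) \<oplus>
        ?S (nat (-k)), Y)" using t_tau_plus_sum[OF assms(1)] by simp
    also have "\<dots> = (chain (X@[U,D]@Y) (L @ [(X,t_arr,Y)]) \<odot> layer_arr (X, tau_arr,
        Y)) \<oplus> (chain p L \<odot> layer_arr (X, ?S (nat (-k)), Y))"
      using a typed_S[of "nat (-k)"] assms(2)
        by (simp add: append_t layer_arr_plus layer_arr_comp comp_plus_arr comp_arr_assoc)
    finally show "chain p L = (chain (X@[U,D]@Y) (L @ [(X,t_arr,Y)]) \<odot> layer_arr (X, tau_arr,
        Y)) \<oplus> (chain p L \<odot> layer_arr (X, ?S (nat (-k)), Y))" .
  qed
  show ?thesis using decompose[OF assms(3)] decompose[OF assms(4)] assms(6) cancel_S[of "nat (-k)"]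
    by simp
qed

lemma cancel_t_right: assumes "0 \<le> k" "p = X @ [D,U] @ Y" "chain_typed p L1" "chain_typed p L2"
  "chain (X@[U,D]@Y) (L1 @ [(X,t_arr,Y)]) = chain (X@[U,D]@Y) (L2 @ [(X,t_arr,Y)])"
  shows "chain p L1 = chain p L2"
proof -
  have inverse: "t_arr \<odot> tau_arr = id_arr [D,U]" using t_tau_nonneg[OF assms(1)]
    by (simp add: arr_simps)
  have decompose: "\<And>L. chain_typed p L \<Longrightarrow> chain p L =
      chain (X@[U,D]@Y) (L @ [(X,t_arr,Y)]) \<odot> layer_arr (X, tau_arr, Y)"
  proof -
    fix L assume a: "chain_typed p L"
    have "chain p L = chain p L \<odot> layer_arr (X, t_arr \<odot> tau_arr, Y)"
      using a assms(2) inverse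
      by (simp add: layer_arr_id comp_id_arr)
    also have "\<dots> = chain (X@[U,D]@Y) (L @ [(X,t_arr,Y)]) \<odot> layer_arr (X, tau_arr, Y)"
      using a assms(2) by (simp add: chain_append chain.simps comp_id_arr layer_arr_comp
        comp_arr_assoc)
    finally show "chain p L = chain (X@[U,D]@Y) (L @ [(X,t_arr,Y)]) \<odot> layer_arr (X, tau_arr,
        Y)" .
  qed
  show ?thesis using decompose[OF assms(3)] decompose[OF assms(4)] assms(5) by simp
qed

lemma cancel_t_left: assumes "k \<le> 0" "chain_typed p L1" "chain_typed p L2"
  "chain_tgt p L1 = X @ [U,D] @ Y" "chain_tgt p L2 = X @ [U,D] @ Y"
  "chain p ((X,t_arr,Y) # L1) = chain p ((X,t_arr,Y) # L2)"
  shows "chain p L1 = chain p L2"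
proof -
  have inverse: "tau_arr \<odot> t_arr = id_arr [U,D]" using tau_t_nonpos[OF assms(1)]
    by (simp add: arr_simps)
  have decompose: "\<And>L. chain_typed p L \<Longrightarrow> chain_tgt p L = X @ [U,D] @ Y
      \<Longrightarrow> chain p L = layer_arr (X, tau_arr, Y) \<odot> chain p ((X,t_arr,Y) # L)"
  proof -
    fix L assume a: "chain_typed p L" "chain_tgt p L = X @ [U,D] @ Y"
    have "chain p L = layer_arr (X, tau_arr \<odot> t_arr, Y) \<odot> chain p L" using a inverse
      by (simp add: layer_arr_id id_comp_arr)
    also have "\<dots> = layer_arr (X, tau_arr, Y) \<odot> chain p ((X,t_arr,Y) # L)"
      using a by (simp add: chain.simps layer_arr_comp comp_arr_assoc)
    finally show "chain p L = layer_arr (X, tau_arr, Y) \<odot> chain p ((X,t_arr,Y) # L)" .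
  qed
  show ?thesis using decompose[OF assms(2,4)] decompose[OF assms(3,5)] assms(6) by simp
qed


lemma xp_arr_Suc_chain: "xp_arr (Suc n) = chain [U] [([],x_arr,[]),([],xp_arr n,[])]"
  by (simp add: xp_arr_Suc arr_simps)
lemma xp_arr_Suc_chain': "xp_arr (Suc n) = chain [U] [([],xp_arr n,[]),([],x_arr,[])]"
  by (simp add: xp_arr_Suc' arr_simps)
lemma cx_dx_chain: "cx_arr p \<odot> dx_arr q =
    chain [U,D] [([D],xp_arr p,[]),([],c_arr,[]),([],d_arr,[]),([],xp_arr q,[D])]"
  by (simp add: arr_simps comp_arr_assoc)
lemma xp_tensor_xp_chain: "xp_arr a \<otimes> xp_arr b =
    chain [U,U] [([],xp_arr a,[U]),([U],xp_arr b,[])]"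
  by (simp add: arr_simps arr_interchange id_comp_arr comp_id_arr)

section \<open>The rightward relations and their mates\<close>

definition rightward_zigzag :: "'m arr \<Rightarrow> 'm arr \<Rightarrow> bool" where
  "rightward_zigzag dd cc \<longleftrightarrow>
    chain [U] [([U],dd,[]),([],cc,[U])] = chain [U] [] \<and>
    chain [D] [([],dd,[D]),([D],cc,[])] = chain [D] []"

definition d'_s_relation :: "'m arr \<Rightarrow> bool" where
  "d'_s_relation dd \<longleftrightarrow>
    chain [D,U,U] [([],dd,[U]),([D],s_arr,[])] = chain [D,U,U] [([U],dd,[]),([],tau_arr,[U])]"

definition d'_s'_relation :: "'m arr \<Rightarrow> bool" where
  "d'_s'_relation dd \<longleftrightarrow>
    chain [D,D,U] [([D],dd,[]),([],s'_arr,[U])] = chain [D,D,U] [([],dd,[D]),([D],tau_arr,[])]"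

definition s_c'_relation :: "'m arr \<Rightarrow> bool" where
  "s_c'_relation cc \<longleftrightarrow>
    chain [U] [([],s_arr,[D]),([U],cc,[])] = chain [U] [([U],tau_arr,[]),([],cc,[U])]"

definition s'_c'_relation :: "'m arr \<Rightarrow> bool" where
  "s'_c'_relation cc \<longleftrightarrow>
    chain [D] [([U],s'_arr,[]),([],cc,[D])] = chain [D] [([],tau_arr,[D]),([D],cc,[])]"

text \<open>Once \<open>dd\<close> and \<open>cc\<close> satisfy the zigzag identities, a relation involving
  the cap \<open>dd\<close> and the relation obtained from it by bending strands with
  \<open>cc\<close> are equivalent.\<close>

context
  fixes dd cc :: "'m arr"
  assumes typed_dd[simp]: "typed dd" and typed_cc[simp]: "typed cc"
    and src_tgt_dd[simp]: "src dd = [D,U]" "tgt dd = []"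
    and src_tgt_cc[simp]: "src cc = []" "tgt cc = [U,D]"
    and zigzag: "rightward_zigzag dd cc"
begin

lemma zigzag_up_dd_cc: "chain [U] [([U],dd,[]),([],cc,[U])] = chain [U] []"
  using zigzag unfolding rightward_zigzag_def by simp

lemma zigzag_down_dd_cc: "chain [D] [([],dd,[D]),([D],cc,[])] = chain [D] []"
  using zigzag unfolding rightward_zigzag_def by simp

lemma s_c'_relation_if_d'_s_relation:
  assumes "d'_s_relation dd" shows "s_c'_relation cc"
proof -
  note rel = assms[unfolded d'_s_relation_def]
  show ?thesis unfolding s_c'_relation_def
    apply (rule chain_replace_at[OF zigzag_up_dd_cc[symmetric], where i=0 and a="[]" and b="[U,D]"],
        simp_all)
    apply (rule chain_commute_left[where i=1], simp_all add: commute_defs)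
    apply (rule chain_rewrite[OF rel, where i=0], simp_all)
    apply (rule chain_commute_left[where i=2], simp_all add: commute_defs)
    apply (rule chain_commute_left[where i=1], simp_all add: commute_defs)
    apply (rule chain_rewrite[OF zigzag_down_dd_cc, where i=0], simp_all)
    done
qed

lemma d'_s_relation_if_s_c'_relation:
  assumes "s_c'_relation cc" shows "d'_s_relation dd"
proof -
  note rel = assms[unfolded s_c'_relation_def]
  show ?thesis unfolding d'_s_relation_def
    apply (rule chain_replace_at[OF zigzag_up_dd_cc[symmetric], where i=2 and a="[D,U]" and b="[]"],
        simp_all)
    apply (rule chain_commute_left[where i=1], simp_all add: commute_defs)
    apply (rule chain_commute_left[where i=0], simp_all add: commute_defs)
    apply (rule chain_rewrite[OF rel, where i=2], simp_all)
    apply (rule chain_commute_left[where i=1], simp_all add: commute_defs)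
    apply (rule chain_rewrite[OF zigzag_down_dd_cc, where i=2], simp_all)
    done
qed

lemma s'_c'_relation_if_d'_s'_relation:
  assumes "d'_s'_relation dd" shows "s'_c'_relation cc"
proof -
  note rel = assms[unfolded d'_s'_relation_def]
  show ?thesis unfolding s'_c'_relation_def
    apply (rule chain_replace_at[OF zigzag_down_dd_cc[symmetric], where i=0 and a="[U,D]"
      and b="[]"],
        simp_all)
    apply (rule chain_commute_right[where i=1], simp_all add: commute_defs)
    apply (rule chain_rewrite[OF rel, where i=0], simp_all)
    apply (rule chain_commute_right[where i=2], simp_all add: commute_defs)
    apply (rule chain_commute_right[where i=1], simp_all add: commute_defs)
    apply (rule chain_rewrite[OF zigzag_up_dd_cc, where i=0], simp_all)
    done
qed

lemma d'_s'_relation_if_s'_c'_relation: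
  assumes "s'_c'_relation cc" shows "d'_s'_relation dd"
proof -
  note rel = assms[unfolded s'_c'_relation_def]
  show ?thesis unfolding d'_s'_relation_def
    apply (rule chain_replace_at[OF zigzag_down_dd_cc[symmetric], where i=2 and a="[]"
      and b="[D,U]"],
        simp_all)
    apply (rule chain_commute_right[where i=1], simp_all add: commute_defs)
    apply (rule chain_rewrite[OF rel, where i=2], simp_all)
    apply (rule chain_commute_right[where i=0], simp_all add: commute_defs)
    apply (rule chain_commute_right[where i=1], simp_all add: commute_defs)
    apply (rule chain_rewrite[OF zigzag_up_dd_cc, where i=2], simp_all)
    done
qed

end

lemma d'_arr_nonneg: "0 \<le> k \<Longrightarrow> d'_arr =
    chain [D,U] [([],d_arr,[]),([],xp_arr (nat k),[D]),([],tau_arr,[])]"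
  by (simp add: heis_d'_def arr_simps arr_eq arr_mor_simps)
lemma c'_arr_nonpos: "\<not> 0 < k \<Longrightarrow> c'_arr =
    chain [] [([],tau_arr,[]),([D],xp_arr (nat (-k)),[]),([],c_arr,[])]"
  by (simp add: heis_c'_def arr_simps arr_eq arr_mor_simps)
lemma c'_arr_pos: "0 < k \<Longrightarrow> c'_arr = smult_arr (-1) (e_arr (nat k - 1))"
  by (simp add: heis_c'_def smult_arr_def)

section \<open>The case \<open>k > 0\<close>\<close>

context assumes kp: "0 < k"
begin

lemma k_nonneg: "0 \<le> k" using kp by simp
lemma nat_k_pos[simp]: "0 < nat k" using kp by simp
lemma typed_e_arr_pos[simp]: "r < nat k \<Longrightarrow> typed (e_arr r)" using typed_e_arr kp
  by simp
lemma typed_e_arr_last[simp]: "typed (e_arr (nat k - Suc 0))" using kp by simp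
lemma nat_k_minus_one[simp]: "nat k - Suc 0 < nat k" using kp by simp
lemma t_xp_e_last: assumes "b < nat k"
  shows "chain [] [([],t_arr,[]),([],xp_arr b,[D]),([],e_arr (nat k - 1),[])] = zero_arr [] [D,U]"
  apply (rule t_xp_modulo_at[where i=0 and n=b], simp_all)
  subgoal
    apply (intro allI impI)
    subgoal for p q
      apply (rule chain_expand[OF cx_dx_chain, where i=0], simp_all)
      apply (rule chain_rewrite_zero[OF dx_e_other[OF k_nonneg, of q "nat k - 1"], where i=2])
      using assms by simp_all
    done
  apply (rule chain_rewrite_zero[OF t_e[OF k_nonneg], where i=1])
  by simp_all

lemma s_c'_e_after_t_t:
  "chain [U] [([],t_arr,[U]),([U],t_arr,[]),([],s_arr,[D]),([U],e_arr (nat k - 1),[])] =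
   chain [U] [([],t_arr,[U]),([],e_arr (nat k - 1),[U])]"
  apply (rule chain_rewrite[OF s_t_t[symmetric], where i=0], simp_all)
  apply (rule chain_rewrite_zero[OF t_e[OF k_nonneg], where i=2], simp_all)
  apply (rule sym)
  apply (rule chain_rewrite_zero[OF t_e[OF k_nonneg], where i=0], simp_all)
  done

lemma s_c'_e_after_dx_t: "j < nat k \<Longrightarrow>
  chain [U] [([],d_arr,[U]),([],xp_arr j,[D,U]),([U],t_arr,[]),([],s_arr,[D]),([U],e_arr (nat k -
    1),[])] =
  chain [U] [([],d_arr,[U]),([],xp_arr j,[D,U]),([],e_arr (nat k - 1),[U])]"
  apply (rule chain_commute_left[where i=1], simp_all add: commute_defs)
  apply (rule chain_rewrite[OF cap_t, where i=0], simp_all)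
  apply (rule xp_s_modulo_at[where i=2 and n=j], simp_all)
  subgoal
    apply (intro allI impI)
    subgoal for a b
      apply (rule chain_expand[OF xp_tensor_xp_chain, where i=2], simp_all)
      apply (rule chain_commute_left[where i=2], simp_all add: commute_defs)
      apply (rule chain_commute_left[where i=3], simp_all add: commute_defs)
      apply (rule chain_rewrite[OF cap_t[symmetric], where i=0], simp_all)
      apply (rule chain_rewrite_zero[OF t_xp_e_last[of b], where i=1])
      by simp_all
    done
  apply (rule chain_rewrite[OF s_s_chain, where i=1], simp_all)
  apply (cases "j = nat k - 1")
  subgoal
    apply (rule chain_rewrite[OF dx_e_same[OF k_nonneg, of j], where i=0])
    apply simp_all
    apply (rule sym)
    apply (rule chain_rewrite[OF dx_e_same[OF k_nonneg, of j], where i=0])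
    by simp_all
  subgoal
    apply (rule chain_rewrite_zero[OF dx_e_other[OF k_nonneg, of j "nat k - 1"], where i=0])
    apply simp_all
    apply (rule sym)
    apply (rule chain_rewrite_zero[OF dx_e_other[OF k_nonneg, of j "nat k - 1"], where i=0])
    by simp_all
  done

lemma s_c'_e_after_t:
  "chain [U] [([U],t_arr,[]),([],s_arr,[D]),([U],e_arr (nat k - 1),[])] =
   chain [U] [([U],t_arr,[]),([U],tau_arr,[]),([],e_arr (nat k - 1),[U])]"
  apply (rule sym)
  apply (rule chain_rewrite[OF t_tau_nonneg[OF k_nonneg], where i=0], simp_all)
  apply (rule sym)
  apply (rule cancel_t_dx_left[OF k_nonneg, where X="[]" and Y="[U]"])
  using s_c'_e_after_t_t s_c'_e_after_dx_t by simp_all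

lemma s_c'_e_after_dx: "j < nat k \<Longrightarrow>
  chain [U] [([U],d_arr,[]),([U],xp_arr j,[D]),([],s_arr,[D]),([U],e_arr (nat k - 1),[])] =
  chain [U] [([U],d_arr,[]),([U],xp_arr j,[D]),([U],tau_arr,[]),([],e_arr (nat k - 1),[U])]"
  apply (rule xp_s_modulo_at'[where i=1 and n=j], simp_all)
  subgoal
    apply (intro allI impI)
    subgoal for a b
      apply (rule chain_expand[OF xp_tensor_xp_chain, where i=1], simp_all)
      apply (rule chain_commute_left[where i=1], simp_all add: commute_defs)
      apply (rule chain_commute_left[where i=2], simp_all add: commute_defs)
      apply (rule chain_rewrite_zero[OF dx_e_other[OF k_nonneg, of b "nat k - 1"], where i=0])
      by simp_all
    done
  apply (rule chain_rewrite[OF cap_t[symmetric], where i=0], simp_all)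
  apply (rule chain_commute_left[where i=2], simp_all add: commute_defs)
  apply (rule chain_rewrite_zero[OF t_e[OF k_nonneg], where i=1], simp_all)
  apply (rule sym)
  apply (rule chain_rewrite_zero[OF dx_tau[OF k_nonneg], where i=0], simp_all)
  done

lemma s_c'_e:
  "chain [U] [([],s_arr,[D]),([U],e_arr (nat k - 1),[])] =
   chain [U] [([U],tau_arr,[]),([],e_arr (nat k - 1),[U])]"
  apply (rule cancel_t_dx_left[OF k_nonneg, where X="[U]" and Y="[]"])
  using s_c'_e_after_t s_c'_e_after_dx by simp_all

lemma s'_c'_e_after_t_t:
  "chain [D] [([D],t_arr,[]),([],t_arr,[D]),([U],s'_arr,[]),([],e_arr (nat k - 1),[D])] =
   chain [D] [([D],t_arr,[]),([D],e_arr (nat k - 1),[])]"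
  apply (rule chain_rewrite[OF s'_t_t[symmetric], where i=0], simp_all)
  apply (rule chain_rewrite_zero[OF t_e[OF k_nonneg], where i=2], simp_all)
  apply (rule sym)
  apply (rule chain_rewrite_zero[OF t_e[OF k_nonneg], where i=0], simp_all)
  done

lemma s'_c'_e_after_dx_t: "j < nat k \<Longrightarrow>
  chain [D] [([D],d_arr,[]),([D],xp_arr j,[D]),([],t_arr,[D]),([U],s'_arr,[]),([],e_arr (nat k -
    1),[D])] =
  chain [D] [([D],d_arr,[]),([D],xp_arr j,[D]),([D],e_arr (nat k - 1),[])]"
  apply (rule xp_t_modulo_at[where i=1 and n=j], simp_all)
  subgoal
    apply (intro allI impI)
    subgoal for p q
      apply (rule chain_expand[OF cx_dx_chain, where i=1], simp_all)
      apply (rule chain_commute_left[where i=4], simp_all add: commute_defs)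
      apply (rule chain_rewrite[OF cap_s', where i=3], simp_all)
      apply (rule chain_rewrite_zero[OF t_xp_e_last[of q], where i=4])
      by simp_all
    done
  apply (rule chain_rewrite[OF cap_s'[symmetric], where i=0], simp_all)
  apply (rule chain_commute_right[where i=1], simp_all add: commute_defs)
  apply (rule chain_rewrite[OF s'_s', where i=2], simp_all)
  apply (cases "j = nat k - 1")
  subgoal
    apply (rule chain_rewrite[OF dx_e_same[OF k_nonneg, of j], where i=0])
    apply simp_all
    apply (rule sym)
    apply (rule chain_rewrite[OF dx_e_same[OF k_nonneg, of j], where i=0])
    by simp_all
  subgoal
    apply (rule chain_rewrite_zero[OF dx_e_other[OF k_nonneg, of j "nat k - 1"], where i=0])
    apply simp_all
    apply (rule sym)
    apply (rule chain_rewrite_zero[OF dx_e_other[OF k_nonneg, of j "nat k - 1"], where i=0])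
    by simp_all
  done

lemma s'_c'_e_after_t:
  "chain [D] [([],t_arr,[D]),([U],s'_arr,[]),([],e_arr (nat k - 1),[D])] =
   chain [D] [([],t_arr,[D]),([],tau_arr,[D]),([D],e_arr (nat k - 1),[])]"
  apply (rule sym)
  apply (rule chain_rewrite[OF t_tau_nonneg[OF k_nonneg], where i=0], simp_all)
  apply (rule sym)
  apply (rule cancel_t_dx_left[OF k_nonneg, where X="[D]" and Y="[]"])
  using s'_c'_e_after_t_t s'_c'_e_after_dx_t by simp_all

lemma s'_c'_e_after_dx: "j < nat k \<Longrightarrow>
  chain [D] [([],d_arr,[D]),([],xp_arr j,[D,D]),([U],s'_arr,[]),([],e_arr (nat k - 1),[D])] =
  chain [D] [([],d_arr,[D]),([],xp_arr j,[D,D]),([],tau_arr,[D]),([D],e_arr (nat k - 1),[])]"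
  apply (rule chain_commute_left[where i=1], simp_all add: commute_defs)
  apply (rule chain_rewrite[OF cap_s', where i=0], simp_all)
  apply (rule chain_rewrite_zero[OF t_xp_e_last[of j], where i=1], simp_all)
  apply (rule sym)
  apply (rule chain_rewrite_zero[OF dx_tau[OF k_nonneg], where i=0], simp_all)
  done

lemma s'_c'_e:
  "chain [D] [([U],s'_arr,[]),([],e_arr (nat k - 1),[D])] =
   chain [D] [([],tau_arr,[D]),([D],e_arr (nat k - 1),[])]"
  apply (rule cancel_t_dx_left[OF k_nonneg, where X="[]" and Y="[D]"])
  using s'_c'_e_after_t s'_c'_e_after_dx by simp_all

lemma typed_d'_arr_pos[simp]: "typed d'_arr" by (subst d'_arr_nonneg[OF k_nonneg]) simp
lemma typed_c'_arr_pos[simp]: "typed c'_arr" by (subst c'_arr_pos[OF kp]) simp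

lemma d_xp_s_x_e_zero: "nat k = Suc k0 \<Longrightarrow>
  chain [U] [([U],d_arr,[]),([U],xp_arr k0,[D]),([],s_arr,[D]),([],x_arr,[U,D]),([U],e_arr k0,[])] =
  zero_arr [U] [U]"
  apply (rule xp_s_modulo_at'[where i=1 and n=k0], simp_all)
  subgoal
    apply (intro allI impI)
    subgoal for a b
      apply (rule chain_expand[OF xp_tensor_xp_chain, where i=1], simp_all)
      apply (rule chain_commute_left[where i=1], simp_all add: commute_defs)
      apply (rule chain_commute_left[where i=3], simp_all add: commute_defs)
      apply (rule chain_commute_left[where i=2], simp_all add: commute_defs)
      apply (rule chain_rewrite_zero[OF dx_e_other[OF k_nonneg, of b k0], where i=0])
      by simp_all
    done
  apply (rule chain_collapse[OF xp_arr_Suc_chain', where i=2], simp_all)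
  apply (rule chain_rewrite[OF cap_t[symmetric], where i=0], simp_all)
  apply (rule chain_commute_left[where i=2], simp_all add: commute_defs)
  apply (rule chain_rewrite_zero[OF t_e[OF k_nonneg], where i=1])
  by simp_all

lemma zigzag_up'_pos: "chain [U] [([U],d'_arr,[]),([],c'_arr,[U])] = chain [U] []"
proof -
  obtain k0 where k0: "nat k = Suc k0" using nat_k_pos by (metis gr0_implies_Suc)
  then have e_last: "e_arr (nat k - 1) = e_arr k0" and k0_less: "k0 < nat k" by simp_all
  have [simp]: "typed (e_arr k0)" using k0 by simp
  have d'_expand: "d'_arr = chain [D,U] [([],d_arr,[]),([],xp_arr (Suc k0),[D]),([],tau_arr,[])]"
    using d'_arr_nonneg[OF k_nonneg] k0 by simp
  have s_e: "chain [U] [([],s_arr,[D]),([U],e_arr k0,[])] =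
      chain [U] [([U],tau_arr,[]),([],e_arr k0,[U])]"
    using s_c'_e e_last by simp
  let ?W = "chain [U] [([U],d_arr,[]),([U],xp_arr (Suc k0),[D]),([],s_arr,[D]),([U],e_arr k0,[])]"
  let ?V = "chain [U] [([U],d_arr,[]),([U],xp_arr k0,[D]),([],s_arr,[D]),([],x_arr,[U,D]),([U],e_arr
      k0,[])]"
  have c'_e: "chain [U] [([U],d'_arr,[]),([],c'_arr,[U])] =
      smult_arr (-1) (chain [U] [([U],d'_arr,[]),([],e_arr k0,[U])])"
    by (rule chain_smult_at[where i=1]) (use c'_arr_pos[OF kp] e_last in simp_all)
  have W: "chain [U] [([U],d'_arr,[]),([],e_arr k0,[U])] = ?W"
    apply (rule chain_expand[OF d'_expand, where i=0], simp_all)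
    apply (rule chain_rewrite[OF s_e[symmetric], where i=2], simp_all)
    done
  txt \<open>Sliding the last dot of \<open>?W\<close> through the crossing gives \<open>?V = 1 + ?W\<close>,
    while \<open>?V = 0\<close>; hence \<open>?W = -1\<close>.\<close>
  have "?V = chain [U] [] \<oplus> ?W"
    apply (rule chain_rewrite_plus[OF s_x, where i=2], simp_all)
    apply (rule arg_cong2[where f="(\<oplus>)"])
    apply (rule chain_rewrite[OF dx_e_same[OF k_nonneg k0_less], where i=0], simp_all)
    apply (rule chain_collapse[OF xp_arr_Suc_chain', where i=1], simp_all)
    done
  with d_xp_s_x_e_zero[OF k0] have "smult_arr (-1) ?W = chain [U] []"
    by (intro smult_minus_one_arr) simp_all
  then show ?thesis using c'_e W by simp
qed

lemma zigzag_down'_pos: "chain [D] [([],d'_arr,[D]),([D],c'_arr,[])] = chain [D] []"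
proof -
  obtain k0 where k0: "nat k = Suc k0" using nat_k_pos by (metis gr0_implies_Suc)
  then have e_last: "e_arr (nat k - 1) = e_arr k0" and k0_less: "k0 < nat k" by simp_all
  have [simp]: "typed (e_arr k0)" using k0 by simp
  have d'_expand: "d'_arr = chain [D,U] [([],d_arr,[]),([],xp_arr (Suc k0),[D]),([],tau_arr,[])]"
    using d'_arr_nonneg[OF k_nonneg] k0 by simp
  have s'_e: "chain [D] [([U],s'_arr,[]),([],e_arr k0,[D])] =
      chain [D] [([],tau_arr,[D]),([D],e_arr k0,[])]"
    using s'_c'_e e_last by simp
  have t_xp_e: "chain [] [([],t_arr,[]),([],xp_arr k0,[D]),([],e_arr k0,[])] = zero_arr [] [D,U]"
    using t_xp_e_last[OF k0_less] e_last by simp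
  let ?W = "chain [D] [([D],d_arr,[]),([],t_arr,[D]),([],xp_arr (Suc k0),[D,D]),([],e_arr k0,[D])]"
  let ?V = "chain [D] [([D],d_arr,[]),([D],x_arr,[D]),([],t_arr,[D]),([],xp_arr k0,[D,D]),([],e_arr
      k0,[D])]"
  have c'_e: "chain [D] [([],d'_arr,[D]),([D],c'_arr,[])] =
      smult_arr (-1) (chain [D] [([],d'_arr,[D]),([D],e_arr k0,[])])"
    by (rule chain_smult_at[where i=1]) (use c'_arr_pos[OF kp] e_last in simp_all)
  have W: "chain [D] [([],d'_arr,[D]),([D],e_arr k0,[])] = ?W"
    apply (rule chain_expand[OF d'_expand, where i=0], simp_all)
    apply (rule chain_rewrite[OF s'_e[symmetric], where i=2], simp_all)
    apply (rule chain_commute_left[where i=1], simp_all add: commute_defs)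
    apply (rule chain_rewrite[OF cap_s', where i=0], simp_all)
    done
  have "?V = chain [D] [] \<oplus> ?W"
    apply (rule chain_rewrite_plus[OF x_t, where i=1], simp_all)
    apply (rule arg_cong2[where f="(\<oplus>)"])
    apply (rule chain_rewrite[OF dx_e_same[OF k_nonneg k0_less], where i=2], simp_all)
    apply (rule chain_rewrite[OF zigzag_down_chain, where i=0], simp_all)
    apply (rule chain_collapse[OF xp_arr_Suc_chain, where i=2], simp_all)
    done
  moreover have "?V = zero_arr [D] [D]"
    by (rule chain_rewrite_zero[OF t_xp_e, where i=2]) simp_all
  ultimately have "smult_arr (-1) ?W = chain [D] []"
    by (intro smult_minus_one_arr) simp_all
  then show ?thesis using c'_e W by simp
qed

lemma rightward_zigzag_pos: "rightward_zigzag d'_arr c'_arr"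
  using zigzag_up'_pos zigzag_down'_pos unfolding rightward_zigzag_def by simp

lemma s_c'_pos: "s_c'_relation c'_arr"
  unfolding s_c'_relation_def c'_arr_pos[OF kp]
  apply (rule chain_smult_at[where i=1], simp_all, simp)
  apply (rule sym)
  apply (rule chain_smult_at[where i=1], simp_all, simp)
  using s_c'_e by simp

lemma s'_c'_pos: "s'_c'_relation c'_arr"
  unfolding s'_c'_relation_def c'_arr_pos[OF kp]
  apply (rule chain_smult_at[where i=1], simp_all, simp)
  apply (rule sym)
  apply (rule chain_smult_at[where i=1], simp_all, simp)
  using s'_c'_e by simp

lemma d'_s_pos: "d'_s_relation d'_arr"
  by (rule d'_s_relation_if_s_c'_relation[OF _ _ _ _ _ _ rightward_zigzag_pos s_c'_pos]) simp_all

lemma d'_s'_pos: "d'_s'_relation d'_arr"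
  by (rule d'_s'_relation_if_s'_c'_relation[OF _ _ _ _ _ _ rightward_zigzag_pos s'_c'_pos]) simp_all

end

section \<open>The case \<open>k < 0\<close>\<close>

context assumes kn: "k < 0"
begin

lemma typed_f_arr_neg[simp]: "r < nat (-k) \<Longrightarrow> typed (f_arr r)" using typed_f_arr kn
  by simp
lemma typed_f_arr_last[simp]: "typed (f_arr (nat (-k) - Suc 0))" using kn by simp
lemma nat_minus_k_pos[simp]: "0 < nat (-k)" using kn by simp
lemma f_xp_t_last: assumes "a < nat (-k)"
  shows "chain [U,D] [([],f_arr (nat (-k) - 1),[]),([D],xp_arr a,[]),([],t_arr,[])] =
      zero_arr [U,D] []"
  apply (rule xp_t_modulo_at[where i=1 and n=a], simp_all)
  subgoal
    apply (intro allI impI)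
    subgoal for p q
      apply (rule chain_expand[OF cx_dx_chain, where i=1], simp_all)
      apply (rule chain_rewrite_zero[OF f_cx_other[OF kn, of "nat (-k) - 1" p], where i=0])
      using assms by simp_all
    done
  apply (rule chain_rewrite_zero[OF f_t[OF kn], where i=0])
  using kn by simp_all

lemma d'_s_f_after_t_t:
  "chain [U,U,D] [([],f_arr (nat (-k) - 1),[U]),([D],s_arr,[]),([],t_arr,[U]),([U],t_arr,[])] =
   chain [U,U,D] [([U],f_arr (nat (-k) - 1),[]),([U],t_arr,[])]"
  apply (rule chain_rewrite[OF s_t_t, where i=1], simp_all)
  apply (rule chain_rewrite_zero[OF f_t[OF kn], where i=0], simp_all add: kn)
  apply (rule sym)
  apply (rule chain_rewrite_zero[OF f_t[OF kn], where i=0], simp_all add: kn)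
  done

lemma d'_s_f_after_t_cx: "j < nat (-k) \<Longrightarrow>
  chain [U] [([],f_arr (nat (-k) - 1),[U]),([D],s_arr,[]),([],t_arr,[U]),([U,D],xp_arr
    j,[]),([U],c_arr,[])] =
  chain [U] [([U],f_arr (nat (-k) - 1),[]),([U,D],xp_arr j,[]),([U],c_arr,[])]"
  apply (rule chain_commute_left[where i=2], simp_all add: commute_defs)
  apply (rule chain_rewrite[OF t_cup, where i=3], simp_all)
  apply (rule s_xp_modulo_at'[where i=1 and n=j], simp_all)
  subgoal
    apply (intro allI impI)
    subgoal for a b
      apply (rule chain_expand[OF xp_tensor_xp_chain, where i=1], simp_all)
      apply (rule chain_rewrite[OF t_cup[symmetric], where i=3], simp_all)
      apply (rule chain_commute_right[where i=2], simp_all add: commute_defs)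
      apply (rule chain_rewrite_zero[OF f_xp_t_last[of a], where i=0], simp_all)
      done
    done
  apply (rule chain_rewrite[OF s_s_chain, where i=2], simp_all)
  apply (cases "j = nat (-k) - 1")
  subgoal
    apply (rule chain_rewrite[OF f_cx_same[OF kn, of j], where i=0])
    apply simp_all
    apply (rule sym)
    apply (rule chain_rewrite[OF f_cx_same[OF kn, of j], where i=0])
    by simp_all
  subgoal
    apply (rule chain_rewrite_zero[OF f_cx_other[OF kn, of "nat (-k) - 1" j], where i=0])
    apply simp_all
    apply (rule sym)
    apply (rule chain_rewrite_zero[OF f_cx_other[OF kn, of "nat (-k) - 1" j], where i=0])
    by simp_all
  done

lemma d'_s_f_after_t:
  "chain [U,D,U] [([],f_arr (nat (-k) - 1),[U]),([D],s_arr,[]),([],t_arr,[U])] =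
   chain [U,D,U] [([U],f_arr (nat (-k) - 1),[]),([],tau_arr,[U]),([],t_arr,[U])]"
  apply (rule sym)
  apply (rule chain_rewrite[OF tau_t_neg[OF kn], where i=1], simp_all)
  apply (rule sym)
  apply (rule cancel_t_cx_right[where X="[U]" and Y="[]"])
  using d'_s_f_after_t_t d'_s_f_after_t_cx by (simp_all add: kn)

lemma d'_s_f_after_cx: "j < nat (-k) \<Longrightarrow>
  chain [U] [([],f_arr (nat (-k) - 1),[U]),([D],s_arr,[]),([D],xp_arr j,[U]),([],c_arr,[U])] =
  chain [U] [([U],f_arr (nat (-k) - 1),[]),([],tau_arr,[U]),([D],xp_arr j,[U]),([],c_arr,[U])]"
  apply (rule s_xp_modulo_at[where i=1 and n=j], simp_all)
  subgoal
    apply (intro allI impI)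
    subgoal for a b
      apply (rule chain_expand[OF xp_tensor_xp_chain, where i=1], simp_all)
      apply (rule chain_commute_right[where i=2], simp_all add: commute_defs)
      apply (rule chain_rewrite_zero[OF f_cx_other[OF kn, of "nat (-k) - 1" a], where i=0])
      by simp_all
    done
  apply (rule chain_rewrite[OF t_cup[symmetric], where i=2], simp_all)
  apply (rule chain_commute_right[where i=1], simp_all add: commute_defs)
  apply (rule chain_rewrite_zero[OF f_t[OF kn], where i=0], simp_all add: kn)
  apply (rule sym)
  apply (rule chain_rewrite_zero[OF tau_cx[OF kn], where i=1], simp_all)
  done

lemma d'_s_f:
  "chain [D,U,U] [([],f_arr (nat (-k) - 1),[U]),([D],s_arr,[])] =
      chain [D,U,U] [([U],f_arr (nat (-k) - 1),[]),([],tau_arr,[U])]"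
  apply (rule cancel_t_cx_right[where X="[]" and Y="[U]"])
  using d'_s_f_after_t d'_s_f_after_cx by (simp_all add: kn)

lemma d'_s'_f_after_t_t:
  "chain [U,D,D] [([D],f_arr (nat (-k) - 1),[]),([],s'_arr,[U]),([D],t_arr,[]),([],t_arr,[D])] =
   chain [U,D,D] [([],f_arr (nat (-k) - 1),[D]),([],t_arr,[D])]"
  apply (rule chain_rewrite[OF s'_t_t, where i=1], simp_all)
  apply (rule chain_rewrite_zero[OF f_t[OF kn], where i=0], simp_all add: kn)
  apply (rule sym)
  apply (rule chain_rewrite_zero[OF f_t[OF kn], where i=0], simp_all add: kn)
  done

lemma d'_s'_f_after_t_cx: "j < nat (-k) \<Longrightarrow>
  chain [D] [([D],f_arr (nat (-k) - 1),[]),([],s'_arr,[U]),([D],t_arr,[]),([D],xp_arr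
    j,[D]),([],c_arr,[D])] =
  chain [D] [([],f_arr (nat (-k) - 1),[D]),([D],xp_arr j,[D]),([],c_arr,[D])]"
  apply (rule t_xp_modulo_at[where i=2 and n=j], simp_all)
  subgoal
    apply (intro allI impI)
    subgoal for p q
      apply (rule chain_expand[OF cx_dx_chain, where i=2], simp_all)
      apply (rule chain_commute_left[where i=1], simp_all add: commute_defs)
      apply (rule chain_rewrite[OF t_cup'[symmetric], where i=2], simp_all)
      apply (rule chain_rewrite_zero[OF f_xp_t_last[of p], where i=0], simp_all)
      done
    done
  apply (rule chain_rewrite[OF t_cup', where i=3], simp_all)
  apply (rule chain_commute_left[where i=1], simp_all add: commute_defs)
  apply (rule chain_rewrite[OF s'_s', where i=2], simp_all)
  apply (cases "j = nat (-k) - 1")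
  subgoal
    apply (rule chain_rewrite[OF f_cx_same[OF kn, of j], where i=0])
    apply simp_all
    apply (rule sym)
    apply (rule chain_rewrite[OF f_cx_same[OF kn, of j], where i=0])
    by simp_all
  subgoal
    apply (rule chain_rewrite_zero[OF f_cx_other[OF kn, of "nat (-k) - 1" j], where i=0])
    apply simp_all
    apply (rule sym)
    apply (rule chain_rewrite_zero[OF f_cx_other[OF kn, of "nat (-k) - 1" j], where i=0])
    by simp_all
  done

lemma d'_s'_f_after_t:
  "chain [D,U,D] [([D],f_arr (nat (-k) - 1),[]),([],s'_arr,[U]),([D],t_arr,[])] =
   chain [D,U,D] [([],f_arr (nat (-k) - 1),[D]),([D],tau_arr,[]),([D],t_arr,[])]"
  apply (rule sym)
  apply (rule chain_rewrite[OF tau_t_neg[OF kn], where i=1], simp_all)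
  apply (rule sym)
  apply (rule cancel_t_cx_right[where X="[]" and Y="[D]"])
  using d'_s'_f_after_t_t d'_s'_f_after_t_cx by (simp_all add: kn)

lemma d'_s'_f_after_cx: "j < nat (-k) \<Longrightarrow>
  chain [D] [([D],f_arr (nat (-k) - 1),[]),([],s'_arr,[U]),([D,D],xp_arr j,[]),([D],c_arr,[])] =
  chain [D] [([],f_arr (nat (-k) - 1),[D]),([D],tau_arr,[]),([D,D],xp_arr j,[]),([D],c_arr,[])]"
  apply (rule chain_commute_left[where i=1], simp_all add: commute_defs)
  apply (rule chain_rewrite[OF t_cup'[symmetric], where i=2], simp_all)
  apply (rule chain_rewrite_zero[OF f_xp_t_last[of j], where i=0], simp_all)
  apply (rule sym)
  apply (rule chain_rewrite_zero[OF tau_cx[OF kn], where i=1], simp_all)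
  done

lemma d'_s'_f:
  "chain [D,D,U] [([D],f_arr (nat (-k) - 1),[]),([],s'_arr,[U])] =
      chain [D,D,U] [([],f_arr (nat (-k) - 1),[D]),([D],tau_arr,[])]"
  apply (rule cancel_t_cx_right[where X="[D]" and Y="[]"])
  using d'_s'_f_after_t d'_s'_f_after_cx by (simp_all add: kn)

lemma c'_arr_neg: "c'_arr = chain [] [([],tau_arr,[]),([D],xp_arr (nat (-k)),[]),([],c_arr,[])]"
  using kn by (simp add: heis_c'_def arr_simps arr_eq arr_mor_simps)
lemma d'_arr_neg: "d'_arr = f_arr (nat (-k) - 1)"
  using kn by (simp add: heis_d'_def)
lemma typed_c'_arr_neg[simp]: "typed c'_arr" by (subst c'_arr_neg) simp
lemma typed_d'_arr_neg[simp]: "typed d'_arr" by (subst d'_arr_neg) simp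

lemma zigzag_up'_neg: "chain [U] [([U],d'_arr,[]),([],c'_arr,[U])] = chain [U] []"
proof -
  obtain l0 where l0: "nat (-k) = Suc l0" using nat_minus_k_pos by (metis gr0_implies_Suc)
  have f_last: "f_arr (nat (-k) - 1) = f_arr l0" using l0 by simp
  have c'_expand: "c'_arr = chain [] [([],tau_arr,[]),([D],xp_arr (Suc l0),[]),([],c_arr,[])]"
    using c'_arr_neg l0 by simp
  have d'_s_l0: "chain [D,U,U] [([],f_arr l0,[U]),([D],s_arr,[])] =
      chain [D,U,U] [([U],f_arr l0,[]),([],tau_arr,[U])]"
    using d'_s_f f_last by simp
  have typed_f_l0[simp]: "typed (f_arr l0)" using l0 by simp
  have l0_less: "l0 < nat (-k)" using l0 by simp
  show ?thesis
    unfolding d'_arr_neg f_last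
    apply (rule chain_expand[OF c'_expand, where i=1], simp_all)
    apply (rule chain_rewrite[OF d'_s_l0[symmetric], where i=0], simp_all)
    apply (rule chain_expand[OF xp_arr_Suc_chain, where i=2], simp_all)
    apply (rule chain_rewrite_plus[OF s_x, where i=1], simp_all)
    apply (rule plus_zero_arr_eqI[where p="[U]" and q="[U]"])
    subgoal
      apply (rule chain_rewrite[OF f_cx_same[OF kn l0_less], where i=0])
      by simp_all
    subgoal
      apply (rule s_xp_modulo_at[where i=2 and n=l0], simp_all)
      subgoal
        apply (intro allI impI)
        subgoal for a b
          apply (rule chain_expand[OF xp_tensor_xp_chain, where i=2], simp_all)
          apply (rule chain_commute_right[where i=3], simp_all add: commute_defs)
          apply (rule chain_commute_right[where i=1], simp_all add: commute_defs)
          apply (rule chain_commute_right[where i=2], simp_all add: commute_defs)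
          apply (rule chain_rewrite_zero[OF f_cx_other[OF kn l0_less, of a], where i=0])
          using l0 by simp_all
        done
      apply (rule chain_rewrite[OF t_cup[symmetric], where i=3], simp_all)
      apply (rule chain_commute_right[where i=2], simp_all add: commute_defs)
      apply (rule chain_commute_right[where i=1], simp_all add: commute_defs)
      apply (rule chain_rewrite_zero[OF f_t[OF kn l0_less], where i=0])
      by simp_all
    by simp_all
qed

lemma zigzag_down'_neg: "chain [D] [([],d'_arr,[D]),([D],c'_arr,[])] = chain [D] []"
proof -
  obtain l0 where l0: "nat (-k) = Suc l0" using nat_minus_k_pos by (metis gr0_implies_Suc)
  have f_last: "f_arr (nat (-k) - 1) = f_arr l0" using l0 by simp
  have c'_expand: "c'_arr = chain [] [([],tau_arr,[]),([D],xp_arr (Suc l0),[]),([],c_arr,[])]"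
    using c'_arr_neg l0 by simp
  have d'_s'_l0: "chain [D,D,U] [([D],f_arr l0,[]),([],s'_arr,[U])] =
      chain [D,D,U] [([],f_arr l0,[D]),([D],tau_arr,[])]"
    using d'_s'_f f_last by simp
  have typed_f_l0[simp]: "typed (f_arr l0)" using l0 by simp
  have l0_less: "l0 < nat (-k)" using l0 by simp
  have f_xp_t: "chain [U,D] [([],f_arr l0,[]),([D],xp_arr l0,[]),([],t_arr,[])] = zero_arr [U,D] []"
    using f_xp_t_last[OF l0_less] f_last by simp
  show ?thesis
    unfolding d'_arr_neg f_last
    apply (rule chain_expand[OF c'_expand, where i=1], simp_all)
    apply (rule chain_rewrite[OF d'_s'_l0[symmetric], where i=0], simp_all)
    apply (rule chain_commute_left[where i=1], simp_all add: commute_defs)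
    apply (rule chain_rewrite[OF t_cup'[symmetric], where i=2], simp_all)
    apply (rule chain_expand[OF xp_arr_Suc_chain', where i=1], simp_all)
    apply (rule chain_rewrite_plus[OF x_t, where i=2], simp_all)
    apply (rule plus_zero_arr_eqI[where p="[D]" and q="[D]"])
    subgoal
      apply (rule chain_rewrite[OF f_cx_same[OF kn l0_less], where i=0], simp_all)
      apply (rule chain_rewrite[OF zigzag_down_chain, where i=0])
      by simp_all
    subgoal
      apply (rule chain_rewrite_zero[OF f_xp_t, where i=0])
      by simp_all
    by simp_all
qed


lemma rightward_zigzag_neg: "rightward_zigzag d'_arr c'_arr"
  using zigzag_up'_neg zigzag_down'_neg unfolding rightward_zigzag_def by simp

lemma d'_s_neg: "d'_s_relation d'_arr"
  using d'_s_f unfolding d'_s_relation_def d'_arr_neg .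

lemma d'_s'_neg: "d'_s'_relation d'_arr"
  using d'_s'_f unfolding d'_s'_relation_def d'_arr_neg .

lemma s_c'_neg: "s_c'_relation c'_arr"
  by (rule s_c'_relation_if_d'_s_relation[OF _ _ _ _ _ _ rightward_zigzag_neg d'_s_neg]) simp_all

lemma s'_c'_neg: "s'_c'_relation c'_arr"
  by (rule s'_c'_relation_if_d'_s'_relation[OF _ _ _ _ _ _ rightward_zigzag_neg d'_s'_neg]) simp_all

end

section \<open>The case \<open>k = 0\<close>\<close>

context assumes kz: "k = 0"
begin

lemma k_zero_nonneg: "0 \<le> k" using kz by simp
lemma k_zero_nonpos: "k \<le> 0" using kz by simp
lemma d'_arr_zero: "d'_arr = chain [D,U] [([],d_arr,[]),([],tau_arr,[])]"
  using d'_arr_nonneg[OF k_zero_nonneg] kz by (simp add: arr_simps xp_arr_0)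
lemma c'_arr_zero: "c'_arr = chain [] [([],tau_arr,[]),([],c_arr,[])]"
  using c'_arr_nonpos kz by (simp add: arr_simps xp_arr_0)
lemma typed_d'_arr_zero[simp]: "typed d'_arr" by (subst d'_arr_zero) simp
lemma typed_c'_arr_zero[simp]: "typed c'_arr" by (subst c'_arr_zero) simp

lemma d'_s_zero: "d'_s_relation d'_arr"
  unfolding d'_s_relation_def
  apply (rule cancel_t_right[OF k_zero_nonneg, where X="[]" and Y="[U]"], simp_all)
  apply (rule cancel_t_right[OF k_zero_nonneg, where X="[U]" and Y="[]"], simp_all)
  apply (rule chain_rewrite[OF s_t_t, where i=1], simp_all)
  apply (rule chain_expand[OF d'_arr_zero, where i=0], simp_all)
  apply (rule chain_rewrite[OF tau_t_nonpos[OF k_zero_nonpos], where i=1], simp_all)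
  apply (rule chain_rewrite[OF cap_t, where i=0], simp_all)
  apply (rule chain_rewrite[OF s_s_chain, where i=1], simp_all)
  apply (rule sym)
  apply (rule chain_rewrite[OF tau_t_nonpos[OF k_zero_nonpos], where i=1], simp_all)
  apply (rule chain_expand[OF d'_arr_zero, where i=0], simp_all)
  apply (rule chain_rewrite[OF tau_t_nonpos[OF k_zero_nonpos], where i=1], simp_all)
  done

lemma s_c'_zero: "s_c'_relation c'_arr"
  unfolding s_c'_relation_def
  apply (rule cancel_t_left[OF k_zero_nonpos, where X="[U]" and Y="[]"], simp_all)
  apply (rule cancel_t_left[OF k_zero_nonpos, where X="[]" and Y="[U]"], simp_all)
  apply (rule chain_rewrite[OF s_t_t[symmetric], where i=0], simp_all)
  apply (rule chain_expand[OF c'_arr_zero, where i=3], simp_all)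
  apply (rule chain_rewrite[OF t_tau_nonneg[OF k_zero_nonneg], where i=2], simp_all)
  apply (rule chain_rewrite[OF t_cup, where i=1], simp_all)
  apply (rule chain_rewrite[OF s_s_chain, where i=0], simp_all)
  apply (rule sym)
  apply (rule chain_rewrite[OF t_tau_nonneg[OF k_zero_nonneg], where i=1], simp_all)
  apply (rule chain_expand[OF c'_arr_zero, where i=1], simp_all)
  apply (rule chain_rewrite[OF t_tau_nonneg[OF k_zero_nonneg], where i=0], simp_all)
  done

lemma d'_s'_zero: "d'_s'_relation d'_arr"
  unfolding d'_s'_relation_def
  apply (rule cancel_t_right[OF k_zero_nonneg, where X="[D]" and Y="[]"], simp_all)
  apply (rule cancel_t_right[OF k_zero_nonneg, where X="[]" and Y="[D]"], simp_all)
  apply (rule chain_rewrite[OF s'_t_t, where i=1], simp_all)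
  apply (rule chain_expand[OF d'_arr_zero, where i=0], simp_all)
  apply (rule chain_rewrite[OF tau_t_nonpos[OF k_zero_nonpos], where i=1], simp_all)
  apply (rule chain_rewrite[OF cap_s'[symmetric], where i=0], simp_all)
  apply (rule chain_rewrite[OF s'_s', where i=1], simp_all)
  apply (rule sym)
  apply (rule chain_rewrite[OF tau_t_nonpos[OF k_zero_nonpos], where i=1], simp_all)
  apply (rule chain_expand[OF d'_arr_zero, where i=0], simp_all)
  apply (rule chain_rewrite[OF tau_t_nonpos[OF k_zero_nonpos], where i=1], simp_all)
  done

lemma s'_c'_zero: "s'_c'_relation c'_arr"
  unfolding s'_c'_relation_def
  apply (rule cancel_t_left[OF k_zero_nonpos, where X="[]" and Y="[D]"], simp_all)
  apply (rule cancel_t_left[OF k_zero_nonpos, where X="[D]" and Y="[]"], simp_all)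
  apply (rule chain_rewrite[OF s'_t_t[symmetric], where i=0], simp_all)
  apply (rule chain_expand[OF c'_arr_zero, where i=3], simp_all)
  apply (rule chain_rewrite[OF t_tau_nonneg[OF k_zero_nonneg], where i=2], simp_all)
  apply (rule chain_rewrite[OF t_cup', where i=1], simp_all)
  apply (rule chain_rewrite[OF s'_s', where i=0], simp_all)
  apply (rule sym)
  apply (rule chain_rewrite[OF t_tau_nonneg[OF k_zero_nonneg], where i=1], simp_all)
  apply (rule chain_expand[OF c'_arr_zero, where i=1], simp_all)
  apply (rule chain_rewrite[OF t_tau_nonneg[OF k_zero_nonneg], where i=0], simp_all)
  done

end

lemma rightward_relations:
  "typed d'_arr \<and> typed c'_arr \<and> d'_s_relation d'_arr \<and> d'_s'_relation d'_arr \<and>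
    s_c'_relation c'_arr \<and> s'_c'_relation c'_arr"
  using typed_d'_arr_neg typed_c'_arr_neg d'_s_neg d'_s'_neg s_c'_neg s'_c'_neg
    typed_d'_arr_zero typed_c'_arr_zero d'_s_zero d'_s'_zero s_c'_zero s'_c'_zero
    typed_d'_arr_pos typed_c'_arr_pos d'_s_pos d'_s'_pos s_c'_pos s'_c'_pos
  by (cases k "0::int" rule: linorder_cases) simp_all

end

theorem lemma2p6:
  fixes C :: "('k::comm_ring_1, 'm) lmc" and k :: int
    and x s c d tau :: 'm and e f :: "nat \<Rightarrow> 'm"
  assumes "slmc C"
    and "heis_rels C k x s c d tau e f"
  shows "cmp C (tns C (heis_d' C k x d tau f) (idm C UP)) (tns C (idm C DN) s) =
           cmp C (tns C (idm C UP) (heis_d' C k x d tau f)) (tns C tau (idm C UP)) \<and>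
         cmp C (tns C (idm C DN) (heis_d' C k x d tau f)) (tns C (heis_s' C s c d) (idm C UP)) =
           cmp C (tns C (heis_d' C k x d tau f) (idm C DN)) (tns C (idm C DN) tau) \<and>
         cmp C (tns C s (idm C DN)) (tns C (idm C UP) (heis_c' C k x c tau e)) =
           cmp C (tns C (idm C UP) tau) (tns C (heis_c' C k x c tau e) (idm C UP)) \<and>
         cmp C (tns C (idm C UP) (heis_s' C s c d)) (tns C (heis_c' C k x c tau e) (idm C DN)) =
           cmp C (tns C tau (idm C DN)) (tns C (idm C DN) (heis_c' C k x c tau e))"
proof -
  interpret heis_cat C k x s c d tau e f
    using assms by (simp add: heis_cat_def slmc_cat_def heis_cat_axioms_def)
  have "typed d'_arr" "typed c'_arr"
    and "d'_s_relation d'_arr" "d'_s'_relation d'_arr" "s_c'_relation c'_arr"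
      "s'_c'_relation c'_arr"
    using rightward_relations by simp_all
  then show ?thesis
    unfolding d'_s_relation_def d'_s'_relation_def s_c'_relation_def s'_c'_relation_def
    by (simp add: arr_simps arr_eq arr_mor_simps)
qed

end
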